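(* Let $\mathbf{C}$ be a category with pullbacks and coequalizers of equivalence relations, and let $U:\mathbf{C}\to\mathbf{Sets}$ be a faithful functor preserving pullbacks and coequalizers of equivalence relations. Let $\mathcal{P}$ be a class of regular epimorphisms in $\mathbf{C}$ such that: (a) $\mathcal{P}$ is pullback stable; (b) whenever $X\overset{f}{\underset{g}{\rightrightarrows}}Y\xrightarrow{h}Z$ is a coequalizer diagram in $\mathbf{C}$ whose $U$-image is exact (i.e. is a coequalizer diagram in $\mathbf{Sets}$ and $(Uf,Ug)$ is the kernel pair of $Uh$), and $f,g\in\mathcal{P}$, then $h\in\mathcal{P}$. Then every morphism in $\mathcal{P}$ is an effective descent morphism in $\mathbf{C}$.
   Context: For a morphism $p:E\to B$ in a category $\mathbf{C}$ with pullbacks, a descent data for $p$ is a triple $(C,\gamma,\xi)$ with $\gamma:C\to E$, $\xi:E\times_BC\to C$ (pullback of $p$ and $p\gamma$, projections $\pi_1,\pi_2$) such that $\gamma\xi=\pi_1$, $\xi\langle\gamma,1_C\rangle=1_C$, $\xi\circ(E\times_B\xi)=\xi\circ(E\times_B\pi_2)$; a morphism $(C,\gamma,\xi)\to(C',\gamma',\xi')$ is $f:C\to C'$ with $\gamma'f=\gamma$ and $f\xi=\xi'\circ(E\times_Bf)$. This gives the category $\mathrm{Des}(p)$ and the comparison functor $K^p:(\mathbf{C}\downarrow B)\to\mathrm{Des}(p)$, $K^p(A,\alpha)=(E\times_BA,\pi_1,E\times_B\pi_2)$. $p$ is an effective descent morphism if $K^p$ is an equivalence of categories. *)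

theory Defs
  imports "HOL-Library.FuncSet"
begin

record ('o, 'm) category =
  Ob  :: "'o set"
  Ar  :: "'m set"
  Dom :: "'m \<Rightarrow> 'o"
  Cod :: "'m \<Rightarrow> 'o"
  Cmp :: "'m \<Rightarrow> 'm \<Rightarrow> 'm"   (* Cmp C g f = g o f *)
  Idt :: "'o \<Rightarrow> 'm"

definition hom :: "('o, 'm) category \<Rightarrow> 'o \<Rightarrow> 'o \<Rightarrow> 'm set" where
  "hom C a b = {f \<in> Ar C. Dom C f = a \<and> Cod C f = b}"

definition is_category :: "('o, 'm) category \<Rightarrow> bool" where
  "is_category C \<longleftrightarrow>
     (\<forall>f\<in>Ar C. Dom C f \<in> Ob C \<and> Cod C f \<in> Ob C) \<and>
     (\<forall>a\<in>Ob C. Idt C a \<in> hom C a a) \<and>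
     (\<forall>f\<in>Ar C. \<forall>g\<in>Ar C. Cod C f = Dom C g \<longrightarrow> Cmp C g f \<in> hom C (Dom C f) (Cod C g)) \<and>
     (\<forall>f\<in>Ar C. Cmp C f (Idt C (Dom C f)) = f \<and> Cmp C (Idt C (Cod C f)) f = f) \<and>
     (\<forall>f\<in>Ar C. \<forall>g\<in>Ar C. \<forall>h\<in>Ar C. Cod C f = Dom C g \<and> Cod C g = Dom C h \<longrightarrow>
        Cmp C h (Cmp C g f) = Cmp C (Cmp C h g) f)"

definition iso :: "('o, 'm) category \<Rightarrow> 'm \<Rightarrow> bool" where
  "iso C f \<longleftrightarrow> f \<in> Ar C \<and> (\<exists>g\<in>hom C (Cod C f) (Dom C f).
      Cmp C g f = Idt C (Dom C f) \<and> Cmp C f g = Idt C (Cod C f))"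

definition is_pullback :: "('o, 'm) category \<Rightarrow> 'm \<Rightarrow> 'm \<Rightarrow> 'o \<Rightarrow> 'm \<Rightarrow> 'm \<Rightarrow> bool" where
  "is_pullback C f g P p1 p2 \<longleftrightarrow>
     f \<in> Ar C \<and> g \<in> Ar C \<and> Cod C f = Cod C g \<and> P \<in> Ob C \<and>
     p1 \<in> hom C P (Dom C f) \<and> p2 \<in> hom C P (Dom C g) \<and>
     Cmp C f p1 = Cmp C g p2 \<and>
     (\<forall>Q\<in>Ob C. \<forall>q1\<in>hom C Q (Dom C f). \<forall>q2\<in>hom C Q (Dom C g).
        Cmp C f q1 = Cmp C g q2 \<longrightarrow>
        (\<exists>!u. u \<in> hom C Q P \<and> Cmp C p1 u = q1 \<and> Cmp C p2 u = q2))"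

definition has_pullbacks :: "('o, 'm) category \<Rightarrow> bool" where
  "has_pullbacks C \<longleftrightarrow> (\<forall>f\<in>Ar C. \<forall>g\<in>Ar C. Cod C f = Cod C g \<longrightarrow>
      (\<exists>P p1 p2. is_pullback C f g P p1 p2))"

definition is_coequalizer :: "('o, 'm) category \<Rightarrow> 'm \<Rightarrow> 'm \<Rightarrow> 'm \<Rightarrow> bool" where
  "is_coequalizer C f g h \<longleftrightarrow>
     f \<in> Ar C \<and> g \<in> Ar C \<and> h \<in> Ar C \<and> Dom C f = Dom C g \<and>
     Cod C f = Cod C g \<and> Dom C h = Cod C f \<and> Cmp C h f = Cmp C h g \<and>
     (\<forall>k\<in>Ar C. Dom C k = Cod C f \<and> Cmp C k f = Cmp C k g \<longrightarrow>
        (\<exists>!u. u \<in> hom C (Cod C h) (Cod C k) \<and> Cmp C u h = k))"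

definition regular_epi :: "('o, 'm) category \<Rightarrow> 'm \<Rightarrow> bool" where
  "regular_epi C h \<longleftrightarrow> (\<exists>f g. is_coequalizer C f g h)"

definition is_equiv_rel :: "('o, 'm) category \<Rightarrow> 'm \<Rightarrow> 'm \<Rightarrow> bool" where
  "is_equiv_rel C f g \<longleftrightarrow>
     f \<in> Ar C \<and> g \<in> Ar C \<and> Dom C f = Dom C g \<and> Cod C f = Cod C g \<and>
     (\<forall>x\<in>Ar C. \<forall>y\<in>Ar C. Cod C x = Dom C f \<and> Cod C y = Dom C f \<and> Dom C x = Dom C y \<and>
        Cmp C f x = Cmp C f y \<and> Cmp C g x = Cmp C g y \<longrightarrow> x = y) \<and>
     (\<forall>T\<in>Ob C. equiv (hom C T (Cod C f))
        {(Cmp C f x, Cmp C g x) | x. x \<in> hom C T (Dom C f)})"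

definition has_coeq_of_equiv_rels :: "('o, 'm) category \<Rightarrow> bool" where
  "has_coeq_of_equiv_rels C \<longleftrightarrow>
     (\<forall>f g. is_equiv_rel C f g \<longrightarrow> (\<exists>h. is_coequalizer C f g h))"

type_synonym ('o1, 'm1, 'o2, 'm2) ftor = "('o1 \<Rightarrow> 'o2) \<times> ('m1 \<Rightarrow> 'm2)"

definition is_functor :: "('o1, 'm1) category \<Rightarrow> ('o2, 'm2) category \<Rightarrow>
    ('o1, 'm1, 'o2, 'm2) ftor \<Rightarrow> bool" where
  "is_functor C D F \<longleftrightarrow>
     (\<forall>a\<in>Ob C. fst F a \<in> Ob D) \<and>
     (\<forall>f\<in>Ar C. snd F f \<in> hom D (fst F (Dom C f)) (fst F (Cod C f))) \<and>
     (\<forall>a\<in>Ob C. snd F (Idt C a) = Idt D (fst F a)) \<and>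
     (\<forall>f\<in>Ar C. \<forall>g\<in>Ar C. Cod C f = Dom C g \<longrightarrow>
        snd F (Cmp C g f) = Cmp D (snd F g) (snd F f))"

definition faithful :: "('o1, 'm1) category \<Rightarrow> ('o1, 'm1, 'o2, 'm2) ftor \<Rightarrow> bool" where
  "faithful C F \<longleftrightarrow> (\<forall>a\<in>Ob C. \<forall>b\<in>Ob C. \<forall>f\<in>hom C a b. \<forall>g\<in>hom C a b.
      snd F f = snd F g \<longrightarrow> f = g)"

definition preserves_pullbacks :: "('o1, 'm1) category \<Rightarrow> ('o2, 'm2) category \<Rightarrow>
    ('o1, 'm1, 'o2, 'm2) ftor \<Rightarrow> bool" where
  "preserves_pullbacks C D F \<longleftrightarrow> (\<forall>f g P p1 p2. is_pullback C f g P p1 p2 \<longrightarrow>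
      is_pullback D (snd F f) (snd F g) (fst F P) (snd F p1) (snd F p2))"

definition preserves_coeq_equiv_rels :: "('o1, 'm1) category \<Rightarrow> ('o2, 'm2) category \<Rightarrow>
    ('o1, 'm1, 'o2, 'm2) ftor \<Rightarrow> bool" where
  "preserves_coeq_equiv_rels C D F \<longleftrightarrow> (\<forall>f g h. is_equiv_rel C f g \<and> is_coequalizer C f g h \<longrightarrow>
      is_coequalizer D (snd F f) (snd F g) (snd F h))"

definition id_functor :: "('o, 'm, 'o, 'm) ftor" where
  "id_functor = (\<lambda>a. a, \<lambda>f. f)"

definition comp_functor :: "('o2, 'm2, 'o3, 'm3) ftor \<Rightarrow> ('o1, 'm1, 'o2, 'm2) ftor \<Rightarrow>
    ('o1, 'm1, 'o3, 'm3) ftor" where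
  "comp_functor G F = (fst G \<circ> fst F, snd G \<circ> snd F)"

definition nat_iso :: "('o1, 'm1) category \<Rightarrow> ('o2, 'm2) category \<Rightarrow>
    ('o1, 'm1, 'o2, 'm2) ftor \<Rightarrow> ('o1, 'm1, 'o2, 'm2) ftor \<Rightarrow> ('o1 \<Rightarrow> 'm2) \<Rightarrow> bool" where
  "nat_iso C D F G \<eta> \<longleftrightarrow>
     (\<forall>a\<in>Ob C. \<eta> a \<in> hom D (fst F a) (fst G a) \<and> iso D (\<eta> a)) \<and>
     (\<forall>f\<in>Ar C. Cmp D (\<eta> (Cod C f)) (snd F f) = Cmp D (snd G f) (\<eta> (Dom C f)))"

definition is_equivalence :: "('o1, 'm1) category \<Rightarrow> ('o2, 'm2) category \<Rightarrow>
    ('o1, 'm1, 'o2, 'm2) ftor \<Rightarrow> bool" where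
  "is_equivalence C D K \<longleftrightarrow> is_functor C D K \<and>
     (\<exists>(G :: ('o2, 'm2, 'o1, 'm1) ftor) \<eta> \<epsilon>. is_functor D C G \<and>
        nat_iso C C id_functor (comp_functor G K) \<eta> \<and>
        nat_iso D D (comp_functor K G) id_functor \<epsilon>)"

definition SetCat :: "('u set, 'u set \<times> ('u \<Rightarrow> 'u) \<times> 'u set) category" where
  "SetCat = \<lparr> Ob = UNIV,
              Ar = {(A, f, B). f \<in> A \<rightarrow>\<^sub>E B},
              Dom = fst,
              Cod = (\<lambda>x. snd (snd x)),
              Cmp = (\<lambda>(B', g, C) (A, f, B). (A, compose A g f, C)),
              Idt = (\<lambda>A. (A, \<lambda>x\<in>A. x, A)) \<rparr>"

definition pbk :: "('o, 'm) category \<Rightarrow> 'm \<Rightarrow> 'm \<Rightarrow> 'o \<times> 'm \<times> 'm" where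
  "pbk C p a = (SOME (P, p1, p2). is_pullback C p a P p1 p2)"

definition pbO :: "('o, 'm) category \<Rightarrow> 'm \<Rightarrow> 'm \<Rightarrow> 'o" where
  "pbO C p a = fst (pbk C p a)"
definition pb1 :: "('o, 'm) category \<Rightarrow> 'm \<Rightarrow> 'm \<Rightarrow> 'm" where
  "pb1 C p a = fst (snd (pbk C p a))"
definition pb2 :: "('o, 'm) category \<Rightarrow> 'm \<Rightarrow> 'm \<Rightarrow> 'm" where
  "pb2 C p a = snd (snd (pbk C p a))"

text \<open>For a : A -> B, a' : A' -> B, h : A -> A' with a' h = a, the map
  E x_B h : E x_B A -> E x_B A' (pullbacks along p : E -> B).\<close>
definition fibmap :: "('o, 'm) category \<Rightarrow> 'm \<Rightarrow> 'm \<Rightarrow> 'm \<Rightarrow> 'm \<Rightarrow> 'm" where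
  "fibmap C p a a' h = (THE u. u \<in> hom C (pbO C p a) (pbO C p a') \<and>
      Cmp C (pb1 C p a') u = pb1 C p a \<and> Cmp C (pb2 C p a') u = Cmp C h (pb2 C p a))"

definition diagmap :: "('o, 'm) category \<Rightarrow> 'm \<Rightarrow> 'o \<Rightarrow> 'm \<Rightarrow> 'm" where
  "diagmap C p X \<gamma> = (THE u. u \<in> hom C X (pbO C p (Cmp C p \<gamma>)) \<and>
      Cmp C (pb1 C p (Cmp C p \<gamma>)) u = \<gamma> \<and> Cmp C (pb2 C p (Cmp C p \<gamma>)) u = Idt C X)"

definition Slice :: "('o, 'm) category \<Rightarrow> 'o \<Rightarrow>
    ('o \<times> 'm, ('o \<times> 'm) \<times> 'm \<times> ('o \<times> 'm)) category" where
  "Slice C B = (let Os = {(A, \<alpha>). A \<in> Ob C \<and> \<alpha> \<in> hom C A B} in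
     \<lparr> Ob = Os,
       Ar = {(X, h, Y). X \<in> Os \<and> Y \<in> Os \<and> h \<in> hom C (fst X) (fst Y) \<and> Cmp C (snd Y) h = snd X},
       Dom = fst,
       Cod = (\<lambda>x. snd (snd x)),
       Cmp = (\<lambda>(Y', k, Z) (X, h, Y). (X, Cmp C k h, Z)),
       Idt = (\<lambda>X. (X, Idt C (fst X), X)) \<rparr>)"

definition is_descent_data :: "('o, 'm) category \<Rightarrow> 'm \<Rightarrow> 'o \<times> 'm \<times> 'm \<Rightarrow> bool" where
  "is_descent_data C p D \<longleftrightarrow> (case D of (X, \<gamma>, \<xi>) \<Rightarrow>
     X \<in> Ob C \<and> \<gamma> \<in> hom C X (Dom C p) \<and>
     \<xi> \<in> hom C (pbO C p (Cmp C p \<gamma>)) X \<and>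
     Cmp C \<gamma> \<xi> = pb1 C p (Cmp C p \<gamma>) \<and>
     Cmp C \<xi> (diagmap C p X \<gamma>) = Idt C X \<and>
     Cmp C \<xi> (fibmap C p (Cmp C p (pb1 C p (Cmp C p \<gamma>))) (Cmp C p \<gamma>) \<xi>) =
     Cmp C \<xi> (fibmap C p (Cmp C p (pb1 C p (Cmp C p \<gamma>))) (Cmp C p \<gamma>) (pb2 C p (Cmp C p \<gamma>))))"

definition is_descent_morphism :: "('o, 'm) category \<Rightarrow> 'm \<Rightarrow> 'o \<times> 'm \<times> 'm \<Rightarrow> 'm \<Rightarrow> 'o \<times> 'm \<times> 'm \<Rightarrow> bool" where
  "is_descent_morphism C p D f D' \<longleftrightarrow> (case D of (X, \<gamma>, \<xi>) \<Rightarrow> case D' of (X', \<gamma>', \<xi>') \<Rightarrow>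
     f \<in> hom C X X' \<and> Cmp C \<gamma>' f = \<gamma> \<and>
     Cmp C f \<xi> = Cmp C \<xi>' (fibmap C p (Cmp C p \<gamma>) (Cmp C p \<gamma>') f))"

definition Des :: "('o, 'm) category \<Rightarrow> 'm \<Rightarrow>
    ('o \<times> 'm \<times> 'm, ('o \<times> 'm \<times> 'm) \<times> 'm \<times> ('o \<times> 'm \<times> 'm)) category" where
  "Des C p =
     \<lparr> Ob = {D. is_descent_data C p D},
       Ar = {(D, f, D'). is_descent_data C p D \<and> is_descent_data C p D' \<and> is_descent_morphism C p D f D'},
       Dom = fst,
       Cod = (\<lambda>x. snd (snd x)),
       Cmp = (\<lambda>(Y', k, Z) (X, h, Y). (X, Cmp C k h, Z)),
       Idt = (\<lambda>D. (D, Idt C (fst D), D)) \<rparr>"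

text \<open>Comparison functor K^p(A, alpha) = (E x_B A, pi_1, E x_B pi_2).\<close>
definition K_obj :: "('o, 'm) category \<Rightarrow> 'm \<Rightarrow> 'o \<times> 'm \<Rightarrow> 'o \<times> 'm \<times> 'm" where
  "K_obj C p A = (case A of (A0, \<alpha>) \<Rightarrow>
     (pbO C p \<alpha>, pb1 C p \<alpha>, fibmap C p (Cmp C p (pb1 C p \<alpha>)) \<alpha> (pb2 C p \<alpha>)))"

definition Kp :: "('o, 'm) category \<Rightarrow> 'm \<Rightarrow>
    ('o \<times> 'm, ('o \<times> 'm) \<times> 'm \<times> ('o \<times> 'm), 'o \<times> 'm \<times> 'm, ('o \<times> 'm \<times> 'm) \<times> 'm \<times> ('o \<times> 'm \<times> 'm)) ftor" where
  "Kp C p = (K_obj C p,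
     \<lambda>(X, h, Y). (K_obj C p X, fibmap C p (snd X) (snd Y) h, K_obj C p Y))"

definition effective_descent :: "('o, 'm) category \<Rightarrow> 'm \<Rightarrow> bool" where
  "effective_descent C p \<longleftrightarrow> p \<in> Ar C \<and> is_equivalence (Slice C (Cod C p)) (Des C p) (Kp C p)"

definition pullback_stable :: "('o, 'm) category \<Rightarrow> 'm set \<Rightarrow> bool" where
  "pullback_stable C P \<longleftrightarrow> (\<forall>p\<in>P. \<forall>g Q q1 q2. is_pullback C p g Q q1 q2 \<longrightarrow> q2 \<in> P)"

definition exact_image :: "('o, 'm) category \<Rightarrow> ('o, 'm, 'u set, 'u set \<times> ('u \<Rightarrow> 'u) \<times> 'u set) ftor \<Rightarrow>
    'm \<Rightarrow> 'm \<Rightarrow> 'm \<Rightarrow> bool" where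
  "exact_image C U f g h \<longleftrightarrow>
     is_coequalizer SetCat (snd U f) (snd U g) (snd U h) \<and>
     is_pullback SetCat (snd U h) (snd U h) (fst U (Dom C f)) (snd U f) (snd U g)"

end

theory Submission
  imports Defs
begin

(* The comparison functor is fully faithful because every pullback of p lies in P and so is a regular
   epimorphism, along which a morphism descends as soon as it is constant on the fibres of U.
   For essential surjectivity, a descent datum (X, gamma, xi) yields the pair xi, pi2 : E x_B X -> X.
   It is an equivalence relation, and both maps are pullbacks of p (xi is pi2 composed with an
   involution of E x_B X), hence in P.  Their coequalizer q : X -> A has an exact U-image, so q is in
   P as well; p gamma factors as alpha q, and the induced X -> E x_B A is an isomorphism of descent
   data, inverted by descending xi along E x_B X -> E x_B A, a pullback of q. *)

section \<open>Sets\<close>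

lemma SetCat_simps:
  "Ob SetCat = UNIV" "Ar SetCat = {(A, f, B). f \<in> A \<rightarrow>\<^sub>E B}" "Dom SetCat = fst"
  "Cod SetCat = (\<lambda>x. snd (snd x))"
  "Cmp SetCat (B', g, C') (A, f, B) = (A, compose A g f, C')"
  "Idt SetCat A = (A, \<lambda>x\<in>A. x, A)"
  by (auto simp: SetCat_def)

lemma SetCat_hom: "(A', f, B') \<in> hom SetCat A B \<longleftrightarrow> A' = A \<and> B' = B \<and> f \<in> A \<rightarrow>\<^sub>E B"
  by (auto simp: hom_def SetCat_simps)

text \<open>Elements are probed by maps out of a singleton.\<close>

lemma SetCat_pullback_elem_exists:
  assumes pb: "is_pullback SetCat (X, f, Z) (Y, g, W) PP (PP, q1, X) (PP, q2, Y)"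
    and x: "x \<in> X" and y: "y \<in> Y" and e: "f x = g y"
  shows "\<exists>z\<in>PP. q1 z = x \<and> q2 z = y"
proof -
  define w :: 'a where "w = undefined"
  define Q where "Q = {w}"
  define a1 where "a1 = (Q, \<lambda>v\<in>Q. x, X)"
  define a2 where "a2 = (Q, \<lambda>v\<in>Q. y, Y)"
  have ZW: "Z = W" using pb by (simp add: is_pullback_def SetCat_simps)
  have h1: "a1 \<in> hom SetCat Q (Dom SetCat (X, f, Z))" using x by (simp add: a1_def SetCat_hom SetCat_simps)
  have h2: "a2 \<in> hom SetCat Q (Dom SetCat (Y, g, W))" using y by (simp add: a2_def SetCat_hom SetCat_simps)
  have c: "Cmp SetCat (X, f, Z) a1 = Cmp SetCat (Y, g, W) a2"
    using e ZW by (simp add: a1_def a2_def SetCat_simps compose_def Q_def fun_eq_iff)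
  obtain u where u: "u \<in> hom SetCat Q PP" "Cmp SetCat (PP, q1, X) u = a1" "Cmp SetCat (PP, q2, Y) u = a2"
    using pb h1 h2 c unfolding is_pullback_def by (metis UNIV_I SetCat_simps(1))
  obtain u' where u': "u = (Q, u', PP)" "u' \<in> Q \<rightarrow>\<^sub>E PP" using u(1)
    by (cases u) (auto simp: SetCat_hom)
  have "compose Q q1 u' = (\<lambda>v\<in>Q. x)" using u(2) u' by (simp add: SetCat_simps a1_def)
  then have "q1 (u' w) = x" unfolding compose_def Q_def by (metis restrict_apply' singletonI)
  moreover
  have "compose Q q2 u' = (\<lambda>v\<in>Q. y)" using u(3) u' by (simp add: SetCat_simps a2_def)
  then have "q2 (u' w) = y" unfolding compose_def Q_def by (metis restrict_apply' singletonI)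
  moreover have "u' w \<in> PP" using u'(2) Q_def by auto
  ultimately show ?thesis by blast
qed

lemma SetCat_pullback_elem_unique:
  assumes pb: "is_pullback SetCat (X, f, Z) (Y, g, W) PP (PP, q1, X) (PP, q2, Y)"
    and z: "z \<in> PP" and z': "z' \<in> PP" and e1: "q1 z = q1 z'" and e2: "q2 z = q2 z'"
  shows "z = z'"
proof -
  define w :: 'a where "w = undefined"
  define Q where "Q = {w}"
  define a1 where "a1 = (Q, \<lambda>v\<in>Q. q1 z, X)"
  define a2 where "a2 = (Q, \<lambda>v\<in>Q. q2 z, Y)"
  have ZW: "Z = W" using pb by (simp add: is_pullback_def SetCat_simps)
  have q1: "q1 \<in> PP \<rightarrow>\<^sub>E X" "q2 \<in> PP \<rightarrow>\<^sub>E Y" using pb by (auto simp: is_pullback_def SetCat_hom)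
  have fg: "compose PP f q1 = compose PP g q2" using pb by (simp add: is_pullback_def SetCat_simps)
  have e: "f (q1 z) = g (q2 z)" using fun_cong[OF fg, of z] z by (simp add: compose_def)
  have h1: "a1 \<in> hom SetCat Q (Dom SetCat (X, f, Z))" using q1 z by (auto simp: a1_def SetCat_hom SetCat_simps)
  have h2: "a2 \<in> hom SetCat Q (Dom SetCat (Y, g, W))" using q1 z by (auto simp: a2_def SetCat_hom SetCat_simps)
  have c: "Cmp SetCat (X, f, Z) a1 = Cmp SetCat (Y, g, W) a2"
    using e ZW by (simp add: a1_def a2_def SetCat_simps compose_def Q_def fun_eq_iff)
  have un: "\<exists>!u. u \<in> hom SetCat Q PP \<and> Cmp SetCat (PP, q1, X) u = a1 \<and> Cmp SetCat (PP, q2, Y) u = a2"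
    using pb h1 h2 c unfolding is_pullback_def by (metis UNIV_I SetCat_simps(1))
  define u1 where "u1 = (Q, \<lambda>v\<in>Q. z, PP)"
  define u2 where "u2 = (Q, \<lambda>v\<in>Q. z', PP)"
  have "u1 \<in> hom SetCat Q PP \<and> Cmp SetCat (PP, q1, X) u1 = a1 \<and> Cmp SetCat (PP, q2, Y) u1 = a2"
    using z by (auto simp: u1_def SetCat_hom SetCat_simps a1_def a2_def compose_def Q_def)
  moreover have "u2 \<in> hom SetCat Q PP \<and> Cmp SetCat (PP, q1, X) u2 = a1 \<and> Cmp SetCat (PP, q2, Y) u2 = a2"
    using z' e1 e2 by (auto simp: u2_def SetCat_hom SetCat_simps a1_def a2_def compose_def Q_def)
  ultimately have "u1 = u2" using un by blast
  then have "(\<lambda>v\<in>Q. z) = (\<lambda>v\<in>Q. z')" by (simp add: u1_def u2_def)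
  then show ?thesis unfolding Q_def by (metis restrict_apply' singletonI)
qed

lemma SetCat_pullback_factor:
  assumes ex: "\<And>x y. x \<in> X \<Longrightarrow> y \<in> Y \<Longrightarrow> a x = b y \<Longrightarrow> \<exists>z\<in>PP. p1 z = x \<and> p2 z = y"
    and inj: "\<And>z z'. z \<in> PP \<Longrightarrow> z' \<in> PP \<Longrightarrow> p1 z = p1 z' \<Longrightarrow> p2 z = p2 z' \<Longrightarrow> z = z'"
    and q1: "q1 \<in> hom SetCat Q X" and q2: "q2 \<in> hom SetCat Q Y"
    and qc: "Cmp SetCat (X, a, Z) q1 = Cmp SetCat (Y, b, Z) q2"
  shows "\<exists>!u. u \<in> hom SetCat Q PP \<and> Cmp SetCat (PP, p1, X) u = q1 \<and> Cmp SetCat (PP, p2, Y) u = q2"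
proof -
  obtain f1 where f1: "q1 = (Q, f1, X)" "f1 \<in> Q \<rightarrow>\<^sub>E X" using q1 by (cases q1) (auto simp: SetCat_hom)
  obtain f2 where f2: "q2 = (Q, f2, Y)" "f2 \<in> Q \<rightarrow>\<^sub>E Y" using q2 by (cases q2) (auto simp: SetCat_hom)
  have ab: "a (f1 w) = b (f2 w)" if "w \<in> Q" for w
    using fun_cong[OF qc[unfolded f1 f2 SetCat_simps, simplified], of w] that by (simp add: compose_def)
  have exw: "\<exists>z. z \<in> PP \<and> p1 z = f1 w \<and> p2 z = f2 w" if w: "w \<in> Q" for w
    using ex[of "f1 w" "f2 w"] f1(2) f2(2) ab[OF w] w by auto
  define u where "u = (\<lambda>w\<in>Q. SOME z. z \<in> PP \<and> p1 z = f1 w \<and> p2 z = f2 w)"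
  have uw: "u w \<in> PP \<and> p1 (u w) = f1 w \<and> p2 (u w) = f2 w" if w: "w \<in> Q" for w
    using someI_ex[OF exw[OF w]] w by (simp add: u_def)
  have uniq: "v = (Q, u, PP)"
    if v: "v \<in> hom SetCat Q PP" "Cmp SetCat (PP, p1, X) v = q1" "Cmp SetCat (PP, p2, Y) v = q2" for v
  proof -
    obtain vf where vf: "v = (Q, vf, PP)" "vf \<in> Q \<rightarrow>\<^sub>E PP" using v(1) by (cases v) (auto simp: SetCat_hom)
    have "compose Q p1 vf = f1" "compose Q p2 vf = f2" using v(2,3) vf f1 f2 by (auto simp: SetCat_simps)
    then have e1: "p1 (vf w) = f1 w" and e2: "p2 (vf w) = f2 w" if "w \<in> Q" for w
      using that by (auto simp: compose_def fun_eq_iff dest!: spec[of _ w])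
    have "vf = u"
    proof
      fix w show "vf w = u w"
        using inj[of "vf w" "u w"] vf(2) uw e1 e2 by (cases "w \<in> Q") (auto simp: u_def)
    qed
    then show ?thesis using vf by simp
  qed
  have "(Q, u, PP) \<in> hom SetCat Q PP" using uw by (auto simp: SetCat_hom u_def)
  moreover have "Cmp SetCat (PP, p1, X) (Q, u, PP) = q1" "Cmp SetCat (PP, p2, Y) (Q, u, PP) = q2"
    using uw f1 f2 by (auto simp: SetCat_simps compose_def fun_eq_iff)
  ultimately show ?thesis using uniq by blast
qed

lemma SetCat_pullbackI:
  assumes a: "a \<in> X \<rightarrow>\<^sub>E Z" and b: "b \<in> Y \<rightarrow>\<^sub>E Z" and p1: "p1 \<in> PP \<rightarrow>\<^sub>E X" and p2: "p2 \<in> PP \<rightarrow>\<^sub>E Y"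
    and sq: "\<And>z. z \<in> PP \<Longrightarrow> a (p1 z) = b (p2 z)"
    and inj: "\<And>z z'. z \<in> PP \<Longrightarrow> z' \<in> PP \<Longrightarrow> p1 z = p1 z' \<Longrightarrow> p2 z = p2 z' \<Longrightarrow> z = z'"
    and ex: "\<And>x y. x \<in> X \<Longrightarrow> y \<in> Y \<Longrightarrow> a x = b y \<Longrightarrow> \<exists>z\<in>PP. p1 z = x \<and> p2 z = y"
  shows "is_pullback SetCat (X, a, Z) (Y, b, Z) PP (PP, p1, X) (PP, p2, Y)"
proof -
  have c: "Cmp SetCat (X, a, Z) (PP, p1, X) = Cmp SetCat (Y, b, Z) (PP, p2, Y)"
    using sq by (auto simp: SetCat_simps compose_def fun_eq_iff)
  have univ: "\<exists>!u. u \<in> hom SetCat Q PP \<and> Cmp SetCat (PP, p1, X) u = q1 \<and> Cmp SetCat (PP, p2, Y) u = q2"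
    if "q1 \<in> hom SetCat Q X" "q2 \<in> hom SetCat Q Y" "Cmp SetCat (X, a, Z) q1 = Cmp SetCat (Y, b, Z) q2"
    for Q q1 q2
    using SetCat_pullback_factor[OF ex inj that] by blast
  show ?thesis unfolding is_pullback_def using a b p1 p2 c univ by (auto simp: SetCat_simps SetCat_hom)
qed

lemma SetCat_coequalizer_factor:
  fixes X :: "'a set"
  assumes co: "is_coequalizer SetCat (R, f, X) (R, g, X) (X, h, Z)"
    and k: "k \<in> X \<rightarrow>\<^sub>E (K :: 'a set)" and kfg: "\<And>r. r \<in> R \<Longrightarrow> k (f r) = k (g r)"
  shows "\<exists>u \<in> Z \<rightarrow>\<^sub>E K. \<forall>x\<in>X. u (h x) = k x"
proof -
  have fg: "f \<in> R \<rightarrow>\<^sub>E X" "g \<in> R \<rightarrow>\<^sub>E X" using co by (auto simp: is_coequalizer_def SetCat_simps)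
  have "Cmp SetCat (X, k, K) (R, f, X) = Cmp SetCat (X, k, K) (R, g, X)"
    using kfg by (auto simp: SetCat_simps compose_def fun_eq_iff)
  moreover have "(X, k, K) \<in> Ar SetCat" using k by (simp add: SetCat_simps)
  ultimately have "\<exists>!u. u \<in> hom SetCat Z K \<and> Cmp SetCat u (X, h, Z) = (X, k, K)"
    using co unfolding is_coequalizer_def by (simp add: SetCat_simps)
  then obtain u where u: "u \<in> hom SetCat Z K" "Cmp SetCat u (X, h, Z) = (X, k, K)" by blast
  obtain u' where "u = (Z, u', K)" "u' \<in> Z \<rightarrow>\<^sub>E K" using u(1) by (cases u) (auto simp: SetCat_hom)
  moreover have "compose X u' h = k" using u(2) \<open>u = (Z, u', K)\<close> by (simp add: SetCat_simps)
  then have "u' (h x) = k x" if "x \<in> X" for x using that by (auto simp: compose_def)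
  ultimately show ?thesis by blast
qed

lemma SetCat_coequalizer_epi:
  fixes Z :: "'a set"
  assumes co: "is_coequalizer SetCat (R, f, X) (R, g, X) (X, h, Z)"
    and u: "u \<in> Z \<rightarrow>\<^sub>E (K :: 'a set)" and v: "v \<in> Z \<rightarrow>\<^sub>E K" and e: "\<And>x. x \<in> X \<Longrightarrow> u (h x) = v (h x)"
  shows "u = v"
proof -
  have h: "h \<in> X \<rightarrow>\<^sub>E Z" and fg: "f \<in> R \<rightarrow>\<^sub>E X" "g \<in> R \<rightarrow>\<^sub>E X" and hfg: "compose R h f = compose R h g"
    using co by (auto simp: is_coequalizer_def SetCat_simps)
  let ?k = "(X, compose X u h, K)"
  have k: "?k \<in> Ar SetCat" "Dom SetCat ?k = Cod SetCat (R, f, X)"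
    using u h by (auto simp: SetCat_simps compose_def)
  have hfg': "h (f r) = h (g r)" if "r \<in> R" for r using fun_cong[OF hfg, of r] that by (simp add: compose_def)
  have "compose R (compose X u h) f = compose R (compose X u h) g"
    using hfg' PiE_mem[OF fg(1)] PiE_mem[OF fg(2)] by (auto simp: compose_def fun_eq_iff)
  then have "Cmp SetCat ?k (R, f, X) = Cmp SetCat ?k (R, g, X)" by (simp add: SetCat_simps)
  then have "\<exists>!w. w \<in> hom SetCat Z K \<and> Cmp SetCat w (X, h, Z) = ?k"
    using co k unfolding is_coequalizer_def by (simp add: SetCat_simps)
  moreover have "(Z, u, K) \<in> hom SetCat Z K" "(Z, v, K) \<in> hom SetCat Z K"
    using u v by (simp_all add: SetCat_hom)
  moreover have "Cmp SetCat (Z, u, K) (X, h, Z) = ?k" "Cmp SetCat (Z, v, K) (X, h, Z) = ?k"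
    using e by (auto simp: SetCat_simps compose_def)
  ultimately have "(Z, u, K) = (Z, v, K)" by blast
  then show ?thesis by simp
qed

lemma SetCat_coequalizer_surj:
  fixes Z :: "'a set"
  assumes co: "is_coequalizer SetCat (R, f, X) (R, g, X) (X, h, Z)" and z: "z \<in> Z"
  shows "\<exists>x\<in>X. h x = z"
proof (rule ccontr)
  assume nz: "\<not> (\<exists>x\<in>X. h x = z)"
  show False
  proof (cases "\<exists>u0 u1 :: 'a. u0 \<noteq> u1")
    case True
    then obtain u0 u1 :: 'a where u01: "u0 \<noteq> u1" by blast
    have h: "h \<in> X \<rightarrow>\<^sub>E Z" using co by (auto simp: is_coequalizer_def SetCat_simps)
    have "(\<lambda>w\<in>Z. u0) = (\<lambda>w\<in>Z. if w \<in> h ` X then u0 else u1)"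
    proof (rule SetCat_coequalizer_epi[OF co, where K = "{u0, u1}"])
      fix x assume "x \<in> X"
      then show "(\<lambda>w\<in>Z. u0) (h x) = (\<lambda>w\<in>Z. if w \<in> h ` X then u0 else u1) (h x)"
        using PiE_mem[OF h] by simp
    qed (simp_all only: restrict_PiE_iff, auto)
    from fun_cong[OF this, of z] have "u0 = (if z \<in> h ` X then u0 else u1)" using z by simp
    moreover have "z \<notin> h ` X" using nz by blast
    ultimately show False using u01 by simp
  next
    case False
    then have single: "\<And>a b :: 'a. a = b" by blast
    have "X = {}"
    proof (rule equals0I)
      fix x assume "x \<in> X"
      then show False using nz single[of "h x" z] by blast
    qed
    have "\<exists>u \<in> Z \<rightarrow>\<^sub>E ({} :: 'a set). \<forall>x\<in>X. u (h x) = (\<lambda>x\<in>X. undefined) x"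
      by (rule SetCat_coequalizer_factor[OF co]) (simp_all add: \<open>X = {}\<close>)
    then show False using z by auto
  qed
qed

text \<open>The kernel is detected by a map into a two-element set, so a one-element type is treated
  separately.\<close>

lemma SetCat_coequalizer_kernel:
  assumes co: "is_coequalizer SetCat (R, f, X) (R, g, X) (X, h, Z)"
    and refl: "\<And>x. x \<in> X \<Longrightarrow> \<exists>r\<in>R. f r = x \<and> g r = x"
    and sym: "\<And>r. r \<in> R \<Longrightarrow> \<exists>r'\<in>R. f r' = g r \<and> g r' = f r"
    and trans: "\<And>r r'. r \<in> R \<Longrightarrow> r' \<in> R \<Longrightarrow> g r = f r' \<Longrightarrow> \<exists>r''\<in>R. f r'' = f r \<and> g r'' = g r'"
    and x: "x \<in> X" and y: "y \<in> X" and e: "h x = h y"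
  shows "\<exists>r\<in>R. f r = x \<and> g r = y"
proof (cases "\<exists>u0 u1 :: 'a. u0 \<noteq> u1")
  case True
  then obtain u0 u1 :: 'a where u01: "u0 \<noteq> u1" by blast
  define k where "k = (\<lambda>w\<in>X. if \<exists>r\<in>R. f r = x \<and> g r = w then u0 else u1)"
  have iff: "(\<exists>r1\<in>R. f r1 = x \<and> g r1 = f r) \<longleftrightarrow> (\<exists>r2\<in>R. f r2 = x \<and> g r2 = g r)" if r: "r \<in> R" for r
  proof
    assume "\<exists>r1\<in>R. f r1 = x \<and> g r1 = f r"
    then obtain r1 where "r1 \<in> R" "f r1 = x" "g r1 = f r" by blast
    then show "\<exists>r2\<in>R. f r2 = x \<and> g r2 = g r" using trans[of r1 r] r by metis
  next
    assume "\<exists>r2\<in>R. f r2 = x \<and> g r2 = g r"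
    then obtain r2 where r2: "r2 \<in> R" "f r2 = x" "g r2 = g r" by blast
    obtain r' where r': "r' \<in> R" "f r' = g r" "g r' = f r" using sym[OF r] by blast
    show "\<exists>r1\<in>R. f r1 = x \<and> g r1 = f r" using trans[of r2 r'] r2 r' by metis
  qed
  have fg: "f \<in> R \<rightarrow>\<^sub>E X" "g \<in> R \<rightarrow>\<^sub>E X" using co by (auto simp: is_coequalizer_def SetCat_simps)
  have "k \<in> X \<rightarrow>\<^sub>E {u0, u1}" by (auto simp: k_def)
  moreover have "k (f r) = k (g r)" if "r \<in> R" for r using iff[OF that] fg that by (auto simp: k_def)
  ultimately obtain u where "\<forall>x\<in>X. u (h x) = k x" using SetCat_coequalizer_factor[OF co] by metis
  then have "k y = k x" using e x y by metis
  moreover have "k x = u0" using refl[OF x] x by (auto simp: k_def)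
  ultimately show ?thesis using y u01 by (auto simp: k_def split: if_splits)
next
  case False
  then have "x = y" by blast
  then show ?thesis using refl[OF x] by blast
qed

section \<open>Categories\<close>

locale category =
  fixes C :: "('o, 'm) category"
  assumes is_category: "is_category C"
begin

lemma Dom_in_Ob[simp]: "f \<in> Ar C \<Longrightarrow> Dom C f \<in> Ob C"
  using is_category by (simp add: is_category_def)

lemma Cod_in_Ob[simp]: "f \<in> Ar C \<Longrightarrow> Cod C f \<in> Ob C"
  using is_category by (simp add: is_category_def)

lemma Idt_in_hom: "a \<in> Ob C \<Longrightarrow> Idt C a \<in> hom C a a"
  using is_category by (simp add: is_category_def)

lemma Idt_simps[simp]:
  "a \<in> Ob C \<Longrightarrow> Idt C a \<in> Ar C" "a \<in> Ob C \<Longrightarrow> Dom C (Idt C a) = a" "a \<in> Ob C \<Longrightarrow> Cod C (Idt C a) = a"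
  using Idt_in_hom by (auto simp: hom_def)

lemma Cmp_simps[simp]:
  assumes "f \<in> Ar C" "g \<in> Ar C" "Cod C f = Dom C g"
  shows "Cmp C g f \<in> Ar C" "Dom C (Cmp C g f) = Dom C f" "Cod C (Cmp C g f) = Cod C g"
  using is_category assms by (auto simp: is_category_def hom_def)

lemma Cmp_in_hom: "f \<in> hom C a b \<Longrightarrow> g \<in> hom C b c \<Longrightarrow> Cmp C g f \<in> hom C a c"
  by (simp add: hom_def)

lemma hom_Ob: "f \<in> hom C a b \<Longrightarrow> a \<in> Ob C \<and> b \<in> Ob C"
  by (auto simp: hom_def)

lemma Cmp_Idt_left: "f \<in> Ar C \<Longrightarrow> Cmp C (Idt C (Cod C f)) f = f"
  using is_category by (simp add: is_category_def)

lemma Cmp_Idt_right: "f \<in> Ar C \<Longrightarrow> Cmp C f (Idt C (Dom C f)) = f"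
  using is_category by (simp add: is_category_def)

lemma Cmp_assoc:
  "f \<in> Ar C \<Longrightarrow> g \<in> Ar C \<Longrightarrow> h \<in> Ar C \<Longrightarrow> Cod C f = Dom C g \<Longrightarrow> Cod C g = Dom C h \<Longrightarrow>
    Cmp C h (Cmp C g f) = Cmp C (Cmp C h g) f"
  using is_category by (simp add: is_category_def)

lemma Cmp_Idt_left_hom: "f \<in> hom C a b \<Longrightarrow> Cmp C (Idt C b) f = f"
  using Cmp_Idt_left by (auto simp: hom_def)

lemma Cmp_Idt_right_hom: "f \<in> hom C a b \<Longrightarrow> Cmp C f (Idt C a) = f"
  using Cmp_Idt_right by (auto simp: hom_def)

lemma Cmp_assoc_hom:
  "f \<in> hom C a b \<Longrightarrow> g \<in> hom C b c \<Longrightarrow> h \<in> hom C c d \<Longrightarrow> Cmp C h (Cmp C g f) = Cmp C (Cmp C h g) f"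
  using Cmp_assoc by (auto simp: hom_def)

lemma regular_epi_Ar: "regular_epi C h \<Longrightarrow> h \<in> Ar C"
  by (auto simp: regular_epi_def is_coequalizer_def)

lemma regular_epi_cancel:
  assumes r: "regular_epi C h" and u: "u \<in> hom C (Cod C h) W" "v \<in> hom C (Cod C h) W"
    and e: "Cmp C u h = Cmp C v h"
  shows "u = v"
proof -
  obtain f g where co: "is_coequalizer C f g h" using r by (auto simp: regular_epi_def)
  have fg: "f \<in> Ar C" "g \<in> Ar C" "h \<in> Ar C" "Dom C f = Dom C g" "Cod C f = Cod C g" "Dom C h = Cod C f"
    "Cmp C h f = Cmp C h g"
    using co by (auto simp: is_coequalizer_def)
  have ar: "u \<in> Ar C" "v \<in> Ar C" "Dom C u = Cod C h" "Dom C v = Cod C h" "Cod C u = W" "Cod C v = W"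
    using u by (auto simp: hom_def)
  let ?k = "Cmp C u h"
  have k: "?k \<in> Ar C" "Dom C ?k = Cod C f" using ar fg by auto
  have "Cmp C ?k f = Cmp C u (Cmp C h f)" using Cmp_assoc[of f h u] fg ar by simp
  also have "\<dots> = Cmp C u (Cmp C h g)" using fg by simp
  also have "\<dots> = Cmp C ?k g" using Cmp_assoc[of g h u] fg ar by simp
  finally have "Cmp C ?k f = Cmp C ?k g" .
  then have un: "\<exists>!w. w \<in> hom C (Cod C h) (Cod C ?k) \<and> Cmp C w h = ?k"
    using co k unfolding is_coequalizer_def by blast
  have "Cod C ?k = W" using ar fg by auto
  then have "u \<in> hom C (Cod C h) (Cod C ?k) \<and> Cmp C u h = ?k" "v \<in> hom C (Cod C h) (Cod C ?k) \<and> Cmp C v h = ?k"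
    using u e by auto
  then show ?thesis using un by blast
qed

lemma pullback_parts:
  assumes "is_pullback C f g Pb p1 p2"
  shows "f \<in> Ar C" "g \<in> Ar C" "Pb \<in> Ob C" "p1 \<in> Ar C" "p2 \<in> Ar C" "Dom C p1 = Pb" "Dom C p2 = Pb"
    "Cod C p1 = Dom C f" "Cod C p2 = Dom C g" "Cmp C f p1 = Cmp C g p2" "Cod C f = Cod C g"
  using assms by (auto simp: is_pullback_def hom_def)

lemma pullback_univ:
  assumes "is_pullback C f g Pb p1 p2" "q1 \<in> hom C Q (Dom C f)" "q2 \<in> hom C Q (Dom C g)"
    "Cmp C f q1 = Cmp C g q2"
  shows "\<exists>!u. u \<in> hom C Q Pb \<and> Cmp C p1 u = q1 \<and> Cmp C p2 u = q2"
proof -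
  have "Q \<in> Ob C" using assms(2) by (auto simp: hom_def)
  then show ?thesis using assms unfolding is_pullback_def by blast
qed

lemma pullback_eqI:
  assumes pb: "is_pullback C f g Pb p1 p2" and u: "u \<in> hom C Q Pb" and v: "v \<in> hom C Q Pb"
    and e1: "Cmp C p1 u = Cmp C p1 v" and e2: "Cmp C p2 u = Cmp C p2 v"
  shows "u = v"
proof -
  note pp = pullback_parts[OF pb]
  have ua: "u \<in> Ar C" "Dom C u = Q" "Cod C u = Pb" using u by (auto simp: hom_def)
  have "Cmp C f (Cmp C p1 u) = Cmp C g (Cmp C p2 u)"
    using Cmp_assoc[of u p1 f] Cmp_assoc[of u p2 g] ua pp by simp
  moreover have "Cmp C p1 u \<in> hom C Q (Dom C f)" "Cmp C p2 u \<in> hom C Q (Dom C g)"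
    using ua pp by (auto simp: hom_def)
  ultimately have "\<exists>!w. w \<in> hom C Q Pb \<and> Cmp C p1 w = Cmp C p1 u \<and> Cmp C p2 w = Cmp C p2 u"
    using pullback_univ[OF pb] by blast
  then obtain w where "\<And>y. y \<in> hom C Q Pb \<Longrightarrow> Cmp C p1 y = Cmp C p1 u \<Longrightarrow> Cmp C p2 y = Cmp C p2 u \<Longrightarrow> y = w"
    by (metis (no_types, lifting))
  then show ?thesis using u v e1 e2 by metis
qed

lemma pullback_iso_transfer:
  assumes pb: "is_pullback C f g Pb p1 p2"
    and s: "s \<in> hom C Pb' Pb" and s': "s' \<in> hom C Pb Pb'"
    and e1: "Cmp C s s' = Idt C Pb" and e2: "Cmp C s' s = Idt C Pb'"
  shows "is_pullback C f g Pb' (Cmp C p1 s) (Cmp C p2 s)"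
proof -
  note pp = pullback_parts[OF pb]
  have sa: "s \<in> Ar C" "Dom C s = Pb'" "Cod C s = Pb" "s' \<in> Ar C" "Dom C s' = Pb" "Cod C s' = Pb'"
    using s s' by (auto simp: hom_def)
  have Pb': "Pb' \<in> Ob C" using sa Dom_in_Ob by blast
  have h1: "Cmp C p1 s \<in> hom C Pb' (Dom C f)" "Cmp C p2 s \<in> hom C Pb' (Dom C g)"
    using sa pp by (auto simp: hom_def)
  have sq: "Cmp C f (Cmp C p1 s) = Cmp C g (Cmp C p2 s)"
    using Cmp_assoc[of s p1 f] Cmp_assoc[of s p2 g] sa pp by simp
  have univ: "\<exists>!u. u \<in> hom C Q Pb' \<and> Cmp C (Cmp C p1 s) u = q1 \<and> Cmp C (Cmp C p2 s) u = q2"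
    if q1: "q1 \<in> hom C Q (Dom C f)" and q2: "q2 \<in> hom C Q (Dom C g)" and qe: "Cmp C f q1 = Cmp C g q2"
    for Q q1 q2
  proof -
    obtain w where w: "w \<in> hom C Q Pb" "Cmp C p1 w = q1" "Cmp C p2 w = q2"
      using pullback_univ[OF pb q1 q2 qe] by blast
    have wa: "w \<in> Ar C" "Dom C w = Q" "Cod C w = Pb" using w by (auto simp: hom_def)
    let ?u = "Cmp C s' w"
    have ua: "?u \<in> Ar C" "Dom C ?u = Q" "Cod C ?u = Pb'" using wa sa by auto
    have ssw: "Cmp C s ?u = w"
      using Cmp_assoc[of w s' s] wa sa e1 Cmp_Idt_left[of w] by simp
    have c1: "Cmp C (Cmp C p1 s) ?u = q1" using Cmp_assoc[of ?u s p1] ua sa pp ssw w by simp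
    have c2: "Cmp C (Cmp C p2 s) ?u = q2" using Cmp_assoc[of ?u s p2] ua sa pp ssw w by simp
    have un: "v = ?u"
      if v: "v \<in> hom C Q Pb'" "Cmp C (Cmp C p1 s) v = q1" "Cmp C (Cmp C p2 s) v = q2" for v
    proof -
      have va: "v \<in> Ar C" "Dom C v = Q" "Cod C v = Pb'" using v by (auto simp: hom_def)
      have "Cmp C s v = w"
      proof (rule pullback_eqI[OF pb _ w(1)])
        show "Cmp C s v \<in> hom C Q Pb" using va sa by (simp add: hom_def)
        show "Cmp C p1 (Cmp C s v) = Cmp C p1 w" using Cmp_assoc[of v s p1] va sa pp v w by simp
        show "Cmp C p2 (Cmp C s v) = Cmp C p2 w" using Cmp_assoc[of v s p2] va sa pp v w by simp
      qed
      then show ?thesis using Cmp_assoc[of v s s'] va sa e2 Cmp_Idt_left[of v] by simp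
    qed
    have "?u \<in> hom C Q Pb'" using ua by (simp add: hom_def)
    then show ?thesis using c1 c2 un by blast
  qed
  show ?thesis unfolding is_pullback_def using pp Pb' h1 sq univ by auto
qed

lemma pullback_pasting:
  assumes outer: "is_pullback C f k P r1 r2" and right: "is_pullback C f g P' s1 s2"
    and h: "h \<in> hom C (Dom C k) (Dom C g)" and k: "Cmp C g h = k"
    and m: "m \<in> hom C P P'" "Cmp C s1 m = r1" "Cmp C s2 m = Cmp C h r2"
  shows "is_pullback C h s2 P r2 m"
proof -
  note O = pullback_parts[OF outer] and Rt = pullback_parts[OF right]
  have r: "r1 \<in> hom C P (Dom C f)" "r2 \<in> hom C P (Dom C k)" using O by (simp_all add: hom_def)
  have s: "s1 \<in> hom C P' (Dom C f)" "s2 \<in> hom C P' (Dom C g)" and g: "g \<in> hom C (Dom C g) (Cod C f)"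
    using Rt by (simp_all add: hom_def)
  have univ: "\<exists>!u. u \<in> hom C Q P \<and> Cmp C r2 u = z1 \<and> Cmp C m u = z2"
    if z1: "z1 \<in> hom C Q (Dom C k)" and z2: "z2 \<in> hom C Q P'" and ze: "Cmp C h z1 = Cmp C s2 z2" for Q z1 z2
  proof -
    have "Cmp C f (Cmp C s1 z2) = Cmp C (Cmp C f s1) z2"
      using Cmp_assoc_hom[OF z2 s(1), of f "Cod C f"] Rt(1) by (simp add: hom_def)
    also have "\<dots> = Cmp C g (Cmp C s2 z2)"
      by (simp only: Rt(10) Cmp_assoc_hom[OF z2 s(2) g])
    also have "\<dots> = Cmp C k z1"
      by (simp only: ze[symmetric] Cmp_assoc_hom[OF z1 h g] k)
    finally obtain u where u: "u \<in> hom C Q P" "Cmp C r1 u = Cmp C s1 z2" "Cmp C r2 u = z1"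
      using pullback_univ[OF outer Cmp_in_hom[OF z2 s(1)] z1] by blast
    have mu: "Cmp C m u = z2"
    proof (rule pullback_eqI[OF right Cmp_in_hom[OF u(1) m(1)] z2])
      show "Cmp C s1 (Cmp C m u) = Cmp C s1 z2"
        by (simp only: Cmp_assoc_hom[OF u(1) m(1) s(1)] m(2) u(2))
      show "Cmp C s2 (Cmp C m u) = Cmp C s2 z2"
        by (simp only: Cmp_assoc_hom[OF u(1) m(1) s(2)] m(3) Cmp_assoc_hom[OF u(1) r(2) h, symmetric] u(3) ze)
    qed
    have "v = u" if v: "v \<in> hom C Q P" "Cmp C r2 v = z1" "Cmp C m v = z2" for v
    proof (rule pullback_eqI[OF outer v(1) u(1)])
      have "Cmp C r1 v = Cmp C s1 z2" using Cmp_assoc_hom[OF v(1) m(1) s(1)] m(2) v(3) by simp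
      then show "Cmp C r1 v = Cmp C r1 u" using u(2) by simp
      show "Cmp C r2 v = Cmp C r2 u" using v(2) u(3) by simp
    qed
    then show ?thesis using u(1,3) mu by blast
  qed
  have dom: "Dom C h = Dom C k" "Dom C s2 = P'" using h Rt by (simp_all add: hom_def)
  have "h \<in> Ar C" "Cod C h = Cod C s2" using h Rt by (simp_all add: hom_def)
  then show ?thesis
    unfolding is_pullback_def dom using O(3) r(2) m(1) m(3) Rt(5) univ by simp
qed

lemma equiv_relI:
  assumes f: "f \<in> hom C R X" and g: "g \<in> hom C R X"
    and mono: "\<And>T x y. x \<in> hom C T R \<Longrightarrow> y \<in> hom C T R \<Longrightarrow> Cmp C f x = Cmp C f y \<Longrightarrow>
      Cmp C g x = Cmp C g y \<Longrightarrow> x = y"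
    and d: "d \<in> hom C X R" "Cmp C f d = Idt C X" "Cmp C g d = Idt C X"
    and s: "s \<in> hom C R R" "Cmp C f s = g" "Cmp C g s = f"
    and trans: "\<And>T x y. x \<in> hom C T R \<Longrightarrow> y \<in> hom C T R \<Longrightarrow> Cmp C g x = Cmp C f y \<Longrightarrow>
      \<exists>z\<in>hom C T R. Cmp C f z = Cmp C f x \<and> Cmp C g z = Cmp C g y"
  shows "is_equiv_rel C f g"
proof -
  have rel: "equiv (hom C T X) {(Cmp C f x, Cmp C g x) | x. x \<in> hom C T R}" (is "equiv _ ?r") for T
  proof (rule equivI)
    have memI: "(Cmp C f x, Cmp C g x) \<in> ?r" if "x \<in> hom C T R" for x using that by auto
    show "?r \<subseteq> hom C T X \<times> hom C T X"
    proof
      fix v assume "v \<in> ?r"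
      then obtain x where "x \<in> hom C T R" "v = (Cmp C f x, Cmp C g x)" by blast
      then show "v \<in> hom C T X \<times> hom C T X" using Cmp_in_hom[OF _ f] Cmp_in_hom[OF _ g] by simp
    qed
    show "refl_on (hom C T X) ?r"
    proof (rule refl_onI)
      fix a assume a: "a \<in> hom C T X"
      have "Cmp C f (Cmp C d a) = a" "Cmp C g (Cmp C d a) = a"
        using Cmp_assoc_hom[OF a d(1) f] Cmp_assoc_hom[OF a d(1) g] d Cmp_Idt_left_hom[OF a] by simp_all
      then show "(a, a) \<in> ?r" using memI[OF Cmp_in_hom[OF a d(1)]] by simp
    qed
    show "sym ?r"
    proof (rule symI)
      fix a b assume "(a, b) \<in> ?r"
      then obtain x where x: "x \<in> hom C T R" "a = Cmp C f x" "b = Cmp C g x" by blast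
      have "Cmp C f (Cmp C s x) = b" "Cmp C g (Cmp C s x) = a"
        using Cmp_assoc_hom[OF x(1) s(1) f] Cmp_assoc_hom[OF x(1) s(1) g] s x by simp_all
      then show "(b, a) \<in> ?r" using memI[OF Cmp_in_hom[OF x(1) s(1)]] by simp
    qed
    show "trans ?r"
    proof (rule transI)
      fix a b c assume "(a, b) \<in> ?r" "(b, c) \<in> ?r"
      then obtain x y where x: "x \<in> hom C T R" "a = Cmp C f x" "b = Cmp C g x"
        and y: "y \<in> hom C T R" "b = Cmp C f y" "c = Cmp C g y" by blast
      have "Cmp C g x = Cmp C f y" using x(3) y(2) by simp
      then obtain z where "z \<in> hom C T R" "Cmp C f z = Cmp C f x" "Cmp C g z = Cmp C g y"
        using trans[OF x(1) y(1)] by blast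
      then show "(a, c) \<in> ?r" using memI[of z] x(2) y(3) by simp
    qed
  qed
  have "x = y" if "x \<in> Ar C" "y \<in> Ar C" "Cod C x = Dom C f" "Cod C y = Dom C f" "Dom C x = Dom C y"
    "Cmp C f x = Cmp C f y" "Cmp C g x = Cmp C g y" for x y
    using mono[of x "Dom C x" y] that f by (auto simp: hom_def)
  moreover have "f \<in> Ar C" "g \<in> Ar C" "Dom C f = R" "Dom C g = R" "Cod C f = X" "Cod C g = X"
    using f g by (auto simp: hom_def)
  ultimately show ?thesis unfolding is_equiv_rel_def using rel by simp
qed

lemma slice_is_category: "is_category (Slice C B)"
proof -
  have cmp: "Cmp (Slice C B) g f \<in> hom (Slice C B) (Dom (Slice C B) f) (Cod (Slice C B) g)"
    if f: "f \<in> Ar (Slice C B)" and g: "g \<in> Ar (Slice C B)"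
      and e: "Cod (Slice C B) f = Dom (Slice C B) g" for f g
  proof -
    obtain X h Y where f': "f = (X, h, Y)" by (cases f) auto
    obtain k Z where g': "g = (Y, k, Z)" using e f' by (cases g) (auto simp: Slice_def Let_def)
    have hh: "h \<in> hom C (fst X) (fst Y)" "Cmp C (snd Y) h = snd X"
        "k \<in> hom C (fst Y) (fst Z)" "Cmp C (snd Z) k = snd Y"
      and ob: "X \<in> Ob (Slice C B)" "Z \<in> Ob (Slice C B)"
      using f g f' g' by (auto simp: Slice_def Let_def)
    have "snd Z \<in> hom C (fst Z) B" using ob by (auto simp: Slice_def Let_def)
    then have "Cmp C (snd Z) (Cmp C k h) = snd X" using Cmp_assoc_hom[OF hh(1) hh(3)] hh by simp
    then show ?thesis using f' g' hh ob Cmp_in_hom[OF hh(1) hh(3)] by (simp add: Slice_def Let_def hom_def)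
  qed
  have asc: "Cmp (Slice C B) h (Cmp (Slice C B) g f) = Cmp (Slice C B) (Cmp (Slice C B) h g) f"
    if f: "f \<in> Ar (Slice C B)" and g: "g \<in> Ar (Slice C B)" and h: "h \<in> Ar (Slice C B)"
      and e: "Cod (Slice C B) f = Dom (Slice C B) g \<and> Cod (Slice C B) g = Dom (Slice C B) h" for f g h
  proof -
    obtain X a Y where f': "f = (X, a, Y)" by (cases f) auto
    obtain b Z where g': "g = (Y, b, Z)" using e f' by (cases g) (auto simp: Slice_def Let_def)
    obtain c W where h': "h = (Z, c, W)" using e g' by (cases h) (auto simp: Slice_def Let_def)
    have "a \<in> hom C (fst X) (fst Y)" "b \<in> hom C (fst Y) (fst Z)" "c \<in> hom C (fst Z) (fst W)"
      using f g h f' g' h' by (auto simp: Slice_def Let_def)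
    then show ?thesis using f' g' h' Cmp_assoc_hom by (simp add: Slice_def Let_def)
  qed
  have "Idt (Slice C B) a \<in> hom (Slice C B) a a" if "a \<in> Ob (Slice C B)" for a
    using that Idt_in_hom Cmp_Idt_right_hom by (auto simp: Slice_def Let_def hom_def)
  moreover have "Cmp (Slice C B) f (Idt (Slice C B) (Dom (Slice C B) f)) = f \<and>
      Cmp (Slice C B) (Idt (Slice C B) (Cod (Slice C B) f)) f = f" if "f \<in> Ar (Slice C B)" for f
    using that Cmp_Idt_left_hom Cmp_Idt_right_hom by (auto simp: Slice_def Let_def)
  ultimately show ?thesis unfolding is_category_def using cmp asc by (auto simp: Slice_def Let_def)
qed

end

locale category_with_pullbacks = category +
  assumes has_pullbacks: "has_pullbacks C"
begin

lemma chosen_pullback: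
  assumes "f \<in> Ar C" "g \<in> Ar C" "Cod C f = Cod C g"
  shows "is_pullback C f g (pbO C f g) (pb1 C f g) (pb2 C f g)"
proof -
  obtain Pb p1 p2 where "is_pullback C f g Pb p1 p2" using has_pullbacks assms unfolding has_pullbacks_def by blast
  then have "\<exists>x. case x of (Pb, p1, p2) \<Rightarrow> is_pullback C f g Pb p1 p2" by auto
  from someI_ex[OF this] have "case pbk C f g of (Pb, p1, p2) \<Rightarrow> is_pullback C f g Pb p1 p2"
    unfolding pbk_def .
  then show ?thesis by (cases "pbk C f g") (simp add: pbO_def pb1_def pb2_def)
qed

lemma kernel_pair_equiv_rel:
  assumes h: "h \<in> Ar C"
  shows "is_equiv_rel C (pb1 C h h) (pb2 C h h)"
proof -
  note pb = chosen_pullback[OF h h refl]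
  note pp = pullback_parts[OF pb]
  let ?K = "pbO C h h" and ?k1 = "pb1 C h h" and ?k2 = "pb2 C h h"
  have mono: "x = y" if "x \<in> Ar C" "y \<in> Ar C" "Cod C x = Dom C ?k1" "Cod C y = Dom C ?k1"
    "Dom C x = Dom C y" "Cmp C ?k1 x = Cmp C ?k1 y" "Cmp C ?k2 x = Cmp C ?k2 y" for x y
    using pullback_eqI[OF pb, of x "Dom C x" y] that pp by (auto simp: hom_def)
  have releq: "{(Cmp C ?k1 x, Cmp C ?k2 x) | x. x \<in> hom C T ?K} =
      {(a, b). a \<in> hom C T (Dom C h) \<and> b \<in> hom C T (Dom C h) \<and> Cmp C h a = Cmp C h b}" if T: "T \<in> Ob C" for T
  proof safe
    fix x assume x: "x \<in> hom C T ?K"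
    have xa: "x \<in> Ar C" "Dom C x = T" "Cod C x = ?K" using x by (auto simp: hom_def)
    show "Cmp C ?k1 x \<in> hom C T (Dom C h)" "Cmp C ?k2 x \<in> hom C T (Dom C h)" using xa pp by (auto simp: hom_def)
    show "Cmp C h (Cmp C ?k1 x) = Cmp C h (Cmp C ?k2 x)"
      using Cmp_assoc[of x ?k1 h] Cmp_assoc[of x ?k2 h] xa pp by simp
  next
    fix a b assume a: "a \<in> hom C T (Dom C h)" and b: "b \<in> hom C T (Dom C h)" and e: "Cmp C h a = Cmp C h b"
    obtain x where "x \<in> hom C T ?K" "Cmp C ?k1 x = a" "Cmp C ?k2 x = b"
      using pullback_univ[OF pb a b e] by blast
    then show "\<exists>x. (a, b) = (Cmp C ?k1 x, Cmp C ?k2 x) \<and> x \<in> hom C T ?K" by auto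
  qed
  show ?thesis unfolding is_equiv_rel_def using pp mono releq by (auto simp: equiv_def refl_on_def sym_def trans_def)
qed

end

section \<open>Equivalences of categories\<close>

locale fully_faithful_essentially_surjective =
  fixes A :: "('a, 'b) category" and D :: "('c, 'd) category" and K :: "('a, 'b, 'c, 'd) ftor"
  assumes cat_A: "is_category A" and cat_D: "is_category D" and functor_K: "is_functor A D K"
    and full_faithful: "\<And>a b g. a \<in> Ob A \<Longrightarrow> b \<in> Ob A \<Longrightarrow> g \<in> hom D (fst K a) (fst K b) \<Longrightarrow> \<exists>!f. f \<in> hom A a b \<and> snd K f = g"
    and ess_surj: "\<And>d. d \<in> Ob D \<Longrightarrow> \<exists>a\<in>Ob A. \<exists>\<theta>. \<theta> \<in> hom D (fst K a) d \<and> iso D \<theta>"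
begin

interpretation A: category A by unfold_locales (rule cat_A)
interpretation D: category D by unfold_locales (rule cat_D)

abbreviation "Ko \<equiv> fst K"
abbreviation "Kf \<equiv> snd K"

lemma K_ob: "a \<in> Ob A \<Longrightarrow> Ko a \<in> Ob D" using functor_K by (simp add: is_functor_def)

lemma K_hom: "f \<in> hom A a b \<Longrightarrow> Kf f \<in> hom D (Ko a) (Ko b)" using functor_K by (auto simp: is_functor_def hom_def)

lemma K_id: "a \<in> Ob A \<Longrightarrow> Kf (Idt A a) = Idt D (Ko a)" using functor_K by (simp add: is_functor_def)

lemma K_comp: "f \<in> hom A a b \<Longrightarrow> g \<in> hom A b c \<Longrightarrow> Kf (Cmp A g f) = Cmp D (Kf g) (Kf f)"
  using functor_K by (auto simp: is_functor_def hom_def)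

definition "rep d = (SOME a. a \<in> Ob A \<and> (\<exists>\<theta>. \<theta> \<in> hom D (Ko a) d \<and> iso D \<theta>))"

definition "rep_iso_map d = (SOME \<theta>. \<theta> \<in> hom D (Ko (rep d)) d \<and> iso D \<theta>)"

lemma rep_iso: assumes d: "d \<in> Ob D" shows "rep d \<in> Ob A" "rep_iso_map d \<in> hom D (Ko (rep d)) d" "iso D (rep_iso_map d)"
proof -
  have "\<exists>a. a \<in> Ob A \<and> (\<exists>\<theta>. \<theta> \<in> hom D (Ko a) d \<and> iso D \<theta>)" using ess_surj[OF d] by blast
  from someI_ex[OF this] have g: "rep d \<in> Ob A" "\<exists>\<theta>. \<theta> \<in> hom D (Ko (rep d)) d \<and> iso D \<theta>"
    unfolding rep_def by auto
  from someI_ex[OF g(2)] show "rep_iso_map d \<in> hom D (Ko (rep d)) d" "iso D (rep_iso_map d)" unfolding rep_iso_map_def by auto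
  show "rep d \<in> Ob A" by (rule g(1))
qed

definition "rep_inv d = (SOME g. g \<in> hom D d (Ko (rep d)) \<and> Cmp D g (rep_iso_map d) = Idt D (Ko (rep d)) \<and> Cmp D (rep_iso_map d) g = Idt D d)"

lemma rep_inv: assumes d: "d \<in> Ob D"
  shows "rep_inv d \<in> hom D d (Ko (rep d))" "Cmp D (rep_inv d) (rep_iso_map d) = Idt D (Ko (rep d))" "Cmp D (rep_iso_map d) (rep_inv d) = Idt D d"
proof -
  note T = rep_iso[OF d]
  have dc: "Dom D (rep_iso_map d) = Ko (rep d)" "Cod D (rep_iso_map d) = d" using T by (auto simp: hom_def)
  have "\<exists>g. g \<in> hom D d (Ko (rep d)) \<and> Cmp D g (rep_iso_map d) = Idt D (Ko (rep d)) \<and> Cmp D (rep_iso_map d) g = Idt D d"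
    using T(3) dc unfolding iso_def by auto
  from someI_ex[OF this] show "rep_inv d \<in> hom D d (Ko (rep d))" "Cmp D (rep_inv d) (rep_iso_map d) = Idt D (Ko (rep d))"
    "Cmp D (rep_iso_map d) (rep_inv d) = Idt D d" unfolding rep_inv_def by auto
qed

definition "preimage a b g = (THE f. f \<in> hom A a b \<and> Kf f = g)"

lemma preimage: "a \<in> Ob A \<Longrightarrow> b \<in> Ob A \<Longrightarrow> g \<in> hom D (Ko a) (Ko b) \<Longrightarrow> preimage a b g \<in> hom A a b \<and> Kf (preimage a b g) = g"
  unfolding preimage_def by (rule theI') (rule full_faithful)

lemma K_faithful: assumes "f \<in> hom A a b" "f' \<in> hom A a b" "Kf f = Kf f'" shows "f = f'"
proof -
  have ab: "a \<in> Ob A" "b \<in> Ob A" using A.hom_Ob assms(1) by auto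
  have "\<exists>!f. f \<in> hom A a b \<and> Kf f = Kf f'" using full_faithful[OF ab K_hom[OF assms(2)]] .
  then show ?thesis using assms by blast
qed

definition "inv_map g = preimage (rep (Dom D g)) (rep (Cod D g)) (Cmp D (rep_inv (Cod D g)) (Cmp D g (rep_iso_map (Dom D g))))"

lemma conjugate_in_hom: assumes g: "g \<in> hom D d d'"
  shows "Cmp D (rep_inv d') (Cmp D g (rep_iso_map d)) \<in> hom D (Ko (rep d)) (Ko (rep d'))"
proof -
  have dd: "d \<in> Ob D" "d' \<in> Ob D" using D.hom_Ob[OF g] by auto
  show ?thesis using D.Cmp_in_hom[OF D.Cmp_in_hom[OF rep_iso(2)[OF dd(1)] g] rep_inv(1)[OF dd(2)]] .
qed

lemma inv_map: assumes g: "g \<in> hom D d d'"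
  shows "inv_map g \<in> hom A (rep d) (rep d')" "Kf (inv_map g) = Cmp D (rep_inv d') (Cmp D g (rep_iso_map d))"
proof -
  have dd: "d \<in> Ob D" "d' \<in> Ob D" using D.hom_Ob[OF g] by auto
  have e: "Dom D g = d" "Cod D g = d'" using g by (auto simp: hom_def)
  note L = preimage[OF rep_iso(1)[OF dd(1)] rep_iso(1)[OF dd(2)] conjugate_in_hom[OF g]]
  show "inv_map g \<in> hom A (rep d) (rep d')" "Kf (inv_map g) = Cmp D (rep_inv d') (Cmp D g (rep_iso_map d))"
    using L e by (auto simp: inv_map_def)
qed

lemma inv_map_Cmp:
  assumes g: "g \<in> Ar D" and g': "g' \<in> Ar D" and e: "Cod D g = Dom D g'"
  shows "inv_map (Cmp D g' g) = Cmp A (inv_map g') (inv_map g)"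
proof -
  define d where "d = Dom D g"
  define d' where "d' = Cod D g"
  define d'' where "d'' = Cod D g'"
  have gh: "g \<in> hom D d d'" "g' \<in> hom D d' d''" using g g' e by (auto simp: hom_def d_def d'_def d''_def)
  have dd: "d \<in> Ob D" "d' \<in> Ob D" "d'' \<in> Ob D" using D.hom_Ob gh by auto
  have gg: "Cmp D g' g \<in> hom D d d''" using D.Cmp_in_hom[OF gh] .
  show ?thesis
  proof (rule K_faithful)
    show "inv_map (Cmp D g' g) \<in> hom A (rep d) (rep d'')" using inv_map(1)[OF gg] .
    show "Cmp A (inv_map g') (inv_map g) \<in> hom A (rep d) (rep d'')" using A.Cmp_in_hom[OF inv_map(1)[OF gh(1)] inv_map(1)[OF gh(2)]] .
    note T = rep_iso(2)[OF dd(1)] and T' = rep_iso(2)[OF dd(2)]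
    note I' = rep_inv(1)[OF dd(2)] and I'' = rep_inv(1)[OF dd(3)]
    have "Kf (Cmp A (inv_map g') (inv_map g)) = Cmp D (Kf (inv_map g')) (Kf (inv_map g))"
      using K_comp[OF inv_map(1)[OF gh(1)] inv_map(1)[OF gh(2)]] .
    also have "\<dots> = Cmp D (Cmp D (rep_inv d'') (Cmp D g' (rep_iso_map d'))) (Cmp D (rep_inv d') (Cmp D g (rep_iso_map d)))"
      using inv_map(2)[OF gh(1)] inv_map(2)[OF gh(2)] by simp
    also have "\<dots> = Cmp D (rep_inv d'') (Cmp D (Cmp D g' (rep_iso_map d')) (Cmp D (rep_inv d') (Cmp D g (rep_iso_map d))))"
      using D.Cmp_assoc_hom[OF conjugate_in_hom[OF gh(1)] D.Cmp_in_hom[OF T' gh(2)] I''] by simp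
    also have "Cmp D (Cmp D g' (rep_iso_map d')) (Cmp D (rep_inv d') (Cmp D g (rep_iso_map d))) =
        Cmp D g' (Cmp D (rep_iso_map d') (Cmp D (rep_inv d') (Cmp D g (rep_iso_map d))))"
      using D.Cmp_assoc_hom[OF conjugate_in_hom[OF gh(1)] T' gh(2)] by simp
    also have "Cmp D (rep_iso_map d') (Cmp D (rep_inv d') (Cmp D g (rep_iso_map d))) = Cmp D (Cmp D (rep_iso_map d') (rep_inv d')) (Cmp D g (rep_iso_map d))"
      using D.Cmp_assoc_hom[OF D.Cmp_in_hom[OF T gh(1)] I' T'] by simp
    also have "\<dots> = Cmp D g (rep_iso_map d)" using rep_inv(3)[OF dd(2)] D.Cmp_Idt_left_hom[OF D.Cmp_in_hom[OF T gh(1)]] by simp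
    also have "Cmp D g' (Cmp D g (rep_iso_map d)) = Cmp D (Cmp D g' g) (rep_iso_map d)" using D.Cmp_assoc_hom[OF T gh] by simp
    also have "Cmp D (rep_inv d'') (Cmp D (Cmp D g' g) (rep_iso_map d)) = Kf (inv_map (Cmp D g' g))" using inv_map(2)[OF gg] by simp
    finally show "Kf (inv_map (Cmp D g' g)) = Kf (Cmp A (inv_map g') (inv_map g))" by simp
  qed
qed

definition "G = (rep, inv_map)"

lemma inverse_functor: "is_functor D A G"
proof -
  have ob: "rep d \<in> Ob A" if "d \<in> Ob D" for d using rep_iso(1)[OF that] .
  have ar: "inv_map g \<in> hom A (rep (Dom D g)) (rep (Cod D g))" if "g \<in> Ar D" for g
    using inv_map(1)[of g "Dom D g" "Cod D g"] that by (simp add: hom_def)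
  have idt: "inv_map (Idt D d) = Idt A (rep d)" if d: "d \<in> Ob D" for d
  proof (rule K_faithful)
    have ih: "Idt D d \<in> hom D d d" using D.Idt_in_hom[OF d] .
    show "inv_map (Idt D d) \<in> hom A (rep d) (rep d)" using inv_map(1)[OF ih] .
    show "Idt A (rep d) \<in> hom A (rep d) (rep d)" using A.Idt_in_hom[OF rep_iso(1)[OF d]] .
    have "Kf (inv_map (Idt D d)) = Cmp D (rep_inv d) (Cmp D (Idt D d) (rep_iso_map d))" using inv_map(2)[OF ih] .
    also have "\<dots> = Idt D (Ko (rep d))" using D.Cmp_Idt_left_hom[OF rep_iso(2)[OF d]] rep_inv(2)[OF d] by simp
    also have "\<dots> = Kf (Idt A (rep d))" using K_id[OF rep_iso(1)[OF d]] by simp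
    finally show "Kf (inv_map (Idt D d)) = Kf (Idt A (rep d))" .
  qed
  show ?thesis unfolding is_functor_def G_def using ob ar idt inv_map_Cmp by auto
qed

definition "unit_map a = preimage a (rep (Ko a)) (rep_inv (Ko a))"

lemma unit_map: assumes a: "a \<in> Ob A" shows "unit_map a \<in> hom A a (rep (Ko a))" "Kf (unit_map a) = rep_inv (Ko a)"
  using preimage[OF a rep_iso(1)[OF K_ob[OF a]] rep_inv(1)[OF K_ob[OF a]]] by (auto simp: unit_map_def)

lemma unit_map_iso: assumes a: "a \<in> Ob A" shows "iso A (unit_map a)"
proof -
  let ?b = "rep (Ko a)"
  have b: "?b \<in> Ob A" using rep_iso(1)[OF K_ob[OF a]] .
  let ?i = "preimage ?b a (rep_iso_map (Ko a))"
  note L = preimage[OF b a rep_iso(2)[OF K_ob[OF a]]]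
  note E = unit_map[OF a]
  have e1: "Cmp A ?i (unit_map a) = Idt A a"
  proof (rule K_faithful)
    show "Cmp A ?i (unit_map a) \<in> hom A a a" using A.Cmp_in_hom[OF E(1)] L by blast
    show "Idt A a \<in> hom A a a" using A.Idt_in_hom[OF a] .
    show "Kf (Cmp A ?i (unit_map a)) = Kf (Idt A a)"
      using K_comp[OF E(1), of ?i a] L E(2) rep_inv(3)[OF K_ob[OF a]] K_id[OF a] by simp
  qed
  have e2: "Cmp A (unit_map a) ?i = Idt A ?b"
  proof (rule K_faithful)
    show "Cmp A (unit_map a) ?i \<in> hom A ?b ?b" using A.Cmp_in_hom[OF _ E(1)] L by blast
    show "Idt A ?b \<in> hom A ?b ?b" using A.Idt_in_hom[OF b] .
    show "Kf (Cmp A (unit_map a) ?i) = Kf (Idt A ?b)"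
      using K_comp[OF conjunct1[OF L] E(1)] L E(2) rep_inv(2)[OF K_ob[OF a]] K_id[OF b] by simp
  qed
  have ea: "unit_map a \<in> Ar A" "Dom A (unit_map a) = a" "Cod A (unit_map a) = ?b" using E(1) by (auto simp: hom_def)
  show ?thesis unfolding iso_def using ea e1 e2 L by auto
qed

lemma unit_natural:
  assumes fh: "f \<in> hom A a b"
  shows "Cmp A (unit_map b) f = Cmp A (inv_map (Kf f)) (unit_map a)"
proof -
  have ab: "a \<in> Ob A" "b \<in> Ob A" using A.hom_Ob[OF fh] by auto
  note Kfh = K_hom[OF fh]
  note Ea = unit_map[OF ab(1)] and Eb = unit_map[OF ab(2)]
  note GKf = inv_map[OF Kfh]
  show ?thesis
  proof (rule K_faithful)
    show "Cmp A (unit_map b) f \<in> hom A a (rep (Ko b))" using A.Cmp_in_hom[OF fh Eb(1)] .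
    show "Cmp A (inv_map (Kf f)) (unit_map a) \<in> hom A a (rep (Ko b))" using A.Cmp_in_hom[OF Ea(1) GKf(1)] .
    note T = rep_iso(2)[OF K_ob[OF ab(1)]] and I = rep_inv(1)[OF K_ob[OF ab(1)]]
      and Ib = rep_inv(1)[OF K_ob[OF ab(2)]]
    have "Kf (Cmp A (inv_map (Kf f)) (unit_map a)) =
        Cmp D (Cmp D (rep_inv (Ko b)) (Cmp D (Kf f) (rep_iso_map (Ko a)))) (rep_inv (Ko a))"
      using K_comp[OF Ea(1) GKf(1)] GKf(2) Ea(2) by simp
    also have "\<dots> = Cmp D (rep_inv (Ko b)) (Cmp D (Cmp D (Kf f) (rep_iso_map (Ko a))) (rep_inv (Ko a)))"
      using D.Cmp_assoc_hom[OF I D.Cmp_in_hom[OF T Kfh] Ib] by simp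
    also have "Cmp D (Cmp D (Kf f) (rep_iso_map (Ko a))) (rep_inv (Ko a)) =
        Cmp D (Kf f) (Cmp D (rep_iso_map (Ko a)) (rep_inv (Ko a)))"
      using D.Cmp_assoc_hom[OF I T Kfh] by simp
    also have "\<dots> = Kf f" using rep_inv(3)[OF K_ob[OF ab(1)]] D.Cmp_Idt_right_hom[OF Kfh] by simp
    also have "Cmp D (rep_inv (Ko b)) (Kf f) = Kf (Cmp A (unit_map b) f)" using K_comp[OF fh Eb(1)] Eb(2) by simp
    finally show "Kf (Cmp A (unit_map b) f) = Kf (Cmp A (inv_map (Kf f)) (unit_map a))" by simp
  qed
qed

lemma counit_natural:
  assumes gh: "g \<in> hom D d d'"
  shows "Cmp D (rep_iso_map d') (Kf (inv_map g)) = Cmp D g (rep_iso_map d)"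
proof -
  have dd: "d \<in> Ob D" "d' \<in> Ob D" using D.hom_Ob[OF gh] by auto
  note T = rep_iso(2)[OF dd(1)] and T' = rep_iso(2)[OF dd(2)] and I' = rep_inv(1)[OF dd(2)]
  have "Cmp D (rep_iso_map d') (Kf (inv_map g)) =
      Cmp D (rep_iso_map d') (Cmp D (rep_inv d') (Cmp D g (rep_iso_map d)))"
    using inv_map(2)[OF gh] by simp
  also have "\<dots> = Cmp D (Cmp D (rep_iso_map d') (rep_inv d')) (Cmp D g (rep_iso_map d))"
    using D.Cmp_assoc_hom[OF D.Cmp_in_hom[OF T gh] I' T'] by simp
  also have "\<dots> = Cmp D g (rep_iso_map d)"
    using rep_inv(3)[OF dd(2)] D.Cmp_Idt_left_hom[OF D.Cmp_in_hom[OF T gh]] by simp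
  finally show ?thesis .
qed

lemma K_is_equivalence: "is_equivalence A D K"
proof -
  have "nat_iso A A id_functor (comp_functor G K) unit_map"
    unfolding nat_iso_def
  proof (intro conjI ballI)
    fix a assume a: "a \<in> Ob A"
    show "unit_map a \<in> hom A (fst (id_functor :: ('a, 'b, 'a, 'b) ftor) a) (fst (comp_functor G K) a)"
      using unit_map(1)[OF a] by (simp add: id_functor_def comp_functor_def G_def)
    show "iso A (unit_map a)" using unit_map_iso[OF a] .
  next
    fix f assume "f \<in> Ar A"
    then show "Cmp A (unit_map (Cod A f)) (snd (id_functor :: ('a, 'b, 'a, 'b) ftor) f) =
        Cmp A (snd (comp_functor G K) f) (unit_map (Dom A f))"
      using unit_natural[of f "Dom A f" "Cod A f"] by (simp add: hom_def id_functor_def comp_functor_def G_def)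
  qed
  moreover have "nat_iso D D (comp_functor K G) id_functor rep_iso_map"
    unfolding nat_iso_def
  proof (intro conjI ballI)
    fix d assume d: "d \<in> Ob D"
    show "rep_iso_map d \<in> hom D (fst (comp_functor K G) d) (fst (id_functor :: ('c, 'd, 'c, 'd) ftor) d)"
      using rep_iso[OF d] by (simp add: id_functor_def comp_functor_def G_def)
    show "iso D (rep_iso_map d)" using rep_iso[OF d] by simp
  next
    fix g assume "g \<in> Ar D"
    then show "Cmp D (rep_iso_map (Cod D g)) (snd (comp_functor K G) g) =
        Cmp D (snd (id_functor :: ('c, 'd, 'c, 'd) ftor) g) (rep_iso_map (Dom D g))"
      using counit_natural[of g "Dom D g" "Cod D g"] by (simp add: hom_def id_functor_def comp_functor_def G_def)
  qed
  ultimately show ?thesis unfolding is_equivalence_def using functor_K inverse_functor by blast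
qed

end

section \<open>Descent data and the comparison functor\<close>

lemma Slice_simps:
  "Ob (Slice C B) = {(A, \<alpha>). A \<in> Ob C \<and> \<alpha> \<in> hom C A B}"
  "Ar (Slice C B) = {(X, h, Y). X \<in> Ob (Slice C B) \<and> Y \<in> Ob (Slice C B) \<and> h \<in> hom C (fst X) (fst Y) \<and>
     Cmp C (snd Y) h = snd X}"
  "Dom (Slice C B) = fst" "Cod (Slice C B) = (\<lambda>x. snd (snd x))"
  "Cmp (Slice C B) (Y', k, Z) (X, h, Y) = (X, Cmp C k h, Z)"
  "Idt (Slice C B) X = (X, Idt C (fst X), X)"
  by (auto simp: Slice_def Let_def)

lemma Des_simps:
  "Ob (Des C p) = {D. is_descent_data C p D}"
  "Ar (Des C p) = {(D, f, D'). is_descent_data C p D \<and> is_descent_data C p D' \<and> is_descent_morphism C p D f D'}"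
  "Dom (Des C p) = fst" "Cod (Des C p) = (\<lambda>x. snd (snd x))"
  "Cmp (Des C p) (Y', k, Z) (X, h, Y) = (X, Cmp C k h, Z)"
  "Idt (Des C p) X = (X, Idt C (fst X), X)"
  by (auto simp: Des_def)

locale base_change = category_with_pullbacks +
  fixes p :: 'm
  assumes p_Ar[simp]: "p \<in> Ar C"
begin

abbreviation "E \<equiv> Dom C p"
abbreviation "B \<equiv> Cod C p"
abbreviation "PbO a \<equiv> pbO C p a"
abbreviation "Pb1 a \<equiv> pb1 C p a"
abbreviation "Pb2 a \<equiv> pb2 C p a"

lemma base_change_pullback: "a \<in> Ar C \<Longrightarrow> Cod C a = B \<Longrightarrow> is_pullback C p a (PbO a) (Pb1 a) (Pb2 a)"
  using chosen_pullback[of p a] by simp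

lemma base_change_parts:
  assumes "a \<in> Ar C" "Cod C a = B"
  shows "PbO a \<in> Ob C" "Pb1 a \<in> Ar C" "Pb2 a \<in> Ar C" "Dom C (Pb1 a) = PbO a" "Dom C (Pb2 a) = PbO a"
    "Cod C (Pb1 a) = E" "Cod C (Pb2 a) = Dom C a"
  using pullback_parts[OF base_change_pullback[OF assms]] by auto

lemma base_change_homs:
  assumes "a \<in> Ar C" "Cod C a = B"
  shows "Pb1 a \<in> hom C (PbO a) E" "Pb2 a \<in> hom C (PbO a) (Dom C a)"
  using base_change_parts[OF assms] by (auto simp: hom_def)

lemma base_change_square: "a \<in> Ar C \<Longrightarrow> Cod C a = B \<Longrightarrow> Cmp C p (Pb1 a) = Cmp C a (Pb2 a)"
  using pullback_parts[OF base_change_pullback] by auto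

lemma over_E_Ar: "\<gamma> \<in> hom C X E \<Longrightarrow> Cmp C p \<gamma> \<in> Ar C \<and> Cod C (Cmp C p \<gamma>) = B \<and> Dom C (Cmp C p \<gamma>) = X"
  by (auto simp: hom_def)

lemma fibmap_prop:
  assumes a: "a \<in> Ar C" "Cod C a = B" and a': "a' \<in> Ar C" "Cod C a' = B"
    and h: "h \<in> hom C (Dom C a) (Dom C a')" and e: "Cmp C a' h = a"
  shows "fibmap C p a a' h \<in> hom C (PbO a) (PbO a')" "Cmp C (Pb1 a') (fibmap C p a a' h) = Pb1 a"
    "Cmp C (Pb2 a') (fibmap C p a a' h) = Cmp C h (Pb2 a)"
proof -
  note A = base_change_homs[OF a]
  have q2: "Cmp C h (Pb2 a) \<in> hom C (PbO a) (Dom C a')" using Cmp_in_hom[OF A(2) h] .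
  have "Cmp C p (Pb1 a) = Cmp C a' (Cmp C h (Pb2 a))"
    using base_change_square[OF a] Cmp_assoc_hom[OF A(2) h, of a' B] a' e by (simp add: hom_def)
  then have "\<exists>!u. u \<in> hom C (PbO a) (PbO a') \<and> Cmp C (Pb1 a') u = Pb1 a \<and> Cmp C (Pb2 a') u = Cmp C h (Pb2 a)"
    using pullback_univ[OF base_change_pullback[OF a'] A(1) q2] by simp
  from theI'[OF this] show "fibmap C p a a' h \<in> hom C (PbO a) (PbO a')"
    "Cmp C (Pb1 a') (fibmap C p a a' h) = Pb1 a" "Cmp C (Pb2 a') (fibmap C p a a' h) = Cmp C h (Pb2 a)"
    unfolding fibmap_def by auto
qed

lemma fibmap_unique:
  assumes a: "a \<in> Ar C" "Cod C a = B" and a': "a' \<in> Ar C" "Cod C a' = B"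
    and h: "h \<in> hom C (Dom C a) (Dom C a')" and e: "Cmp C a' h = a"
    and v: "v \<in> hom C (PbO a) (PbO a')" "Cmp C (Pb1 a') v = Pb1 a" "Cmp C (Pb2 a') v = Cmp C h (Pb2 a)"
  shows "fibmap C p a a' h = v"
  using pullback_eqI[OF base_change_pullback[OF a'] fibmap_prop(1)[OF a a' h e] v(1)] fibmap_prop[OF a a' h e] v
  by simp

lemma over_E_Cmp:
  assumes "\<gamma>' \<in> hom C X' E" "f \<in> hom C X X'" "Cmp C \<gamma>' f = \<gamma>"
  shows "Cmp C (Cmp C p \<gamma>') f = Cmp C p \<gamma>"
  using Cmp_assoc_hom[OF assms(2,1), of p B] assms(3) by (simp add: hom_def)

lemma fibmap_over:
  assumes g: "\<gamma> \<in> hom C X E" and g': "\<gamma>' \<in> hom C X' E" and f: "f \<in> hom C X X'" and e: "Cmp C \<gamma>' f = \<gamma>"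
  shows "fibmap C p (Cmp C p \<gamma>) (Cmp C p \<gamma>') f \<in> hom C (PbO (Cmp C p \<gamma>)) (PbO (Cmp C p \<gamma>'))"
    "Cmp C (Pb1 (Cmp C p \<gamma>')) (fibmap C p (Cmp C p \<gamma>) (Cmp C p \<gamma>') f) = Pb1 (Cmp C p \<gamma>)"
    "Cmp C (Pb2 (Cmp C p \<gamma>')) (fibmap C p (Cmp C p \<gamma>) (Cmp C p \<gamma>') f) = Cmp C f (Pb2 (Cmp C p \<gamma>))"
proof -
  from over_E_Cmp[OF g' f e] show "fibmap C p (Cmp C p \<gamma>) (Cmp C p \<gamma>') f \<in> hom C (PbO (Cmp C p \<gamma>)) (PbO (Cmp C p \<gamma>'))"
    "Cmp C (Pb1 (Cmp C p \<gamma>')) (fibmap C p (Cmp C p \<gamma>) (Cmp C p \<gamma>') f) = Pb1 (Cmp C p \<gamma>)"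
    "Cmp C (Pb2 (Cmp C p \<gamma>')) (fibmap C p (Cmp C p \<gamma>) (Cmp C p \<gamma>') f) = Cmp C f (Pb2 (Cmp C p \<gamma>))"
    using fibmap_prop[of "Cmp C p \<gamma>" "Cmp C p \<gamma>'" f] over_E_Ar[OF g] over_E_Ar[OF g'] f by auto
qed

lemma fibmap_Idt:
  assumes a: "a \<in> Ar C" "Cod C a = B"
  shows "fibmap C p a a (Idt C (Dom C a)) = Idt C (PbO a)"
proof (rule fibmap_unique[OF a a])
  note A = base_change_homs[OF a]
  show "Idt C (Dom C a) \<in> hom C (Dom C a) (Dom C a)" using Idt_in_hom a by simp
  show "Cmp C a (Idt C (Dom C a)) = a" using Cmp_Idt_right[of a] a by simp
  show "Idt C (PbO a) \<in> hom C (PbO a) (PbO a)" using Idt_in_hom base_change_parts[OF a] by simp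
  show "Cmp C (Pb1 a) (Idt C (PbO a)) = Pb1 a" using Cmp_Idt_right_hom[OF A(1)] .
  show "Cmp C (Pb2 a) (Idt C (PbO a)) = Cmp C (Idt C (Dom C a)) (Pb2 a)"
    using Cmp_Idt_right_hom[OF A(2)] Cmp_Idt_left_hom[OF A(2)] by simp
qed

lemma fibmap_Cmp:
  assumes a: "a \<in> Ar C" "Cod C a = B" and a': "a' \<in> Ar C" "Cod C a' = B" and a'': "a'' \<in> Ar C" "Cod C a'' = B"
    and h: "h \<in> hom C (Dom C a) (Dom C a')" and e: "Cmp C a' h = a"
    and k: "k \<in> hom C (Dom C a') (Dom C a'')" and e': "Cmp C a'' k = a'"
  shows "fibmap C p a a'' (Cmp C k h) = Cmp C (fibmap C p a' a'' k) (fibmap C p a a' h)"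
proof -
  note F = fibmap_prop[OF a a' h e] and G = fibmap_prop[OF a' a'' k e']
  note A = base_change_homs[OF a] and A' = base_change_homs[OF a'] and A'' = base_change_homs[OF a'']
  have ekh: "Cmp C a'' (Cmp C k h) = a"
    using Cmp_assoc_hom[OF h k, of a'' B] a'' e e' by (simp add: hom_def)
  show ?thesis
  proof (rule fibmap_unique[OF a a'' Cmp_in_hom[OF h k] ekh])
    show "Cmp C (fibmap C p a' a'' k) (fibmap C p a a' h) \<in> hom C (PbO a) (PbO a'')"
      using Cmp_in_hom[OF F(1) G(1)] .
    show "Cmp C (Pb1 a'') (Cmp C (fibmap C p a' a'' k) (fibmap C p a a' h)) = Pb1 a"
      using Cmp_assoc_hom[OF F(1) G(1) A''(1)] F G by simp
    have "Cmp C (Pb2 a'') (Cmp C (fibmap C p a' a'' k) (fibmap C p a a' h)) =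
        Cmp C (Cmp C k (Pb2 a')) (fibmap C p a a' h)"
      using Cmp_assoc_hom[OF F(1) G(1) A''(2)] G by simp
    also have "\<dots> = Cmp C k (Cmp C h (Pb2 a))" using Cmp_assoc_hom[OF F(1) A'(2) k] F by simp
    also have "\<dots> = Cmp C (Cmp C k h) (Pb2 a)" using Cmp_assoc_hom[OF A(2) h k] .
    finally show "Cmp C (Pb2 a'') (Cmp C (fibmap C p a' a'' k) (fibmap C p a a' h)) = Cmp C (Cmp C k h) (Pb2 a)" .
  qed
qed

lemma diagmap_prop:
  assumes g: "\<gamma> \<in> hom C X E"
  shows "diagmap C p X \<gamma> \<in> hom C X (PbO (Cmp C p \<gamma>))" "Cmp C (Pb1 (Cmp C p \<gamma>)) (diagmap C p X \<gamma>) = \<gamma>"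
    "Cmp C (Pb2 (Cmp C p \<gamma>)) (diagmap C p X \<gamma>) = Idt C X"
proof -
  note a = over_E_Ar[OF g]
  have X: "X \<in> Ob C" using hom_Ob[OF g] by simp
  have "\<exists>!u. u \<in> hom C X (PbO (Cmp C p \<gamma>)) \<and> Cmp C (Pb1 (Cmp C p \<gamma>)) u = \<gamma> \<and> Cmp C (Pb2 (Cmp C p \<gamma>)) u = Idt C X"
    by (rule pullback_univ[OF base_change_pullback g]) (use a X Idt_in_hom Cmp_Idt_right[of "Cmp C p \<gamma>"] in auto)
  from theI'[OF this] show "diagmap C p X \<gamma> \<in> hom C X (PbO (Cmp C p \<gamma>))"
    "Cmp C (Pb1 (Cmp C p \<gamma>)) (diagmap C p X \<gamma>) = \<gamma>" "Cmp C (Pb2 (Cmp C p \<gamma>)) (diagmap C p X \<gamma>) = Idt C X"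
    unfolding diagmap_def by auto
qed

lemma descent_data_parts:
  assumes "is_descent_data C p (X, \<gamma>, \<xi>)"
  shows "X \<in> Ob C" "\<gamma> \<in> hom C X E" "\<xi> \<in> hom C (PbO (Cmp C p \<gamma>)) X"
  using assms by (auto simp: is_descent_data_def)

lemma descent_morphism_Idt:
  assumes d: "is_descent_data C p (X, \<gamma>, \<xi>)"
  shows "is_descent_morphism C p (X, \<gamma>, \<xi>) (Idt C X) (X, \<gamma>, \<xi>)"
proof -
  note P = descent_data_parts[OF d]
  note a = over_E_Ar[OF P(2)]
  have "fibmap C p (Cmp C p \<gamma>) (Cmp C p \<gamma>) (Idt C X) = Idt C (PbO (Cmp C p \<gamma>))"
    using fibmap_Idt[of "Cmp C p \<gamma>"] a by simp
  then show ?thesis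
    unfolding is_descent_morphism_def
    using Idt_in_hom[OF P(1)] Cmp_Idt_right_hom[OF P(2)] Cmp_Idt_left_hom[OF P(3)] Cmp_Idt_right_hom[OF P(3)]
    by simp
qed

lemma descent_morphism_Cmp:
  assumes d1: "is_descent_data C p (X1, \<gamma>1, \<xi>1)" and d2: "is_descent_data C p (X2, \<gamma>2, \<xi>2)"
    and d3: "is_descent_data C p (X3, \<gamma>3, \<xi>3)"
    and m1: "is_descent_morphism C p (X1, \<gamma>1, \<xi>1) f (X2, \<gamma>2, \<xi>2)"
    and m2: "is_descent_morphism C p (X2, \<gamma>2, \<xi>2) g (X3, \<gamma>3, \<xi>3)"
  shows "is_descent_morphism C p (X1, \<gamma>1, \<xi>1) (Cmp C g f) (X3, \<gamma>3, \<xi>3)"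
proof -
  let ?d1 = "Cmp C p \<gamma>1" and ?d2 = "Cmp C p \<gamma>2" and ?d3 = "Cmp C p \<gamma>3"
  have f: "f \<in> hom C X1 X2" "Cmp C \<gamma>2 f = \<gamma>1" "Cmp C f \<xi>1 = Cmp C \<xi>2 (fibmap C p ?d1 ?d2 f)"
    using m1 by (auto simp: is_descent_morphism_def)
  have g: "g \<in> hom C X2 X3" "Cmp C \<gamma>3 g = \<gamma>2" "Cmp C g \<xi>2 = Cmp C \<xi>3 (fibmap C p ?d2 ?d3 g)"
    using m2 by (auto simp: is_descent_morphism_def)
  note P1 = descent_data_parts[OF d1] and P2 = descent_data_parts[OF d2] and P3 = descent_data_parts[OF d3]
  note F = fibmap_over[OF P1(2) P2(2) f(1,2)] and G = fibmap_over[OF P2(2) P3(2) g(1,2)]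
  have a1: "?d1 \<in> Ar C" "Cod C ?d1 = B" "Dom C ?d1 = X1" using over_E_Ar[OF P1(2)] by simp_all
  have a2: "?d2 \<in> Ar C" "Cod C ?d2 = B" "Dom C ?d2 = X2" using over_E_Ar[OF P2(2)] by simp_all
  have a3: "?d3 \<in> Ar C" "Cod C ?d3 = B" "Dom C ?d3 = X3" using over_E_Ar[OF P3(2)] by simp_all
  have FG: "fibmap C p ?d1 ?d3 (Cmp C g f) = Cmp C (fibmap C p ?d2 ?d3 g) (fibmap C p ?d1 ?d2 f)"
    using fibmap_Cmp[OF a1(1,2) a2(1,2) a3(1,2)] f(1) g(1) a1(3) a2(3) a3(3)
      over_E_Cmp[OF P2(2) f(1,2)] over_E_Cmp[OF P3(2) g(1,2)] by simp
  have over: "Cmp C \<gamma>3 (Cmp C g f) = \<gamma>1" using Cmp_assoc_hom[OF f(1) g(1) P3(2)] f g by simp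
  have "Cmp C (Cmp C g f) \<xi>1 = Cmp C g (Cmp C f \<xi>1)" using Cmp_assoc_hom[OF P1(3) f(1) g(1)] by simp
  also have "\<dots> = Cmp C (Cmp C g \<xi>2) (fibmap C p ?d1 ?d2 f)" using f(3) Cmp_assoc_hom[OF F(1) P2(3) g(1)] by simp
  also have "\<dots> = Cmp C \<xi>3 (fibmap C p ?d1 ?d3 (Cmp C g f))" using g(3) Cmp_assoc_hom[OF F(1) G(1) P3(3)] FG by simp
  finally show ?thesis unfolding is_descent_morphism_def using Cmp_in_hom[OF f(1) g(1)] over by simp
qed

lemma Des_is_category: "is_category (Des C p)"
proof -
  have "Idt (Des C p) D \<in> hom (Des C p) D D" if "D \<in> Ob (Des C p)" for D
    using that descent_morphism_Idt by (cases D) (auto simp: Des_simps hom_def)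
  moreover have "Cmp (Des C p) g f \<in> hom (Des C p) (Dom (Des C p) f) (Cod (Des C p) g)"
    if "f \<in> Ar (Des C p)" "g \<in> Ar (Des C p)" "Cod (Des C p) f = Dom (Des C p) g" for f g
    using that descent_morphism_Cmp by (cases f, cases g) (fastforce simp: Des_simps hom_def)
  moreover have "f' \<in> hom C (fst D1) (fst D2)" if "(D1, f', D2) \<in> Ar (Des C p)" for D1 f' D2
    using that by (cases D1, cases D2) (auto simp: Des_simps is_descent_morphism_def)
  ultimately show ?thesis
    unfolding is_category_def using Cmp_Idt_left_hom Cmp_Idt_right_hom Cmp_assoc_hom
    by (auto simp: Des_simps hom_def) (metis prod.collapse)+
qed

definition K_xi :: "'m \<Rightarrow> 'm" where
  "K_xi \<alpha> = fibmap C p (Cmp C p (Pb1 \<alpha>)) \<alpha> (Pb2 \<alpha>)"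

lemma K_obj_eq: "K_obj C p (A, \<alpha>) = (PbO \<alpha>, Pb1 \<alpha>, K_xi \<alpha>)"
  by (simp add: K_obj_def K_xi_def)

lemma K_xi_prop:
  assumes a: "\<alpha> \<in> Ar C" "Cod C \<alpha> = B"
  shows "K_xi \<alpha> \<in> hom C (PbO (Cmp C p (Pb1 \<alpha>))) (PbO \<alpha>)"
    "Cmp C (Pb1 \<alpha>) (K_xi \<alpha>) = Pb1 (Cmp C p (Pb1 \<alpha>))"
    "Cmp C (Pb2 \<alpha>) (K_xi \<alpha>) = Cmp C (Pb2 \<alpha>) (Pb2 (Cmp C p (Pb1 \<alpha>)))"
proof -
  note A = base_change_parts[OF a]
  have d: "Cmp C p (Pb1 \<alpha>) \<in> Ar C" "Cod C (Cmp C p (Pb1 \<alpha>)) = B" using A by simp_all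
  have "Pb2 \<alpha> \<in> hom C (Dom C (Cmp C p (Pb1 \<alpha>))) (Dom C \<alpha>)" using A by (simp add: hom_def)
  from fibmap_prop[OF d a this base_change_square[OF a, symmetric]]
  show "K_xi \<alpha> \<in> hom C (PbO (Cmp C p (Pb1 \<alpha>))) (PbO \<alpha>)"
    "Cmp C (Pb1 \<alpha>) (K_xi \<alpha>) = Pb1 (Cmp C p (Pb1 \<alpha>))"
    "Cmp C (Pb2 \<alpha>) (K_xi \<alpha>) = Cmp C (Pb2 \<alpha>) (Pb2 (Cmp C p (Pb1 \<alpha>)))"
    unfolding K_xi_def by simp_all
qed

lemma K_xi_unit:
  assumes a: "\<alpha> \<in> Ar C" "Cod C \<alpha> = B"
  shows "Cmp C (K_xi \<alpha>) (diagmap C p (PbO \<alpha>) (Pb1 \<alpha>)) = Idt C (PbO \<alpha>)"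
proof -
  note A = base_change_homs[OF a] and X = K_xi_prop[OF a]
  let ?d = "Cmp C p (Pb1 \<alpha>)" and ?dg = "diagmap C p (PbO \<alpha>) (Pb1 \<alpha>)"
  note G = diagmap_prop[OF A(1)]
  have O: "PbO \<alpha> \<in> Ob C" using base_change_parts[OF a] by simp
  have D: "Pb2 ?d \<in> hom C (PbO ?d) (PbO \<alpha>)"
    using base_change_homs(2)[of ?d] over_E_Ar[OF A(1)] by simp
  show ?thesis
  proof (rule pullback_eqI[OF base_change_pullback[OF a] Cmp_in_hom[OF G(1) X(1)] Idt_in_hom[OF O]])
    show "Cmp C (Pb1 \<alpha>) (Cmp C (K_xi \<alpha>) ?dg) = Cmp C (Pb1 \<alpha>) (Idt C (PbO \<alpha>))"
      using Cmp_assoc_hom[OF G(1) X(1) A(1)] X(2) G(2) Cmp_Idt_right_hom[OF A(1)] by simp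
    have "Cmp C (Pb2 \<alpha>) (Cmp C (K_xi \<alpha>) ?dg) = Cmp C (Cmp C (Pb2 \<alpha>) (Pb2 ?d)) ?dg"
      using Cmp_assoc_hom[OF G(1) X(1) A(2)] X(3) by simp
    also have "\<dots> = Pb2 \<alpha>"
      using Cmp_assoc_hom[OF G(1) D A(2)] G(3) Cmp_Idt_right_hom[OF A(2)] over_E_Ar[OF A(1)] by simp
    finally show "Cmp C (Pb2 \<alpha>) (Cmp C (K_xi \<alpha>) ?dg) = Cmp C (Pb2 \<alpha>) (Idt C (PbO \<alpha>))"
      using Cmp_Idt_right_hom[OF A(2)] by simp
  qed
qed

lemma K_xi_cocycle:
  assumes a: "\<alpha> \<in> Ar C" "Cod C \<alpha> = B"
  defines "d \<equiv> Cmp C p (Pb1 \<alpha>)"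
  defines "d2 \<equiv> Cmp C p (Pb1 (Cmp C p (Pb1 \<alpha>)))"
  shows "Cmp C (K_xi \<alpha>) (fibmap C p d2 d (K_xi \<alpha>)) = Cmp C (K_xi \<alpha>) (fibmap C p d2 d (Pb2 d))"
proof -
  note A = base_change_homs[OF a] and X = K_xi_prop[OF a, folded d_def]
  have dA: "d \<in> Ar C" "Cod C d = B" "Dom C d = PbO \<alpha>" using over_E_Ar[OF A(1)] by (simp_all add: d_def)
  note D = base_change_homs[OF dA(1,2), unfolded dA(3)]
  have d2: "d2 = Cmp C p (Pb1 d)" by (simp add: d_def d2_def)
  have d2A: "d2 \<in> Ar C" "Cod C d2 = B" "Dom C d2 = PbO d" using over_E_Ar[OF D(1)] d2 by simp_all
  note D2 = base_change_homs[OF d2A(1,2), unfolded d2A(3)]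
  have h1: "K_xi \<alpha> \<in> hom C (Dom C d2) (Dom C d)" and e1: "Cmp C d (K_xi \<alpha>) = d2"
    using X(1) over_E_Cmp[OF A(1) X(1,2)] over_E_Ar[OF D(1)] dA(3) d2 by (simp_all add: d_def)
  have h2: "Pb2 d \<in> hom C (Dom C d2) (Dom C d)" and e2: "Cmp C d (Pb2 d) = d2"
    using D(2) dA(3) over_E_Ar[OF D(1)] d2 base_change_square[OF dA(1,2)] by simp_all
  note F1 = fibmap_prop[OF d2A(1,2) dA(1,2) h1 e1] and F2 = fibmap_prop[OF d2A(1,2) dA(1,2) h2 e2]
  have F1': "fibmap C p d2 d (K_xi \<alpha>) \<in> hom C (PbO d2) (PbO d)"
    and F2': "fibmap C p d2 d (Pb2 d) \<in> hom C (PbO d2) (PbO d)" using F1(1) F2(1) dA(3) by simp_all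
  show ?thesis
  proof (rule pullback_eqI[OF base_change_pullback[OF a] Cmp_in_hom[OF F1' X(1)] Cmp_in_hom[OF F2' X(1)]])
    show "Cmp C (Pb1 \<alpha>) (Cmp C (K_xi \<alpha>) (fibmap C p d2 d (K_xi \<alpha>))) =
        Cmp C (Pb1 \<alpha>) (Cmp C (K_xi \<alpha>) (fibmap C p d2 d (Pb2 d)))"
      using Cmp_assoc_hom[OF F1' X(1) A(1)] Cmp_assoc_hom[OF F2' X(1) A(1)] X(2) F1(2) F2(2) by simp
    have "Cmp C (Pb2 \<alpha>) (Cmp C (K_xi \<alpha>) (fibmap C p d2 d (K_xi \<alpha>))) =
        Cmp C (Pb2 \<alpha>) (Cmp C (Pb2 d) (fibmap C p d2 d (K_xi \<alpha>)))"
      using Cmp_assoc_hom[OF F1' X(1) A(2)] Cmp_assoc_hom[OF F1' D(2) A(2)] X(3) dA(3) by simp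
    also have "\<dots> = Cmp C (Cmp C (Pb2 \<alpha>) (K_xi \<alpha>)) (Pb2 d2)"
      using F1(3) Cmp_assoc_hom[OF D2(2) X(1) A(2)] dA(3) by simp
    also have "\<dots> = Cmp C (Pb2 \<alpha>) (Cmp C (Pb2 d) (fibmap C p d2 d (Pb2 d)))"
      using X(3) F2(3) Cmp_assoc_hom[OF D2(2) D(2) A(2)] dA(3) by simp
    also have "\<dots> = Cmp C (Pb2 \<alpha>) (Cmp C (K_xi \<alpha>) (fibmap C p d2 d (Pb2 d)))"
      using Cmp_assoc_hom[OF F2' X(1) A(2)] Cmp_assoc_hom[OF F2' D(2) A(2)] X(3) dA(3) by simp
    finally show "Cmp C (Pb2 \<alpha>) (Cmp C (K_xi \<alpha>) (fibmap C p d2 d (K_xi \<alpha>))) =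
        Cmp C (Pb2 \<alpha>) (Cmp C (K_xi \<alpha>) (fibmap C p d2 d (Pb2 d)))" .
  qed
qed

lemma K_descent_data:
  assumes a: "\<alpha> \<in> Ar C" "Cod C \<alpha> = B"
  shows "is_descent_data C p (PbO \<alpha>, Pb1 \<alpha>, K_xi \<alpha>)"
  unfolding is_descent_data_def
  using base_change_parts[OF a] base_change_homs[OF a] K_xi_prop[OF a] K_xi_unit[OF a] K_xi_cocycle[OF a]
  by simp

lemma K_descent_morphism:
  assumes a: "\<alpha> \<in> Ar C" "Cod C \<alpha> = B" and a': "\<alpha>' \<in> Ar C" "Cod C \<alpha>' = B"
    and h: "h \<in> hom C (Dom C \<alpha>) (Dom C \<alpha>')" and e: "Cmp C \<alpha>' h = \<alpha>"
  shows "is_descent_morphism C p (PbO \<alpha>, Pb1 \<alpha>, K_xi \<alpha>) (fibmap C p \<alpha> \<alpha>' h) (PbO \<alpha>', Pb1 \<alpha>', K_xi \<alpha>')"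
proof -
  let ?f = "fibmap C p \<alpha> \<alpha>' h" and ?d = "Cmp C p (Pb1 \<alpha>)" and ?d' = "Cmp C p (Pb1 \<alpha>')"
  note A = base_change_homs[OF a] and A' = base_change_homs[OF a']
  note F = fibmap_prop[OF a a' h e] and X = K_xi_prop[OF a] and X' = K_xi_prop[OF a']
  note G = fibmap_over[OF A(1) A'(1) F(1,2)]
  have D: "Pb2 ?d \<in> hom C (PbO ?d) (PbO \<alpha>)" and D': "Pb2 ?d' \<in> hom C (PbO ?d') (PbO \<alpha>')"
    using base_change_homs(2)[of ?d] base_change_homs(2)[of ?d'] over_E_Ar[OF A(1)] over_E_Ar[OF A'(1)]
    by simp_all
  have "Cmp C ?f (K_xi \<alpha>) = Cmp C (K_xi \<alpha>') (fibmap C p ?d ?d' ?f)"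
  proof (rule pullback_eqI[OF base_change_pullback[OF a'] Cmp_in_hom[OF X(1) F(1)] Cmp_in_hom[OF G(1) X'(1)]])
    show "Cmp C (Pb1 \<alpha>') (Cmp C ?f (K_xi \<alpha>)) = Cmp C (Pb1 \<alpha>') (Cmp C (K_xi \<alpha>') (fibmap C p ?d ?d' ?f))"
      using Cmp_assoc_hom[OF X(1) F(1) A'(1)] Cmp_assoc_hom[OF G(1) X'(1) A'(1)] F(2) X(2) X'(2) G(2) by simp
    have "Cmp C (Pb2 \<alpha>') (Cmp C ?f (K_xi \<alpha>)) = Cmp C h (Cmp C (Pb2 \<alpha>) (Pb2 ?d))"
      using Cmp_assoc_hom[OF X(1) F(1) A'(2)] Cmp_assoc_hom[OF X(1) A(2) h] F(3) X(3) by simp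
    also have "\<dots> = Cmp C (Cmp C (Pb2 \<alpha>') ?f) (Pb2 ?d)"
      using Cmp_assoc_hom[OF D A(2) h] F(3) by simp
    also have "\<dots> = Cmp C (Pb2 \<alpha>') (Cmp C (K_xi \<alpha>') (fibmap C p ?d ?d' ?f))"
      using Cmp_assoc_hom[OF G(1) X'(1) A'(2)] Cmp_assoc_hom[OF G(1) D' A'(2)] Cmp_assoc_hom[OF D F(1) A'(2)]
        X'(3) G(3) by simp
    finally show "Cmp C (Pb2 \<alpha>') (Cmp C ?f (K_xi \<alpha>)) =
        Cmp C (Pb2 \<alpha>') (Cmp C (K_xi \<alpha>') (fibmap C p ?d ?d' ?f))" .
  qed
  then show ?thesis unfolding is_descent_morphism_def using F by simp
qed

lemma K_functor: "is_functor (Slice C B) (Des C p) (Kp C p)"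
proof -
  have ob: "K_obj C p X \<in> Ob (Des C p)" if X: "X \<in> Ob (Slice C B)" for X
  proof -
    obtain A \<alpha> where X': "X = (A, \<alpha>)" by (cases X)
    have "\<alpha> \<in> Ar C" "Cod C \<alpha> = B" using X X' by (auto simp: Slice_simps hom_def)
    then show ?thesis using K_descent_data X' by (simp add: K_obj_eq Des_simps)
  qed
  have ar: "snd (Kp C p) f \<in> hom (Des C p) (fst (Kp C p) (Dom (Slice C B) f)) (fst (Kp C p) (Cod (Slice C B) f))"
    if f: "f \<in> Ar (Slice C B)" for f
  proof -
    obtain A \<alpha> h A' \<alpha>' where f': "f = ((A, \<alpha>), h, (A', \<alpha>'))" by (cases f) auto
    have a: "\<alpha> \<in> Ar C" "Cod C \<alpha> = B" "Dom C \<alpha> = A" and a': "\<alpha>' \<in> Ar C" "Cod C \<alpha>' = B" "Dom C \<alpha>' = A'"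
      and h: "h \<in> hom C A A'" and e: "Cmp C \<alpha>' h = \<alpha>" using f f' by (auto simp: Slice_simps hom_def)
    show ?thesis
      using f' K_descent_data[OF a(1,2)] K_descent_data[OF a'(1,2)] K_descent_morphism[OF a(1,2) a'(1,2) _ e] h a a'
      by (simp add: Kp_def K_obj_eq hom_def Des_simps Slice_simps)
  qed
  have idt: "snd (Kp C p) (Idt (Slice C B) X) = Idt (Des C p) (fst (Kp C p) X)" if X: "X \<in> Ob (Slice C B)" for X
  proof -
    obtain A \<alpha> where X': "X = (A, \<alpha>)" by (cases X)
    have "\<alpha> \<in> Ar C" "Cod C \<alpha> = B" "Dom C \<alpha> = A" using X X' by (auto simp: Slice_simps hom_def)
    then have "fibmap C p \<alpha> \<alpha> (Idt C A) = Idt C (PbO \<alpha>)" using fibmap_Idt by blast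
    then show ?thesis using X' by (simp add: Kp_def K_obj_eq Slice_simps Des_simps)
  qed
  have cmp: "snd (Kp C p) (Cmp (Slice C B) g f) = Cmp (Des C p) (snd (Kp C p) g) (snd (Kp C p) f)"
    if f: "f \<in> Ar (Slice C B)" and g: "g \<in> Ar (Slice C B)" and fg: "Cod (Slice C B) f = Dom (Slice C B) g"
    for f g
  proof -
    obtain A \<alpha> h A' \<alpha>' where f': "f = ((A, \<alpha>), h, (A', \<alpha>'))" by (cases f) auto
    obtain k A'' \<alpha>'' where g': "g = ((A', \<alpha>'), k, (A'', \<alpha>''))" using fg f' by (cases g) (auto simp: Slice_simps)
    have a: "\<alpha> \<in> Ar C" "Cod C \<alpha> = B" "Dom C \<alpha> = A" and a': "\<alpha>' \<in> Ar C" "Cod C \<alpha>' = B" "Dom C \<alpha>' = A'"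
      and a'': "\<alpha>'' \<in> Ar C" "Cod C \<alpha>'' = B" "Dom C \<alpha>'' = A''"
      and h: "h \<in> hom C A A'" "Cmp C \<alpha>' h = \<alpha>" and k: "k \<in> hom C A' A''" "Cmp C \<alpha>'' k = \<alpha>'"
      using f f' g g' by (auto simp: Slice_simps hom_def)
    have "fibmap C p \<alpha> \<alpha>'' (Cmp C k h) = Cmp C (fibmap C p \<alpha>' \<alpha>'' k) (fibmap C p \<alpha> \<alpha>' h)"
      using fibmap_Cmp[OF a(1,2) a'(1,2) a''(1,2)] h k a a' a'' by simp
    then show ?thesis using f' g' by (simp add: Kp_def K_obj_eq Slice_simps Des_simps)
  qed
  have "fst (Kp C p) = K_obj C p" by (simp add: Kp_def)
  then show ?thesis unfolding is_functor_def using ob ar idt cmp by auto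
qed

end

locale descent_datum = base_change +
  fixes X \<gamma> \<xi>
  assumes descent_data: "is_descent_data C p (X, \<gamma>, \<xi>)"
begin

abbreviation "\<delta> \<equiv> Cmp C p \<gamma>"
abbreviation "R \<equiv> PbO \<delta>"
abbreviation "\<pi>1 \<equiv> Pb1 \<delta>"
abbreviation "\<pi>2 \<equiv> Pb2 \<delta>"
abbreviation "\<delta>2 \<equiv> Cmp C p \<pi>1"
abbreviation "Fx \<equiv> fibmap C p \<delta>2 \<delta> \<xi>"
abbreviation "Fp \<equiv> fibmap C p \<delta>2 \<delta> \<pi>2"
abbreviation "dg \<equiv> diagmap C p X \<gamma>"

lemma descent_data_facts:
  "X \<in> Ob C" "\<gamma> \<in> hom C X E" "\<xi> \<in> hom C R X" "Cmp C \<gamma> \<xi> = \<pi>1" "Cmp C \<xi> dg = Idt C X"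
  "Cmp C \<xi> Fx = Cmp C \<xi> Fp"
  using descent_data by (auto simp: is_descent_data_def)

lemma delta_Ar: "\<delta> \<in> Ar C" "Cod C \<delta> = B" "Dom C \<delta> = X"
  using over_E_Ar[OF descent_data_facts(2)] by simp_all

lemma R_homs: "\<pi>1 \<in> hom C R E" "\<pi>2 \<in> hom C R X" "dg \<in> hom C X R" "\<delta> \<in> hom C X B"
  using base_change_homs[OF delta_Ar(1,2)] diagmap_prop(1)[OF descent_data_facts(2)] delta_Ar
  by (simp_all add: hom_def)

lemma R_Ob: "R \<in> Ob C"
  using base_change_parts[OF delta_Ar(1,2)] by simp

lemma delta_xi: "Cmp C \<delta> \<xi> = \<delta>2"
  using over_E_Cmp[OF descent_data_facts(2,3,4)] .

lemma delta_pi2: "Cmp C \<delta> \<pi>2 = \<delta>2"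
  using base_change_square[OF delta_Ar(1,2)] by simp

lemma delta2_Ar: "\<delta>2 \<in> Ar C" "Cod C \<delta>2 = B" "Dom C \<delta>2 = R"
  using over_E_Ar[OF R_homs(1)] by simp_all

lemma RR_homs: "Pb1 \<delta>2 \<in> hom C (PbO \<delta>2) E" "Pb2 \<delta>2 \<in> hom C (PbO \<delta>2) R"
  using base_change_homs[OF delta2_Ar(1,2)] delta2_Ar(3) by simp_all

lemma Fx_prop: "Fx \<in> hom C (PbO \<delta>2) R" "Cmp C \<pi>1 Fx = Pb1 \<delta>2" "Cmp C \<pi>2 Fx = Cmp C \<xi> (Pb2 \<delta>2)"
  using fibmap_prop[OF delta2_Ar(1,2) delta_Ar(1,2) _ delta_xi] descent_data_facts(3) delta_Ar(3) delta2_Ar(3)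
  by simp_all

lemma Fp_prop: "Fp \<in> hom C (PbO \<delta>2) R" "Cmp C \<pi>1 Fp = Pb1 \<delta>2" "Cmp C \<pi>2 Fp = Cmp C \<pi>2 (Pb2 \<delta>2)"
  using fibmap_prop[OF delta2_Ar(1,2) delta_Ar(1,2) _ delta_pi2] R_homs(2) delta_Ar(3) delta2_Ar(3)
  by simp_all

definition "twist = (THE u. u \<in> hom C R R \<and> Cmp C \<pi>1 u = Cmp C \<gamma> \<pi>2 \<and> Cmp C \<pi>2 u = \<xi>)"

lemma twist_square: "Cmp C p (Cmp C \<gamma> \<pi>2) = Cmp C \<delta> \<xi>"
  using Cmp_assoc_hom[OF R_homs(2) descent_data_facts(2), of p B] delta_pi2 delta_xi by (simp add: hom_def)

lemma twist_prop: "twist \<in> hom C R R" "Cmp C \<pi>1 twist = Cmp C \<gamma> \<pi>2" "Cmp C \<pi>2 twist = \<xi>"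
proof -
  have "\<exists>!u. u \<in> hom C R R \<and> Cmp C \<pi>1 u = Cmp C \<gamma> \<pi>2 \<and> Cmp C \<pi>2 u = \<xi>"
    using pullback_univ[OF base_change_pullback[OF delta_Ar(1,2)] _ _ twist_square]
      Cmp_in_hom[OF R_homs(2) descent_data_facts(2)] descent_data_facts(3) delta_Ar(3) by simp
  from theI'[OF this] show "twist \<in> hom C R R" "Cmp C \<pi>1 twist = Cmp C \<gamma> \<pi>2" "Cmp C \<pi>2 twist = \<xi>"
    unfolding twist_def by auto
qed

text \<open>The cocycle condition, evaluated at the map R -> E x_B R with components gamma pi2 and the
  identity, turns xi twist into xi dg pi2 = pi2.\<close>

lemma xi_twist: "Cmp C \<xi> twist = \<pi>2"
proof -
  note D = descent_data_facts and H = R_homs and T = twist_prop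
  have "Cmp C p (Cmp C \<gamma> \<pi>2) = Cmp C \<delta>2 (Idt C R)"
    using twist_square delta_xi Cmp_Idt_right[OF delta2_Ar(1)] delta2_Ar(3) by simp
  moreover have "Idt C R \<in> hom C R (Dom C \<delta>2)" using Idt_in_hom[OF R_Ob] delta2_Ar(3) by simp
  ultimately obtain w where w: "w \<in> hom C R (PbO \<delta>2)" "Cmp C (Pb1 \<delta>2) w = Cmp C \<gamma> \<pi>2" "Cmp C (Pb2 \<delta>2) w = Idt C R"
    using pullback_univ[OF base_change_pullback[OF delta2_Ar(1,2)] Cmp_in_hom[OF H(2) D(2)]] by blast
  have "Cmp C Fx w = twist"
  proof (rule pullback_eqI[OF base_change_pullback[OF delta_Ar(1,2)] Cmp_in_hom[OF w(1) Fx_prop(1)] T(1)])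
    show "Cmp C \<pi>1 (Cmp C Fx w) = Cmp C \<pi>1 twist"
      using Cmp_assoc_hom[OF w(1) Fx_prop(1) H(1)] Fx_prop(2) w(2) T(2) by simp
    show "Cmp C \<pi>2 (Cmp C Fx w) = Cmp C \<pi>2 twist"
      using Cmp_assoc_hom[OF w(1) Fx_prop(1) H(2)] Fx_prop(3) Cmp_assoc_hom[OF w(1) RR_homs(2) D(3)] w(3)
        Cmp_Idt_right_hom[OF D(3)] T(3) by simp
  qed
  moreover have "Cmp C Fp w = Cmp C dg \<pi>2"
  proof (rule pullback_eqI[OF base_change_pullback[OF delta_Ar(1,2)] Cmp_in_hom[OF w(1) Fp_prop(1)]
        Cmp_in_hom[OF H(2) H(3)]])
    show "Cmp C \<pi>1 (Cmp C Fp w) = Cmp C \<pi>1 (Cmp C dg \<pi>2)"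
      using Cmp_assoc_hom[OF w(1) Fp_prop(1) H(1)] Fp_prop(2) w(2) Cmp_assoc_hom[OF H(2) H(3) H(1)]
        diagmap_prop(2)[OF D(2)] by simp
    show "Cmp C \<pi>2 (Cmp C Fp w) = Cmp C \<pi>2 (Cmp C dg \<pi>2)"
      using Cmp_assoc_hom[OF w(1) Fp_prop(1) H(2)] Fp_prop(3) Cmp_assoc_hom[OF w(1) RR_homs(2) H(2)] w(3)
        Cmp_Idt_right_hom[OF H(2)] Cmp_assoc_hom[OF H(2) H(3) H(2)] diagmap_prop(3)[OF D(2)]
        Cmp_Idt_left_hom[OF H(2)] by simp
  qed
  ultimately have "Cmp C \<xi> twist = Cmp C (Cmp C \<xi> dg) \<pi>2"
    using Cmp_assoc_hom[OF w(1) Fx_prop(1) D(3)] Cmp_assoc_hom[OF w(1) Fp_prop(1) D(3)] D(6)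
      Cmp_assoc_hom[OF H(2) H(3) D(3)] by metis
  then show ?thesis using D(5) Cmp_Idt_left_hom[OF H(2)] by simp
qed

lemma twist_involutive: "Cmp C twist twist = Idt C R"
proof (rule pullback_eqI[OF base_change_pullback[OF delta_Ar(1,2)] Cmp_in_hom[OF twist_prop(1,1)] Idt_in_hom[OF R_Ob]])
  note T = twist_prop and H = R_homs and D = descent_data_facts
  show "Cmp C \<pi>1 (Cmp C twist twist) = Cmp C \<pi>1 (Idt C R)"
    using Cmp_assoc_hom[OF T(1,1) H(1)] T(2) Cmp_assoc_hom[OF T(1) H(2) D(2)] T(3) D(4) Cmp_Idt_right_hom[OF H(1)]
    by simp
  show "Cmp C \<pi>2 (Cmp C twist twist) = Cmp C \<pi>2 (Idt C R)"
    using Cmp_assoc_hom[OF T(1,1) H(2)] T(3) xi_twist Cmp_Idt_right_hom[OF H(2)] by simp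
qed

lemma xi_pullback: "is_pullback C p \<delta> R (Cmp C \<gamma> \<pi>2) \<xi>"
  using pullback_iso_transfer[OF base_change_pullback[OF delta_Ar(1,2)] twist_prop(1,1) twist_involutive
      twist_involutive] twist_prop
  by simp

lemma xi_pi2_equiv_rel: "is_equiv_rel C \<xi> \<pi>2"
proof (rule equiv_relI[OF descent_data_facts(3) R_homs(2) _ R_homs(3) descent_data_facts(5)
      diagmap_prop(3)[OF descent_data_facts(2)] twist_prop(1) xi_twist twist_prop(3)])
  note D = descent_data_facts and H = R_homs
  show "x = y" if "x \<in> hom C T R" "y \<in> hom C T R" "Cmp C \<xi> x = Cmp C \<xi> y" "Cmp C \<pi>2 x = Cmp C \<pi>2 y" for T x y
    using pullback_eqI[OF base_change_pullback[OF delta_Ar(1,2)]] that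
      Cmp_assoc_hom[OF that(1) D(3) D(2)] Cmp_assoc_hom[OF that(2) D(3) D(2)] D(4) by metis
  show "\<exists>z\<in>hom C T R. Cmp C \<xi> z = Cmp C \<xi> x \<and> Cmp C \<pi>2 z = Cmp C \<pi>2 y"
    if x: "x \<in> hom C T R" and y: "y \<in> hom C T R" and xy: "Cmp C \<pi>2 x = Cmp C \<xi> y" for T x y
  proof -
    have "Cmp C p (Cmp C \<pi>1 x) = Cmp C \<delta> (Cmp C \<pi>2 x)"
      using Cmp_assoc_hom[OF x H(1), of p B] Cmp_assoc_hom[OF x H(2) H(4)] delta_pi2 by (simp add: hom_def)
    also have "\<dots> = Cmp C \<delta>2 y" using xy Cmp_assoc_hom[OF y D(3) H(4)] delta_xi by simp
    finally have sq: "Cmp C p (Cmp C \<pi>1 x) = Cmp C \<delta>2 y" .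
    have "y \<in> hom C T (Dom C \<delta>2)" using y delta2_Ar(3) by simp
    then obtain w where w: "w \<in> hom C T (PbO \<delta>2)" "Cmp C (Pb1 \<delta>2) w = Cmp C \<pi>1 x" "Cmp C (Pb2 \<delta>2) w = y"
      using pullback_univ[OF base_change_pullback[OF delta2_Ar(1,2)] Cmp_in_hom[OF x H(1)] _ sq] by blast
    have "Cmp C Fx w = x"
    proof (rule pullback_eqI[OF base_change_pullback[OF delta_Ar(1,2)] Cmp_in_hom[OF w(1) Fx_prop(1)] x])
      show "Cmp C \<pi>1 (Cmp C Fx w) = Cmp C \<pi>1 x" using Cmp_assoc_hom[OF w(1) Fx_prop(1) H(1)] Fx_prop(2) w(2) by simp
      show "Cmp C \<pi>2 (Cmp C Fx w) = Cmp C \<pi>2 x"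
        using Cmp_assoc_hom[OF w(1) Fx_prop(1) H(2)] Fx_prop(3) Cmp_assoc_hom[OF w(1) RR_homs(2) D(3)] w(3) xy
        by simp
    qed
    then have "Cmp C \<xi> (Cmp C Fp w) = Cmp C \<xi> x"
      using Cmp_assoc_hom[OF w(1) Fx_prop(1) D(3)] Cmp_assoc_hom[OF w(1) Fp_prop(1) D(3)] D(6) by simp
    moreover have "Cmp C \<pi>2 (Cmp C Fp w) = Cmp C \<pi>2 y"
      using Cmp_assoc_hom[OF w(1) Fp_prop(1) H(2)] Fp_prop(3) Cmp_assoc_hom[OF w(1) RR_homs(2) H(2)] w(3) by simp
    ultimately show ?thesis using Cmp_in_hom[OF w(1) Fp_prop(1)] by blast
  qed
qed

end

section \<open>Concrete categories\<close>

locale concrete_category = category_with_pullbacks +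
  fixes U :: "('o, 'm, 'u set, 'u set \<times> ('u \<Rightarrow> 'u) \<times> 'u set) ftor"
  assumes U_functor: "is_functor C SetCat U"
    and U_faithful: "faithful C U"
    and U_preserves_pullbacks: "preserves_pullbacks C SetCat U"
    and U_preserves_coeqs: "preserves_coeq_equiv_rels C SetCat U"
begin

abbreviation "Uob \<equiv> fst U"
abbreviation "Uar f \<equiv> fst (snd (snd U f))"

lemma Uar_SetCat: "f \<in> Ar C \<Longrightarrow> snd U f = (Uob (Dom C f), Uar f, Uob (Cod C f)) \<and> Uar f \<in> Uob (Dom C f) \<rightarrow>\<^sub>E Uob (Cod C f)"
  using U_functor unfolding is_functor_def
  by (cases "snd U f") (auto simp: SetCat_hom dest!: bspec[of _ _ f])

lemma Uar_in[simp]: "f \<in> Ar C \<Longrightarrow> x \<in> Uob (Dom C f) \<Longrightarrow> Uar f x \<in> Uob (Cod C f)"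
  using Uar_SetCat by blast

lemma Uar_Cmp:
  assumes "f \<in> Ar C" "g \<in> Ar C" "Cod C f = Dom C g" "x \<in> Uob (Dom C f)"
  shows "Uar (Cmp C g f) x = Uar g (Uar f x)"
proof -
  have "snd U (Cmp C g f) = Cmp SetCat (snd U g) (snd U f)"
    using U_functor assms unfolding is_functor_def by blast
  also have "\<dots> = (Uob (Dom C f), compose (Uob (Dom C f)) (Uar g) (Uar f), Uob (Cod C g))"
    using conjunct1[OF Uar_SetCat[OF assms(1)]] conjunct1[OF Uar_SetCat[OF assms(2)]] by (metis SetCat_simps(5))
  finally show ?thesis using assms(4) by (simp add: compose_def)
qed

lemma Uar_Idt: "a \<in> Ob C \<Longrightarrow> x \<in> Uob a \<Longrightarrow> Uar (Idt C a) x = x"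
  using U_functor unfolding is_functor_def by (simp add: SetCat_simps)

lemma Uar_ext:
  assumes "f \<in> hom C a b" "g \<in> hom C a b" "\<And>x. x \<in> Uob a \<Longrightarrow> Uar f x = Uar g x"
  shows "f = g"
proof -
  have ar: "f \<in> Ar C" "g \<in> Ar C" and d: "Dom C f = a" "Dom C g = a" "Cod C f = b" "Cod C g = b"
    using assms by (auto simp: hom_def)
  have "Uar f = Uar g" using Uar_SetCat[OF ar(1)] Uar_SetCat[OF ar(2)] d assms(3)
    by (intro PiE_ext[of _ "Uob a" "\<lambda>_. Uob b"]) auto
  then have "snd U f = snd U g" using conjunct1[OF Uar_SetCat[OF ar(1)]] conjunct1[OF Uar_SetCat[OF ar(2)]] d by simp
  moreover have "a \<in> Ob C" "b \<in> Ob C" using ar d by auto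
  ultimately show ?thesis using U_faithful assms unfolding faithful_def by blast
qed

lemma pullback_Uar:
  assumes "is_pullback C f g Pb p1 p2"
  shows "is_pullback SetCat (Uob (Dom C f), Uar f, Uob (Cod C f)) (Uob (Dom C g), Uar g, Uob (Cod C g)) (Uob Pb)
     (Uob Pb, Uar p1, Uob (Dom C f)) (Uob Pb, Uar p2, Uob (Dom C g))"
proof -
  have h: "f \<in> Ar C" "g \<in> Ar C" "p1 \<in> hom C Pb (Dom C f)" "p2 \<in> hom C Pb (Dom C g)"
    using assms by (auto simp: is_pullback_def)
  have "is_pullback SetCat (snd U f) (snd U g) (Uob Pb) (snd U p1) (snd U p2)"
    using U_preserves_pullbacks assms by (simp add: preserves_pullbacks_def)
  moreover have "snd U p1 = (Uob Pb, Uar p1, Uob (Dom C f))" "snd U p2 = (Uob Pb, Uar p2, Uob (Dom C g))"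
    using h(3,4) conjunct1[OF Uar_SetCat[of p1]] conjunct1[OF Uar_SetCat[of p2]] by (auto simp: hom_def)
  ultimately show ?thesis using conjunct1[OF Uar_SetCat[OF h(1)]] conjunct1[OF Uar_SetCat[OF h(2)]] by metis
qed

lemma pullback_elem_square:
  assumes "is_pullback C f g Pb p1 p2" "z \<in> Uob Pb"
  shows "Uar p1 z \<in> Uob (Dom C f)" "Uar p2 z \<in> Uob (Dom C g)" "Uar f (Uar p1 z) = Uar g (Uar p2 z)"
proof -
  have h: "f \<in> Ar C" "g \<in> Ar C" "p1 \<in> hom C Pb (Dom C f)" "p2 \<in> hom C Pb (Dom C g)"
    "Cmp C f p1 = Cmp C g p2"
    using assms by (auto simp: is_pullback_def)
  show "Uar p1 z \<in> Uob (Dom C f)" "Uar p2 z \<in> Uob (Dom C g)" using h assms(2) Uar_in[of p1 z] Uar_in[of p2 z] by (auto simp: hom_def)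
  show "Uar f (Uar p1 z) = Uar g (Uar p2 z)" using Uar_Cmp[of p1 f z] Uar_Cmp[of p2 g z] h assms(2)
    by (auto simp: hom_def)
qed

lemma pullback_elem_exists:
  assumes "is_pullback C f g Pb p1 p2" "x \<in> Uob (Dom C f)" "y \<in> Uob (Dom C g)" "Uar f x = Uar g y"
  shows "\<exists>z\<in>Uob Pb. Uar p1 z = x \<and> Uar p2 z = y"
  using SetCat_pullback_elem_exists[OF pullback_Uar[OF assms(1)]] assms by blast

lemma pullback_elem_unique:
  assumes "is_pullback C f g Pb p1 p2" "z \<in> Uob Pb" "z' \<in> Uob Pb"
  "Uar p1 z = Uar p1 z'" "Uar p2 z = Uar p2 z'"
  shows "z = z'"
  using SetCat_pullback_elem_unique[OF pullback_Uar[OF assms(1)]] assms by blast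

lemma Uar_Cmp_hom: "f \<in> hom C a b \<Longrightarrow> g \<in> hom C b c \<Longrightarrow> x \<in> Uob a \<Longrightarrow> Uar (Cmp C g f) x = Uar g (Uar f x)"
  using Uar_Cmp[of f g x] by (auto simp: hom_def)

lemma Uar_in_hom: "f \<in> hom C a b \<Longrightarrow> x \<in> Uob a \<Longrightarrow> Uar f x \<in> Uob b"
  using Uar_in[of f x] by (auto simp: hom_def)

lemma regular_epi_descend:
  assumes r: "regular_epi C h" and k: "k \<in> Ar C" "Dom C k = Dom C h"
    and c: "\<And>x y. x \<in> Uob (Dom C h) \<Longrightarrow> y \<in> Uob (Dom C h) \<Longrightarrow> Uar h x = Uar h y \<Longrightarrow> Uar k x = Uar k y"
  shows "\<exists>u\<in>hom C (Cod C h) (Cod C k). Cmp C u h = k"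
proof -
  obtain f g where co: "is_coequalizer C f g h" using r by (auto simp: regular_epi_def)
  have fg: "f \<in> Ar C" "g \<in> Ar C" "h \<in> Ar C" "Dom C f = Dom C g" "Cod C f = Cod C g" "Dom C h = Cod C f"
    "Cmp C h f = Cmp C h g"
    using co by (auto simp: is_coequalizer_def)
  have "Cmp C k f = Cmp C k g"
  proof (rule Uar_ext[of _ "Dom C f" "Cod C k"])
    show "Cmp C k f \<in> hom C (Dom C f) (Cod C k)" "Cmp C k g \<in> hom C (Dom C f) (Cod C k)"
      using fg k by (auto simp: hom_def)
    fix x assume x: "x \<in> Uob (Dom C f)"
    have "Uar h (Uar f x) = Uar h (Uar g x)"
      using Uar_Cmp[of f h x] Uar_Cmp[of g h x] fg x by simp
    then have "Uar k (Uar f x) = Uar k (Uar g x)"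
      using c[of "Uar f x" "Uar g x"] fg x Uar_in[of f x] Uar_in[of g x] by simp
    then show "Uar (Cmp C k f) x = Uar (Cmp C k g) x"
      using Uar_Cmp[of f k x] Uar_Cmp[of g k x] fg x k by simp
  qed
  moreover have "\<forall>k\<in>Ar C. Dom C k = Cod C f \<and> Cmp C k f = Cmp C k g \<longrightarrow>
        (\<exists>!u. u \<in> hom C (Cod C h) (Cod C k) \<and> Cmp C u h = k)" using co by (simp add: is_coequalizer_def)
  ultimately have "\<exists>!u. u \<in> hom C (Cod C h) (Cod C k) \<and> Cmp C u h = k" using k fg by auto
  then show ?thesis by auto
qed

lemma Uar_eq: "f \<in> Ar C \<Longrightarrow> snd U f = (Uob (Dom C f), Uar f, Uob (Cod C f))"
  using Uar_SetCat by blast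

lemma coequalizer_Uar:
  assumes eqr: "is_equiv_rel C f g" and co: "is_coequalizer C f g h"
  shows "is_coequalizer SetCat (Uob (Dom C f), Uar f, Uob (Cod C f)) (Uob (Dom C f), Uar g, Uob (Cod C f))
     (Uob (Cod C f), Uar h, Uob (Cod C h))"
proof -
  have a: "f \<in> Ar C" "g \<in> Ar C" "h \<in> Ar C" "Dom C g = Dom C f" "Cod C g = Cod C f" "Dom C h = Cod C f"
    using co by (auto simp: is_coequalizer_def)
  have "is_coequalizer SetCat (snd U f) (snd U g) (snd U h)" using U_preserves_coeqs eqr co
    by (simp add: preserves_coeq_equiv_rels_def)
  then show ?thesis using Uar_eq[OF a(1)] Uar_eq[OF a(2)] Uar_eq[OF a(3)] a(4-6) by metis
qed

lemma coequalizer_elem_surj: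
  assumes eqr: "is_equiv_rel C f g" and co: "is_coequalizer C f g h" and y: "y \<in> Uob (Cod C h)"
  shows "\<exists>x\<in>Uob (Dom C h). Uar h x = y"
proof -
  have "Dom C h = Cod C f" using co by (auto simp: is_coequalizer_def)
  then show ?thesis using SetCat_coequalizer_surj[OF coequalizer_Uar[OF eqr co] y] by simp
qed

lemma kernel_pair_coequalizer:
  assumes h: "regular_epi C h"
  shows "is_coequalizer C (pb1 C h h) (pb2 C h h) h"
proof -
  have ha: "h \<in> Ar C" using regular_epi_Ar[OF h] .
  note pb = chosen_pullback[OF ha ha refl]
  note pp = pullback_parts[OF pb]
  let ?K = "pbO C h h" and ?k1 = "pb1 C h h" and ?k2 = "pb2 C h h"
  have un: "\<exists>!u. u \<in> hom C (Cod C h) (Cod C k) \<and> Cmp C u h = k"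
    if k: "k \<in> Ar C" "Dom C k = Cod C ?k1" "Cmp C k ?k1 = Cmp C k ?k2" for k
  proof -
    have "\<exists>u\<in>hom C (Cod C h) (Cod C k). Cmp C u h = k"
    proof (rule regular_epi_descend[OF h k(1)])
      show "Dom C k = Dom C h" using k pp by simp
      fix x y assume x: "x \<in> Uob (Dom C h)" and y: "y \<in> Uob (Dom C h)" and e: "Uar h x = Uar h y"
      obtain z where z: "z \<in> Uob ?K" "Uar ?k1 z = x" "Uar ?k2 z = y" using pullback_elem_exists[OF pb x y e] by blast
      have "Uar (Cmp C k ?k1) z = Uar (Cmp C k ?k2) z" using k(3) by simp
      then show "Uar k x = Uar k y" using Uar_Cmp[of ?k1 k z] Uar_Cmp[of ?k2 k z] k pp z by simp
    qed
    then obtain u where u: "u \<in> hom C (Cod C h) (Cod C k)" "Cmp C u h = k" by blast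
    have "v = u" if "v \<in> hom C (Cod C h) (Cod C k)" "Cmp C v h = k" for v
      using regular_epi_cancel[OF h that(1) u(1)] that(2) u(2) by simp
    then show ?thesis using u by blast
  qed
  show ?thesis unfolding is_coequalizer_def using pp ha un by auto
qed

lemma regular_epi_elem_surj:
  assumes h: "regular_epi C h" and y: "y \<in> Uob (Cod C h)"
  shows "\<exists>x\<in>Uob (Dom C h). Uar h x = y"
  using coequalizer_elem_surj[OF kernel_pair_equiv_rel[OF regular_epi_Ar[OF h]] kernel_pair_coequalizer[OF h] y] .

end

locale concrete_base_change = concrete_category + base_change
begin

lemma base_change_elem_square:
  assumes "a \<in> Ar C" "Cod C a = B" "z \<in> Uob (PbO a)"
  shows "Uar (Pb1 a) z \<in> Uob E" "Uar (Pb2 a) z \<in> Uob (Dom C a)" "Uar p (Uar (Pb1 a) z) = Uar a (Uar (Pb2 a) z)"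
  using pullback_elem_square[OF base_change_pullback[OF assms(1,2)] assms(3)] by auto

lemma base_change_elem_exists:
  assumes "a \<in> Ar C" "Cod C a = B" "x \<in> Uob E" "y \<in> Uob (Dom C a)" "Uar p x = Uar a y"
  shows "\<exists>z\<in>Uob (PbO a). Uar (Pb1 a) z = x \<and> Uar (Pb2 a) z = y"
  using pullback_elem_exists[OF base_change_pullback[OF assms(1,2)]] assms by auto

lemma base_change_elem_unique:
  assumes "a \<in> Ar C" "Cod C a = B" "z \<in> Uob (PbO a)" "z' \<in> Uob (PbO a)"
  "Uar (Pb1 a) z = Uar (Pb1 a) z'" "Uar (Pb2 a) z = Uar (Pb2 a) z'"
  shows "z = z'"
  using pullback_elem_unique[OF base_change_pullback[OF assms(1,2)]] assms by auto

lemma fibmap_elem: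
  assumes a: "a \<in> Ar C" "Cod C a = B" and a': "a' \<in> Ar C" "Cod C a' = B"
  and h: "h \<in> hom C (Dom C a) (Dom C a')" and e: "Cmp C a' h = a" and z: "z \<in> Uob (PbO a)"
  shows "Uar (fibmap C p a a' h) z \<in> Uob (PbO a')"
    "Uar (Pb1 a') (Uar (fibmap C p a a' h) z) = Uar (Pb1 a) z"
    "Uar (Pb2 a') (Uar (fibmap C p a a' h) z) = Uar h (Uar (Pb2 a) z)"
proof -
  note A = base_change_parts[OF a] and A' = base_change_parts[OF a']
  note F = fibmap_prop[OF a a' h e]
  let ?f = "fibmap C p a a' h"
  have fa: "?f \<in> Ar C" "Dom C ?f = PbO a" "Cod C ?f = PbO a'" using F by (auto simp: hom_def)
  have ha: "h \<in> Ar C" "Dom C h = Dom C a" "Cod C h = Dom C a'" using h by (auto simp: hom_def)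
  show "Uar ?f z \<in> Uob (PbO a')" using Uar_in[of ?f z] fa z by simp
  show "Uar (Pb1 a') (Uar ?f z) = Uar (Pb1 a) z" using Uar_Cmp[of ?f "Pb1 a'" z] fa A' F z by simp
  show "Uar (Pb2 a') (Uar ?f z) = Uar h (Uar (Pb2 a) z)"
    using Uar_Cmp[of ?f "Pb2 a'" z] Uar_Cmp[of "Pb2 a" h z] fa A A' F z ha by simp
qed

lemma diagmap_elem:
  assumes g: "g \<in> hom C X E" and x: "x \<in> Uob X"
  shows "Uar (diagmap C p X g) x \<in> Uob (PbO (Cmp C p g))"
    "Uar (Pb1 (Cmp C p g)) (Uar (diagmap C p X g) x) = Uar g x"
    "Uar (Pb2 (Cmp C p g)) (Uar (diagmap C p X g) x) = x"
proof -
  have gamma_Ar: "g \<in> Ar C" "Dom C g = X" "Cod C g = E" using g by (auto simp: hom_def)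
  let ?a = "Cmp C p g"
  have a: "?a \<in> Ar C" "Cod C ?a = B" "Dom C ?a = X" using gamma_Ar by auto
  note A = base_change_parts[OF a(1,2)]
  note F = diagmap_prop[OF g]
  let ?f = "diagmap C p X g"
  have X: "X \<in> Ob C" using gamma_Ar Dom_in_Ob by blast
  have fa: "?f \<in> Ar C" "Dom C ?f = X" "Cod C ?f = PbO ?a" using F by (auto simp: hom_def)
  show "Uar ?f x \<in> Uob (PbO ?a)" using Uar_in[of ?f x] fa x by simp
  show "Uar (Pb1 ?a) (Uar ?f x) = Uar g x" using Uar_Cmp[of ?f "Pb1 ?a" x] fa A F x by simp
  show "Uar (Pb2 ?a) (Uar ?f x) = x" using Uar_Cmp[of ?f "Pb2 ?a" x] fa A F x Uar_Idt[OF X x] by simp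
qed

lemma K_xi_elem:
  assumes a: "\<alpha> \<in> Ar C" "Cod C \<alpha> = B" and v: "v \<in> Uob (PbO (Cmp C p (Pb1 \<alpha>)))"
  shows "Uar (K_xi \<alpha>) v \<in> Uob (PbO \<alpha>)"
    "Uar (Pb1 \<alpha>) (Uar (K_xi \<alpha>) v) = Uar (Pb1 (Cmp C p (Pb1 \<alpha>))) v"
    "Uar (Pb2 \<alpha>) (Uar (K_xi \<alpha>) v) = Uar (Pb2 \<alpha>) (Uar (Pb2 (Cmp C p (Pb1 \<alpha>))) v)"
proof -
  note A = base_change_parts[OF a]
  let ?d = "Cmp C p (Pb1 \<alpha>)"
  have d: "?d \<in> Ar C" "Cod C ?d = B" "Dom C ?d = PbO \<alpha>" using A a by auto
  have h: "Pb2 \<alpha> \<in> hom C (Dom C ?d) (Dom C \<alpha>)" using A d by (simp add: hom_def)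
  have e: "Cmp C \<alpha> (Pb2 \<alpha>) = ?d" using base_change_square[OF a] by simp
  note F = fibmap_elem[OF d(1,2) a h e v]
  show "Uar (K_xi \<alpha>) v \<in> Uob (PbO \<alpha>)"
    "Uar (Pb1 \<alpha>) (Uar (K_xi \<alpha>) v) = Uar (Pb1 ?d) v"
    "Uar (Pb2 \<alpha>) (Uar (K_xi \<alpha>) v) = Uar (Pb2 \<alpha>) (Uar (Pb2 ?d) v)" using F by (auto simp: K_xi_def)
qed

lemma pb_elem_ex1:
  assumes a: "a \<in> Ar C" "Cod C a = B" "e \<in> Uob E" "c \<in> Uob (Dom C a)" "Uar p e = Uar a c"
  shows "\<exists>!v. v \<in> Uob (PbO a) \<and> Uar (Pb1 a) v = e \<and> Uar (Pb2 a) v = c"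
proof -
  obtain v where v: "v \<in> Uob (PbO a)" "Uar (Pb1 a) v = e" "Uar (Pb2 a) v = c" using base_change_elem_exists[OF assms] by blast
  show ?thesis
  proof (rule ex1I[of _ v])
    show "v \<in> Uob (PbO a) \<and> Uar (Pb1 a) v = e \<and> Uar (Pb2 a) v = c" using v by simp
    fix v' assume "v' \<in> Uob (PbO a) \<and> Uar (Pb1 a) v' = e \<and> Uar (Pb2 a) v' = c"
    then show "v' = v" using base_change_elem_unique[OF a(1,2), of v' v] v by simp
  qed
qed

definition "pb_elem a e c = (THE v. v \<in> Uob (PbO a) \<and> Uar (Pb1 a) v = e \<and> Uar (Pb2 a) v = c)"

lemma pb_elem_prop:
  assumes a: "a \<in> Ar C" "Cod C a = B" "e \<in> Uob E" "c \<in> Uob (Dom C a)" "Uar p e = Uar a c"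
  shows "pb_elem a e c \<in> Uob (PbO a)" "Uar (Pb1 a) (pb_elem a e c) = e" "Uar (Pb2 a) (pb_elem a e c) = c"
  using theI'[OF pb_elem_ex1[OF assms]] unfolding pb_elem_def by auto

lemma pb_elem_eq:
  assumes a: "a \<in> Ar C" "Cod C a = B" and v: "v \<in> Uob (PbO a)"
  "Uar (Pb1 a) v = e" "Uar (Pb2 a) v = c"
  shows "pb_elem a e c = v"
  unfolding pb_elem_def
proof (rule the_equality)
  show "v \<in> Uob (PbO a) \<and> Uar (Pb1 a) v = e \<and> Uar (Pb2 a) v = c" using v by simp
  fix v' assume "v' \<in> Uob (PbO a) \<and> Uar (Pb1 a) v' = e \<and> Uar (Pb2 a) v' = c"
  then show "v' = v" using base_change_elem_unique[OF a, of v' v] v by simp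
qed

end

section \<open>Effective descent\<close>

locale descent_class = concrete_category +
  fixes P
  assumes has_coeqs: "has_coeq_of_equiv_rels C"
    and P_Ar: "P \<subseteq> Ar C"
    and P_regular_epi: "\<forall>h\<in>P. regular_epi C h"
    and P_pullback_stable: "pullback_stable C P"
    and P_closed: "\<forall>f g h. is_coequalizer C f g h \<and> exact_image C U f g h \<and> f \<in> P \<and> g \<in> P \<longrightarrow> h \<in> P"

locale descent_class_member = descent_class + concrete_base_change +
  assumes p_in_P: "p \<in> P"
begin

lemma Pb2_in_P: "a \<in> Ar C \<Longrightarrow> Cod C a = B \<Longrightarrow> Pb2 a \<in> P"
  using P_pullback_stable p_in_P base_change_pullback unfolding pullback_stable_def by blast

lemma Pb2_regular_epi: "a \<in> Ar C \<Longrightarrow> Cod C a = B \<Longrightarrow> regular_epi C (Pb2 a)"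
  using Pb2_in_P P_regular_epi by blast

text \<open>A morphism of descent data between comparison objects is constant on the fibres of the
  regular epimorphism E x_B A -> A, because it commutes with the descent structure.\<close>

lemma K_morphism_descends:
  assumes a: "\<alpha> \<in> Ar C" "Cod C \<alpha> = B" and a': "\<alpha>' \<in> Ar C" "Cod C \<alpha>' = B"
    and dm: "is_descent_morphism C p (PbO \<alpha>, Pb1 \<alpha>, K_xi \<alpha>) \<phi> (PbO \<alpha>', Pb1 \<alpha>', K_xi \<alpha>')"
  shows "\<exists>h\<in>hom C (Dom C \<alpha>) (Dom C \<alpha>'). Cmp C h (Pb2 \<alpha>) = Cmp C (Pb2 \<alpha>') \<phi>"
proof -
  let ?d = "Cmp C p (Pb1 \<alpha>)" and ?d' = "Cmp C p (Pb1 \<alpha>')"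
  note A = base_change_parts[OF a] and A' = base_change_parts[OF a']
  have d: "?d \<in> Ar C" "Cod C ?d = B" "Dom C ?d = PbO \<alpha>" and d': "?d' \<in> Ar C" "Cod C ?d' = B" "Dom C ?d' = PbO \<alpha>'"
    using A A' by auto
  have ph: "\<phi> \<in> hom C (PbO \<alpha>) (PbO \<alpha>')" "Cmp C (Pb1 \<alpha>') \<phi> = Pb1 \<alpha>"
    and phx: "Cmp C \<phi> (K_xi \<alpha>) = Cmp C (K_xi \<alpha>') (fibmap C p ?d ?d' \<phi>)"
    using dm by (auto simp: is_descent_morphism_def)
  have pha: "\<phi> \<in> Ar C" "Dom C \<phi> = PbO \<alpha>" "Cod C \<phi> = PbO \<alpha>'" using ph by (auto simp: hom_def)
  have hf: "\<phi> \<in> hom C (Dom C ?d) (Dom C ?d')" using ph d d' by simp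
  have ef: "Cmp C ?d' \<phi> = ?d" using Cmp_assoc[of \<phi> "Pb1 \<alpha>'" p] pha A' ph by simp
  let ?G = "fibmap C p ?d ?d' \<phi>"
  have phx_el: "Uar \<phi> (Uar (K_xi \<alpha>) v) = Uar (K_xi \<alpha>') (Uar ?G v)" if v: "v \<in> Uob (PbO ?d)" for v
    using Uar_Cmp_hom[OF K_xi_prop(1)[OF a] ph(1) v] Uar_Cmp_hom[OF fibmap_prop(1)[OF d(1,2) d'(1,2) hf ef] K_xi_prop(1)[OF a'] v]
      phx by simp
  let ?k = "Cmp C (Pb2 \<alpha>') \<phi>"
  have ka: "?k \<in> Ar C" "Dom C ?k = Dom C (Pb2 \<alpha>)" "Cod C ?k = Dom C \<alpha>'" using pha A A' a' by auto
  have "\<exists>u\<in>hom C (Cod C (Pb2 \<alpha>)) (Cod C ?k). Cmp C u (Pb2 \<alpha>) = ?k"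
  proof (rule regular_epi_descend[OF Pb2_regular_epi[OF a] ka(1,2)])
    fix x y assume x: "x \<in> Uob (Dom C (Pb2 \<alpha>))" and y: "y \<in> Uob (Dom C (Pb2 \<alpha>))"
      and xy: "Uar (Pb2 \<alpha>) x = Uar (Pb2 \<alpha>) y"
    have x': "x \<in> Uob (PbO \<alpha>)" and y': "y \<in> Uob (PbO \<alpha>)" using x y A by auto
    note Sx = base_change_elem_square[OF a x'] and Sy = base_change_elem_square[OF a y']
    have "Uar ?d y = Uar p (Uar (Pb1 \<alpha>) y)" using Uar_Cmp[of "Pb1 \<alpha>" p y] A y' by simp
    then have eq: "Uar p (Uar (Pb1 \<alpha>) x) = Uar ?d y" using Sx Sy xy by simp
    obtain v where v: "v \<in> Uob (PbO ?d)" "Uar (Pb1 ?d) v = Uar (Pb1 \<alpha>) x" "Uar (Pb2 ?d) v = y"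
      using base_change_elem_exists[OF d(1,2) Sx(1) _ eq] y' d by auto
    note K = K_xi_elem[OF a v(1)]
    have kv: "Uar (K_xi \<alpha>) v = x" by (rule base_change_elem_unique[OF a K(1) x']) (simp_all add: K v xy)
    note Gv = fibmap_elem[OF d(1,2) d'(1,2) hf ef v(1)]
    note K' = K_xi_elem[OF a' Gv(1)]
    have "Uar (Pb2 \<alpha>') (Uar \<phi> x) = Uar (Pb2 \<alpha>') (Uar \<phi> y)"
      using phx_el[OF v(1)] kv K' Gv v by simp
    then show "Uar ?k x = Uar ?k y"
      using Uar_Cmp[of \<phi> "Pb2 \<alpha>'" x] Uar_Cmp[of \<phi> "Pb2 \<alpha>'" y] pha A' x' y' by simp
  qed
  then show ?thesis using A ka by simp
qed

lemma K_morphism_lift: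
  assumes a: "\<alpha> \<in> Ar C" "Cod C \<alpha> = B" and a': "\<alpha>' \<in> Ar C" "Cod C \<alpha>' = B"
    and ph: "\<phi> \<in> hom C (PbO \<alpha>) (PbO \<alpha>')" "Cmp C (Pb1 \<alpha>') \<phi> = Pb1 \<alpha>"
    and h: "h \<in> hom C (Dom C \<alpha>) (Dom C \<alpha>')" and hk: "Cmp C h (Pb2 \<alpha>) = Cmp C (Pb2 \<alpha>') \<phi>"
  shows "Cmp C \<alpha>' h = \<alpha>" "fibmap C p \<alpha> \<alpha>' h = \<phi>"
proof -
  note A = base_change_homs[OF a] and A' = base_change_homs[OF a']
  have a'h: "\<alpha>' \<in> hom C (Dom C \<alpha>') B" and ah: "\<alpha> \<in> hom C (Dom C \<alpha>) B" using a a' by (simp_all add: hom_def)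
  show eh: "Cmp C \<alpha>' h = \<alpha>"
  proof (rule regular_epi_cancel[OF Pb2_regular_epi[OF a]])
    show "Cmp C \<alpha>' h \<in> hom C (Cod C (Pb2 \<alpha>)) B" "\<alpha> \<in> hom C (Cod C (Pb2 \<alpha>)) B"
      using Cmp_in_hom[OF h a'h] ah base_change_parts[OF a] by simp_all
    have "Cmp C (Cmp C \<alpha>' h) (Pb2 \<alpha>) = Cmp C (Cmp C \<alpha>' (Pb2 \<alpha>')) \<phi>"
      using Cmp_assoc_hom[OF A(2) h a'h] Cmp_assoc_hom[OF ph(1) A'(2) a'h] hk by simp
    also have "\<dots> = Cmp C p (Pb1 \<alpha>)"
      using base_change_square[OF a'] Cmp_assoc_hom[OF ph(1) A'(1), of p B] ph(2) by (simp add: hom_def)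
    also have "\<dots> = Cmp C \<alpha> (Pb2 \<alpha>)" using base_change_square[OF a] .
    finally show "Cmp C (Cmp C \<alpha>' h) (Pb2 \<alpha>) = Cmp C \<alpha> (Pb2 \<alpha>)" .
  qed
  show "fibmap C p \<alpha> \<alpha>' h = \<phi>"
    by (rule fibmap_unique[OF a a' h eh ph]) (simp add: hk)
qed

lemma K_fully_faithful:
  assumes X: "X \<in> Ob (Slice C B)" and Y: "Y \<in> Ob (Slice C B)"
    and g: "g \<in> hom (Des C p) (fst (Kp C p) X) (fst (Kp C p) Y)"
  shows "\<exists>!f. f \<in> hom (Slice C B) X Y \<and> snd (Kp C p) f = g"
proof -
  obtain A \<alpha> where X': "X = (A, \<alpha>)" by (cases X)
  obtain A' \<alpha>' where Y': "Y = (A', \<alpha>')" by (cases Y)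
  have a: "\<alpha> \<in> Ar C" "Cod C \<alpha> = B" "Dom C \<alpha> = A" using X X' by (auto simp: Slice_simps hom_def)
  have a': "\<alpha>' \<in> Ar C" "Cod C \<alpha>' = B" "Dom C \<alpha>' = A'" using Y Y' by (auto simp: Slice_simps hom_def)
  have fK: "fst (Kp C p) = K_obj C p" by (simp add: Kp_def)
  obtain \<phi> where g': "g = ((PbO \<alpha>, Pb1 \<alpha>, K_xi \<alpha>), \<phi>, (PbO \<alpha>', Pb1 \<alpha>', K_xi \<alpha>'))"
    and dm: "is_descent_morphism C p (PbO \<alpha>, Pb1 \<alpha>, K_xi \<alpha>) \<phi> (PbO \<alpha>', Pb1 \<alpha>', K_xi \<alpha>')"
    using g X' Y' fK by (cases g) (auto simp: hom_def Des_simps K_obj_eq)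
  have ph: "\<phi> \<in> hom C (PbO \<alpha>) (PbO \<alpha>')" "Cmp C (Pb1 \<alpha>') \<phi> = Pb1 \<alpha>"
    using dm by (auto simp: is_descent_morphism_def)
  obtain h where h: "h \<in> hom C (Dom C \<alpha>) (Dom C \<alpha>')" and hk: "Cmp C h (Pb2 \<alpha>) = Cmp C (Pb2 \<alpha>') \<phi>"
    using K_morphism_descends[OF a(1,2) a'(1,2) dm] by blast
  note L = K_morphism_lift[OF a(1,2) a'(1,2) ph h hk]
  have "(X, h, Y) \<in> hom (Slice C B) X Y" using X Y h L(1) X' Y' a(3) a'(3) by (simp add: hom_def Slice_simps)
  moreover have "snd (Kp C p) (X, h, Y) = g" using L(2) g' X' Y' by (simp add: Kp_def K_obj_eq)
  moreover have "f = (X, h, Y)" if f: "f \<in> hom (Slice C B) X Y" "snd (Kp C p) f = g" for f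
  proof -
    obtain h2 where f': "f = (X, h2, Y)" and h2: "h2 \<in> hom C A A'" "Cmp C \<alpha>' h2 = \<alpha>"
      using f(1) X' Y' by (cases f) (auto simp: hom_def Slice_simps)
    have "fibmap C p \<alpha> \<alpha>' h2 = \<phi>" using f(2) f' g' X' Y' by (simp add: Kp_def K_obj_eq)
    then have "Cmp C h2 (Pb2 \<alpha>) = Cmp C h (Pb2 \<alpha>)" using fibmap_prop[OF a(1,2) a'(1,2) _ h2(2)] h2(1) a(3) a'(3) hk by simp
    then have "h2 = h"
      using regular_epi_cancel[OF Pb2_regular_epi[OF a(1,2)]] h h2(1) a(3) a'(3) base_change_parts[OF a(1,2)] by simp
    then show ?thesis using f' by simp
  qed
  ultimately show ?thesis by blast
qed

end

locale descent_datum_in_class = descent_class_member + descent_datum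
begin

lemma gamma_Ar: "\<gamma> \<in> Ar C" "Dom C \<gamma> = X" "Cod C \<gamma> = E" using descent_data_facts by (auto simp: hom_def)

lemma xi_Ar: "\<xi> \<in> Ar C" "Dom C \<xi> = R" "Cod C \<xi> = X" using descent_data_facts by (auto simp: hom_def)

lemma R_parts: "R \<in> Ob C" "\<pi>1 \<in> Ar C" "\<pi>2 \<in> Ar C" "Dom C \<pi>1 = R" "Dom C \<pi>2 = R" "Cod C \<pi>1 = E" "Cod C \<pi>2 = X"
  using base_change_parts[OF delta_Ar(1,2)] delta_Ar by auto

lemma delta_elem: "x \<in> Uob X \<Longrightarrow> Uar \<delta> x = Uar p (Uar \<gamma> x)"
  using Uar_Cmp[of \<gamma> p x] gamma_Ar by simp

lemma xi_elem_in: "v \<in> Uob R \<Longrightarrow> Uar \<xi> v \<in> Uob X" using Uar_in[of \<xi> v] xi_Ar by simp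

lemma gamma_xi_elem: "v \<in> Uob R \<Longrightarrow> Uar \<gamma> (Uar \<xi> v) = Uar \<pi>1 v"
  using Uar_Cmp[of \<xi> \<gamma> v] xi_Ar gamma_Ar descent_data_facts(4) by simp

lemma R_elem_square:
  assumes "v \<in> Uob R" shows "Uar \<pi>1 v \<in> Uob E" "Uar \<pi>2 v \<in> Uob X" "Uar p (Uar \<pi>1 v) = Uar p (Uar \<gamma> (Uar \<pi>2 v))"
  using base_change_elem_square[OF delta_Ar(1,2) assms] delta_elem[of "Uar \<pi>2 v"] delta_Ar by auto

lemma diag_elem:
  assumes x: "x \<in> Uob X" shows "Uar dg x \<in> Uob R" "Uar \<pi>1 (Uar dg x) = Uar \<gamma> x" "Uar \<pi>2 (Uar dg x) = x"
  using diagmap_elem[OF descent_data_facts(2) x] by auto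

lemma xi_diag_elem:
  assumes x: "x \<in> Uob X" shows "Uar \<xi> (Uar dg x) = x"
proof -
  have dga: "dg \<in> Ar C" "Dom C dg = X" "Cod C dg = R" using diagmap_prop[OF descent_data_facts(2)] by (auto simp: hom_def)
  have "Uar (Cmp C \<xi> dg) x = x" using descent_data_facts(5) Uar_Idt[OF descent_data_facts(1) x] by simp
  then show ?thesis using Uar_Cmp[of dg \<xi> x] dga xi_Ar x by simp
qed

abbreviation "rpair e c \<equiv> pb_elem \<delta> e c"

lemma rpair_prop:
  assumes "e \<in> Uob E" "c \<in> Uob X" "Uar p e = Uar p (Uar \<gamma> c)"
  shows "rpair e c \<in> Uob R" "Uar \<pi>1 (rpair e c) = e" "Uar \<pi>2 (rpair e c) = c"
  using pb_elem_prop[OF delta_Ar(1,2) assms(1)] assms delta_elem delta_Ar by auto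

lemma rpair_eta:
  assumes "v \<in> Uob R" shows "rpair (Uar \<pi>1 v) (Uar \<pi>2 v) = v"
  using pb_elem_eq[OF delta_Ar(1,2) assms] by simp

lemma R_elem_ext:
  assumes "v \<in> Uob R" "v' \<in> Uob R" "Uar \<pi>1 v = Uar \<pi>1 v'" "Uar \<pi>2 v = Uar \<pi>2 v'" shows "v = v'"
  using base_change_elem_unique[OF delta_Ar(1,2) assms] .

lemma cocycle_elem:
  assumes w: "w \<in> Uob (PbO \<delta>2)" shows "Uar \<xi> (Uar Fx w) = Uar \<xi> (Uar Fp w)"
  using Uar_Cmp_hom[OF Fx_prop(1) descent_data_facts(3) w] Uar_Cmp_hom[OF Fp_prop(1) descent_data_facts(3) w]
    descent_data_facts(6) by simp

lemma cocycle_pair: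
  assumes e: "e \<in> Uob E" and v: "v \<in> Uob R" and pe: "Uar p e = Uar p (Uar \<pi>1 v)"
  shows "Uar \<xi> (rpair e (Uar \<xi> v)) = Uar \<xi> (rpair e (Uar \<pi>2 v))"
proof -
  have h1: "\<xi> \<in> hom C (Dom C \<delta>2) (Dom C \<delta>)" and h2: "\<pi>2 \<in> hom C (Dom C \<delta>2) (Dom C \<delta>)"
    using descent_data_facts(3) R_homs(2) delta_Ar delta2_Ar by simp_all
  note e1 = delta_xi and e2 = delta_pi2
  have d2v: "Uar \<delta>2 v = Uar p (Uar \<pi>1 v)" using Uar_Cmp[of \<pi>1 p v] R_parts v by simp
  obtain w where w: "w \<in> Uob (PbO \<delta>2)" "Uar (Pb1 \<delta>2) w = e" "Uar (Pb2 \<delta>2) w = v"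
    using base_change_elem_exists[OF delta2_Ar(1,2) e, of v] v pe d2v delta2_Ar by auto
  note G1 = fibmap_elem[OF delta2_Ar(1,2) delta_Ar(1,2) h1 e1 w(1)] and G2 = fibmap_elem[OF delta2_Ar(1,2) delta_Ar(1,2) h2 e2 w(1)]
  have "Uar Fx w = rpair e (Uar \<xi> v)" using pb_elem_eq[OF delta_Ar(1,2) G1(1)] G1 w by simp
  moreover have "Uar Fp w = rpair e (Uar \<pi>2 v)" using pb_elem_eq[OF delta_Ar(1,2) G2(1)] G2 w by simp
  ultimately show ?thesis using cocycle_elem[OF w(1)] by simp
qed

lemma twist_Ar: "twist \<in> Ar C" "Dom C twist = R" "Cod C twist = R" using twist_prop by (auto simp: hom_def)

lemma twist_elem:
  assumes v: "v \<in> Uob R"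
  shows "Uar twist v \<in> Uob R" "Uar \<pi>1 (Uar twist v) = Uar \<gamma> (Uar \<pi>2 v)" "Uar \<pi>2 (Uar twist v) = Uar \<xi> v"
proof -
  show "Uar twist v \<in> Uob R" using Uar_in[of twist v] twist_Ar v by simp
  have "Uar (Cmp C \<pi>1 twist) v = Uar (Cmp C \<gamma> \<pi>2) v" using twist_prop by simp
  then show "Uar \<pi>1 (Uar twist v) = Uar \<gamma> (Uar \<pi>2 v)" using Uar_Cmp[of twist \<pi>1 v] Uar_Cmp[of \<pi>2 \<gamma> v] twist_Ar R_parts gamma_Ar v by simp
  have "Uar (Cmp C \<pi>2 twist) v = Uar \<xi> v" using twist_prop by simp
  then show "Uar \<pi>2 (Uar twist v) = Uar \<xi> v" using Uar_Cmp[of twist \<pi>2 v] twist_Ar R_parts v by simp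
qed

lemma xi_in_P: "\<xi> \<in> P"
  using P_pullback_stable p_in_P xi_pullback unfolding pullback_stable_def by blast

lemma xi_twist_elem: "v \<in> Uob R \<Longrightarrow> Uar \<xi> (Uar twist v) = Uar \<pi>2 v"
  using Uar_Cmp_hom[OF twist_prop(1) descent_data_facts(3)] xi_twist by metis

definition "quot = (SOME h. is_coequalizer C \<xi> \<pi>2 h)"

lemma quot_coequalizer: "is_coequalizer C \<xi> \<pi>2 quot"
proof -
  have "\<exists>h. is_coequalizer C \<xi> \<pi>2 h" using has_coeqs xi_pi2_equiv_rel by (simp add: has_coeq_of_equiv_rels_def)
  then show ?thesis unfolding quot_def by (rule someI_ex)
qed

abbreviation "Aq \<equiv> Cod C quot"

lemma quot_parts: "quot \<in> Ar C" "Dom C quot = X" "quot \<in> hom C X Aq" "Cmp C quot \<xi> = Cmp C quot \<pi>2"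
  using quot_coequalizer xi_Ar by (auto simp: is_coequalizer_def hom_def)

lemma quot_elem:
  assumes v: "v \<in> Uob R" shows "Uar quot (Uar \<xi> v) = Uar quot (Uar \<pi>2 v)"
proof -
  have "Uar (Cmp C quot \<xi>) v = Uar (Cmp C quot \<pi>2) v" using quot_parts(4) by simp
  then show ?thesis using Uar_Cmp_hom[OF descent_data_facts(3) quot_parts(3) v] Uar_Cmp_hom[OF R_homs(2) quot_parts(3) v] by simp
qed

lemma quot_kernel_elem:
  assumes x: "x \<in> Uob X" and y: "y \<in> Uob X" and e: "Uar quot x = Uar quot y"
  shows "\<exists>r\<in>Uob R. Uar \<xi> r = x \<and> Uar \<pi>2 r = y"
proof -
  have co: "is_coequalizer SetCat (Uob R, Uar \<xi>, Uob X) (Uob R, Uar \<pi>2, Uob X) (Uob X, Uar quot, Uob Aq)"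
    using coequalizer_Uar[OF xi_pi2_equiv_rel quot_coequalizer] xi_Ar by simp
  show ?thesis
  proof (rule SetCat_coequalizer_kernel[OF co _ _ _ x y e])
    fix c assume c: "c \<in> Uob X"
    show "\<exists>r\<in>Uob R. Uar \<xi> r = c \<and> Uar \<pi>2 r = c" using diag_elem[OF c] xi_diag_elem[OF c] by blast
  next
    fix r assume r: "r \<in> Uob R"
    note T = twist_elem[OF r]
    show "\<exists>r'\<in>Uob R. Uar \<xi> r' = Uar \<pi>2 r \<and> Uar \<pi>2 r' = Uar \<xi> r" using T xi_twist_elem[OF r] by blast
  next
    fix r r' assume r: "r \<in> Uob R" and r': "r' \<in> Uob R" and e: "Uar \<pi>2 r = Uar \<xi> r'"
    note S = R_elem_square[OF r] and S' = R_elem_square[OF r']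
    have c1: "Uar p (Uar \<pi>1 r) = Uar p (Uar \<gamma> (Uar \<pi>2 r'))"
      using S(3) e gamma_xi_elem[OF r'] S'(3) by simp
    note RP = rpair_prop[OF S(1) S'(2) c1]
    have c2: "Uar p (Uar \<pi>1 r) = Uar p (Uar \<pi>1 r')" using S(3) e gamma_xi_elem[OF r'] by simp
    have "Uar \<xi> (rpair (Uar \<pi>1 r) (Uar \<pi>2 r')) = Uar \<xi> (rpair (Uar \<pi>1 r) (Uar \<xi> r'))"
      using cocycle_pair[OF S(1) r' c2] by simp
    also have "\<dots> = Uar \<xi> r" using e rpair_eta[OF r] by simp
    finally show "\<exists>r''\<in>Uob R. Uar \<xi> r'' = Uar \<xi> r \<and> Uar \<pi>2 r'' = Uar \<pi>2 r'" using RP by blast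
  qed
qed

lemma quot_exact_image: "exact_image C U \<xi> \<pi>2 quot"
proof -
  have c: "is_coequalizer SetCat (snd U \<xi>) (snd U \<pi>2) (snd U quot)"
    using U_preserves_coeqs xi_pi2_equiv_rel quot_coequalizer by (simp add: preserves_coeq_equiv_rels_def)
  have e1: "snd U \<xi> = (Uob R, Uar \<xi>, Uob X)" using Uar_eq[OF xi_Ar(1)] xi_Ar by simp
  have e2: "snd U \<pi>2 = (Uob R, Uar \<pi>2, Uob X)" using Uar_eq[OF R_parts(3)] R_parts by simp
  have e3: "snd U quot = (Uob X, Uar quot, Uob Aq)" using Uar_eq[OF quot_parts(1)] quot_parts by simp
  have f: "Uar quot \<in> Uob X \<rightarrow>\<^sub>E Uob Aq" "Uar \<xi> \<in> Uob R \<rightarrow>\<^sub>E Uob X" "Uar \<pi>2 \<in> Uob R \<rightarrow>\<^sub>E Uob X"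
    using Uar_SetCat[OF quot_parts(1)] Uar_SetCat[OF xi_Ar(1)] Uar_SetCat[OF R_parts(3)] quot_parts xi_Ar R_parts by auto
  have "is_pullback SetCat (Uob X, Uar quot, Uob Aq) (Uob X, Uar quot, Uob Aq) (Uob R) (Uob R, Uar \<xi>, Uob X) (Uob R, Uar \<pi>2, Uob X)"
  proof (rule SetCat_pullbackI[OF f(1) f(1) f(2) f(3)])
    show "\<And>z. z \<in> Uob R \<Longrightarrow> Uar quot (Uar \<xi> z) = Uar quot (Uar \<pi>2 z)" by (rule quot_elem)
    show "\<And>z z'. z \<in> Uob R \<Longrightarrow> z' \<in> Uob R \<Longrightarrow> Uar \<xi> z = Uar \<xi> z' \<Longrightarrow> Uar \<pi>2 z = Uar \<pi>2 z' \<Longrightarrow> z = z'"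
    proof -
      fix z z' assume z: "z \<in> Uob R" "z' \<in> Uob R" "Uar \<xi> z = Uar \<xi> z'" "Uar \<pi>2 z = Uar \<pi>2 z'"
      show "z = z'" using R_elem_ext[OF z(1,2)] gamma_xi_elem[OF z(1)] gamma_xi_elem[OF z(2)] z(3,4) by simp
    qed
    show "\<And>x y. x \<in> Uob X \<Longrightarrow> y \<in> Uob X \<Longrightarrow> Uar quot x = Uar quot y \<Longrightarrow> \<exists>z\<in>Uob R. Uar \<xi> z = x \<and> Uar \<pi>2 z = y"
      by (rule quot_kernel_elem)
  qed
  then have "is_pullback SetCat (snd U quot) (snd U quot) (Uob (Dom C \<xi>)) (snd U \<xi>) (snd U \<pi>2)"
    using e1 e2 e3 xi_Ar by simp
  then show ?thesis unfolding exact_image_def using c by simp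
qed

lemma quot_in_P: "quot \<in> P"
  by (rule P_closed[rule_format, of \<xi> \<pi>2 quot]) (simp add: quot_coequalizer quot_exact_image xi_in_P Pb2_in_P[OF delta_Ar(1,2)])

definition "alpha = (THE u. u \<in> hom C Aq B \<and> Cmp C u quot = \<delta>)"

lemma alpha_prop: "alpha \<in> hom C Aq B" "Cmp C alpha quot = \<delta>"
proof -
  have "\<forall>k\<in>Ar C. Dom C k = Cod C \<xi> \<and> Cmp C k \<xi> = Cmp C k \<pi>2 \<longrightarrow>
      (\<exists>!u. u \<in> hom C (Cod C quot) (Cod C k) \<and> Cmp C u quot = k)"
    using quot_coequalizer by (simp add: is_coequalizer_def)
  from bspec[OF this delta_Ar(1)] have "\<exists>!u. u \<in> hom C Aq B \<and> Cmp C u quot = \<delta>"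
    using delta_Ar xi_Ar delta_xi delta_pi2 by simp
  from theI'[OF this] show "alpha \<in> hom C Aq B" "Cmp C alpha quot = \<delta>" unfolding alpha_def by auto
qed

lemma alpha_Ar: "alpha \<in> Ar C" "Cod C alpha = B" "Dom C alpha = Aq" using alpha_prop by (auto simp: hom_def)

abbreviation "fib_quot \<equiv> fibmap C p \<delta> alpha quot"

lemma quot_hom: "quot \<in> hom C (Dom C \<delta>) (Dom C alpha)" using quot_parts alpha_Ar delta_Ar by simp

lemma fib_quot_prop: "fib_quot \<in> hom C R (PbO alpha)" "Cmp C (Pb1 alpha) fib_quot = \<pi>1" "Cmp C (Pb2 alpha) fib_quot = Cmp C quot \<pi>2"
  using fibmap_prop[OF delta_Ar(1,2) alpha_Ar(1,2) quot_hom alpha_prop(2)] by auto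

lemma fib_quot_elem:
  assumes v: "v \<in> Uob R"
  shows "Uar fib_quot v \<in> Uob (PbO alpha)" "Uar (Pb1 alpha) (Uar fib_quot v) = Uar \<pi>1 v" "Uar (Pb2 alpha) (Uar fib_quot v) = Uar quot (Uar \<pi>2 v)"
  using fibmap_elem[OF delta_Ar(1,2) alpha_Ar(1,2) quot_hom alpha_prop(2) v] by auto

lemma alpha_homs: "Pb1 alpha \<in> hom C (PbO alpha) E" "Pb2 alpha \<in> hom C (PbO alpha) Aq" "PbO alpha \<in> Ob C"
  using base_change_parts[OF alpha_Ar(1,2)] alpha_Ar by (auto simp: hom_def)

lemma fib_quot_pullback: "is_pullback C quot (Pb2 alpha) R \<pi>2 fib_quot"
  using pullback_pasting[OF base_change_pullback[OF delta_Ar(1,2)] base_change_pullback[OF alpha_Ar(1,2)]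
      quot_hom alpha_prop(2) fib_quot_prop] .

lemma fib_quot_in_P: "fib_quot \<in> P"
  using P_pullback_stable quot_in_P fib_quot_pullback unfolding pullback_stable_def by blast

lemma fib_quot_regular_epi: "regular_epi C fib_quot" using fib_quot_in_P P_regular_epi by blast

lemma fib_quot_Ar: "fib_quot \<in> Ar C" "Dom C fib_quot = R" "Cod C fib_quot = PbO alpha" using fib_quot_prop by (auto simp: hom_def)

lemma psi_exists: "\<exists>u\<in>hom C (PbO alpha) X. Cmp C u fib_quot = \<xi>"
proof -
  have "\<exists>u\<in>hom C (Cod C fib_quot) (Cod C \<xi>). Cmp C u fib_quot = \<xi>"
  proof (rule regular_epi_descend[OF fib_quot_regular_epi xi_Ar(1)])
    show "Dom C \<xi> = Dom C fib_quot" using xi_Ar fib_quot_Ar by simp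
    fix v v' assume v: "v \<in> Uob (Dom C fib_quot)" and v': "v' \<in> Uob (Dom C fib_quot)" and e: "Uar fib_quot v = Uar fib_quot v'"
    have vR: "v \<in> Uob R" "v' \<in> Uob R" using v v' fib_quot_Ar by auto
    note M = fib_quot_elem[OF vR(1)] and M' = fib_quot_elem[OF vR(2)]
    have e1: "Uar \<pi>1 v = Uar \<pi>1 v'" using M M' e by metis
    have e2: "Uar quot (Uar \<pi>2 v) = Uar quot (Uar \<pi>2 v')" using M M' e by metis
    note S = R_elem_square[OF vR(1)] and S' = R_elem_square[OF vR(2)]
    obtain r where r: "r \<in> Uob R" "Uar \<xi> r = Uar \<pi>2 v" "Uar \<pi>2 r = Uar \<pi>2 v'" using quot_kernel_elem[OF S(2) S'(2) e2] by blast
    have c: "Uar p (Uar \<pi>1 v) = Uar p (Uar \<pi>1 r)" using gamma_xi_elem[OF r(1)] r(2) S(3) by simp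
    have "Uar \<xi> v = Uar \<xi> (rpair (Uar \<pi>1 v) (Uar \<pi>2 v))" using rpair_eta[OF vR(1)] by simp
    also have "\<dots> = Uar \<xi> (rpair (Uar \<pi>1 v) (Uar \<xi> r))" using r by simp
    also have "\<dots> = Uar \<xi> (rpair (Uar \<pi>1 v) (Uar \<pi>2 r))" using cocycle_pair[OF S(1) r(1) c] .
    also have "\<dots> = Uar \<xi> v'" using r(3) e1 rpair_eta[OF vR(2)] by simp
    finally show "Uar \<xi> v = Uar \<xi> v'" .
  qed
  then show ?thesis using fib_quot_Ar xi_Ar by simp
qed

definition "psi = (SOME u. u \<in> hom C (PbO alpha) X \<and> Cmp C u fib_quot = \<xi>)"

lemma psi_prop: "psi \<in> hom C (PbO alpha) X" "Cmp C psi fib_quot = \<xi>"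
proof -
  have "\<exists>u. u \<in> hom C (PbO alpha) X \<and> Cmp C u fib_quot = \<xi>" using psi_exists by blast
  from someI_ex[OF this] show "psi \<in> hom C (PbO alpha) X" "Cmp C psi fib_quot = \<xi>" unfolding psi_def by auto
qed

lemma psi_elem:
  assumes v: "v \<in> Uob R" shows "Uar psi (Uar fib_quot v) = Uar \<xi> v"
proof -
  have "Uar (Cmp C psi fib_quot) v = Uar \<xi> v" using psi_prop(2) by simp
  then show ?thesis using Uar_Cmp_hom[OF fib_quot_prop(1) psi_prop(1) v] by simp
qed

lemma fib_quot_elem_surj:
  assumes z: "z \<in> Uob (PbO alpha)" shows "\<exists>v\<in>Uob R. Uar fib_quot v = z"
  using regular_epi_elem_surj[OF fib_quot_regular_epi, of z] z fib_quot_Ar by simp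

definition "phi = (THE u. u \<in> hom C X (PbO alpha) \<and> Cmp C (Pb1 alpha) u = \<gamma> \<and> Cmp C (Pb2 alpha) u = quot)"

lemma phi_prop: "phi \<in> hom C X (PbO alpha)" "Cmp C (Pb1 alpha) phi = \<gamma>" "Cmp C (Pb2 alpha) phi = quot"
proof -
  have q1: "\<gamma> \<in> hom C X (Dom C p)" using descent_data_facts(2) by simp
  have q2: "quot \<in> hom C X (Dom C alpha)" using quot_parts(3) alpha_Ar by simp
  have eq: "Cmp C p \<gamma> = Cmp C alpha quot" using alpha_prop(2) by simp
  have "\<exists>!u. u \<in> hom C X (PbO alpha) \<and> Cmp C (Pb1 alpha) u = \<gamma> \<and> Cmp C (Pb2 alpha) u = quot"
    by (rule pullback_univ[OF base_change_pullback[OF alpha_Ar(1,2)] q1 q2 eq])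
  from theI'[OF this] show "phi \<in> hom C X (PbO alpha)" "Cmp C (Pb1 alpha) phi = \<gamma>" "Cmp C (Pb2 alpha) phi = quot"
    unfolding phi_def by auto
qed

lemma phi_elem:
  assumes x: "x \<in> Uob X"
  shows "Uar phi x \<in> Uob (PbO alpha)" "Uar (Pb1 alpha) (Uar phi x) = Uar \<gamma> x" "Uar (Pb2 alpha) (Uar phi x) = Uar quot x"
proof -
  show "Uar phi x \<in> Uob (PbO alpha)" using Uar_in_hom[OF phi_prop(1) x] .
  have "Uar (Cmp C (Pb1 alpha) phi) x = Uar \<gamma> x" "Uar (Cmp C (Pb2 alpha) phi) x = Uar quot x" using phi_prop by simp_all
  then show "Uar (Pb1 alpha) (Uar phi x) = Uar \<gamma> x" "Uar (Pb2 alpha) (Uar phi x) = Uar quot x"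
    using Uar_Cmp_hom[OF phi_prop(1) alpha_homs(1) x] Uar_Cmp_hom[OF phi_prop(1) alpha_homs(2) x] by simp_all
qed

lemma psi_phi: "Cmp C psi phi = Idt C X"
proof (rule Uar_ext[OF Cmp_in_hom[OF phi_prop(1) psi_prop(1)] Idt_in_hom[OF descent_data_facts(1)]])
  fix x assume x: "x \<in> Uob X"
  note D = diag_elem[OF x]
  note M = fib_quot_elem[OF D(1)]
  have "Uar phi x = Uar fib_quot (Uar dg x)"
    using base_change_elem_unique[OF alpha_Ar(1,2) phi_elem(1)[OF x] M(1)] phi_elem[OF x] M D by simp
  then have "Uar psi (Uar phi x) = x" using psi_elem[OF D(1)] xi_diag_elem[OF x] by simp
  then show "Uar (Cmp C psi phi) x = Uar (Idt C X) x"
    using Uar_Cmp_hom[OF phi_prop(1) psi_prop(1) x] Uar_Idt[OF descent_data_facts(1) x] by simp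
qed

lemma phi_psi: "Cmp C phi psi = Idt C (PbO alpha)"
proof (rule Uar_ext[OF Cmp_in_hom[OF psi_prop(1) phi_prop(1)] Idt_in_hom[OF alpha_homs(3)]])
  fix z assume z: "z \<in> Uob (PbO alpha)"
  obtain v where v: "v \<in> Uob R" "Uar fib_quot v = z" using fib_quot_elem_surj[OF z] by blast
  note M = fib_quot_elem[OF v(1)]
  have xv: "Uar \<xi> v \<in> Uob X" using xi_elem_in[OF v(1)] .
  have "Uar phi (Uar psi z) = z"
    using base_change_elem_unique[OF alpha_Ar(1,2) phi_elem(1)[OF xv] z] phi_elem[OF xv] psi_elem[OF v(1)] v M gamma_xi_elem[OF v(1)] quot_elem[OF v(1)]
    by simp
  then show "Uar (Cmp C phi psi) z = Uar (Idt C (PbO alpha)) z"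
    using Uar_Cmp_hom[OF psi_prop(1) phi_prop(1) z] Uar_Idt[OF alpha_homs(3) z] by simp
qed

lemma gamma_psi: "Cmp C \<gamma> psi = Pb1 alpha"
proof (rule Uar_ext[OF Cmp_in_hom[OF psi_prop(1) descent_data_facts(2)] alpha_homs(1)])
  fix z assume z: "z \<in> Uob (PbO alpha)"
  obtain v where v: "v \<in> Uob R" "Uar fib_quot v = z" using fib_quot_elem_surj[OF z] by blast
  show "Uar (Cmp C \<gamma> psi) z = Uar (Pb1 alpha) z"
    using Uar_Cmp_hom[OF psi_prop(1) descent_data_facts(2) z] psi_elem[OF v(1)] v fib_quot_elem[OF v(1)] gamma_xi_elem[OF v(1)] by simp
qed

lemma psi_descent_morphism: "is_descent_morphism C p (PbO alpha, Pb1 alpha, K_xi alpha) psi (X, \<gamma>, \<xi>)"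
proof -
  let ?d = "Cmp C p (Pb1 alpha)"
  note A = base_change_parts[OF alpha_Ar(1,2)]
  have d: "?d \<in> Ar C" "Cod C ?d = B" "Dom C ?d = PbO alpha" using A alpha_Ar by auto
  have hf: "psi \<in> hom C (Dom C ?d) (Dom C \<delta>)" using psi_prop(1) d delta_Ar by simp
  have ef: "Cmp C \<delta> psi = ?d"
    using Cmp_assoc[of psi \<gamma> p] psi_prop(1) gamma_Ar gamma_psi by (simp add: hom_def)
  let ?G = "fibmap C p ?d \<delta> psi"
  note G = fibmap_prop[OF d(1,2) delta_Ar(1,2) hf ef]
  have Gh: "?G \<in> hom C (PbO ?d) R" using G by simp
  have Kh: "K_xi alpha \<in> hom C (PbO ?d) (PbO alpha)" using K_xi_prop(1)[OF alpha_Ar(1,2)] .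
  have "Cmp C psi (K_xi alpha) = Cmp C \<xi> ?G"
  proof (rule Uar_ext[OF Cmp_in_hom[OF Kh psi_prop(1)] Cmp_in_hom[OF Gh descent_data_facts(3)]])
    fix t assume t: "t \<in> Uob (PbO ?d)"
    note T = base_change_elem_square[OF d(1,2) t]
    have zt: "Uar (Pb2 ?d) t \<in> Uob (PbO alpha)" using T(2) d by simp
    obtain v where v: "v \<in> Uob R" "Uar fib_quot v = Uar (Pb2 ?d) t" using fib_quot_elem_surj[OF zt] by blast
    note M = fib_quot_elem[OF v(1)] and S = R_elem_square[OF v(1)]
    have "Uar ?d (Uar (Pb2 ?d) t) = Uar p (Uar (Pb1 alpha) (Uar (Pb2 ?d) t))" using Uar_Cmp[of "Pb1 alpha" p] A zt by simp
    then have pe: "Uar p (Uar (Pb1 ?d) t) = Uar p (Uar \<pi>1 v)" using T(3) v M by simp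
    note K = K_xi_elem[OF alpha_Ar(1,2) t]
    have c1: "Uar p (Uar (Pb1 ?d) t) = Uar p (Uar \<gamma> (Uar \<pi>2 v))" using pe S(3) by simp
    note V' = rpair_prop[OF T(1) S(2) c1]
    have "Uar fib_quot (rpair (Uar (Pb1 ?d) t) (Uar \<pi>2 v)) = Uar (K_xi alpha) t"
      using base_change_elem_unique[OF alpha_Ar(1,2) fib_quot_elem(1)[OF V'(1)] K(1)] fib_quot_elem[OF V'(1)] V' K v M by simp
    then have lhs: "Uar psi (Uar (K_xi alpha) t) = Uar \<xi> (rpair (Uar (Pb1 ?d) t) (Uar \<pi>2 v))"
      using psi_elem[OF V'(1)] by simp
    note GE = fibmap_elem[OF d(1,2) delta_Ar(1,2) hf ef t]
    have "Uar ?G t = rpair (Uar (Pb1 ?d) t) (Uar \<xi> v)"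
      using pb_elem_eq[OF delta_Ar(1,2) GE(1)] GE v psi_elem[OF v(1)] by simp
    then have rhs: "Uar \<xi> (Uar ?G t) = Uar \<xi> (rpair (Uar (Pb1 ?d) t) (Uar \<pi>2 v))"
      using cocycle_pair[OF T(1) v(1) pe] by simp
    show "Uar (Cmp C psi (K_xi alpha)) t = Uar (Cmp C \<xi> ?G) t"
      using Uar_Cmp_hom[OF Kh psi_prop(1) t] Uar_Cmp_hom[OF Gh descent_data_facts(3) t] lhs rhs by simp
  qed
  then show ?thesis unfolding is_descent_morphism_def using psi_prop(1) gamma_psi by simp
qed

lemma phi_descent_morphism: "is_descent_morphism C p (X, \<gamma>, \<xi>) phi (PbO alpha, Pb1 alpha, K_xi alpha)"
proof -
  let ?d = "Cmp C p (Pb1 alpha)"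
  note A = base_change_parts[OF alpha_Ar(1,2)]
  have d: "?d \<in> Ar C" "Cod C ?d = B" "Dom C ?d = PbO alpha" using A alpha_Ar by auto
  have hf: "phi \<in> hom C (Dom C \<delta>) (Dom C ?d)" using phi_prop(1) d delta_Ar by simp
  have ef: "Cmp C ?d phi = \<delta>"
    using Cmp_assoc[of phi "Pb1 alpha" p] phi_prop A by (simp add: hom_def)
  let ?H = "fibmap C p \<delta> ?d phi"
  note H = fibmap_prop[OF delta_Ar(1,2) d(1,2) hf ef]
  have Hh: "?H \<in> hom C R (PbO ?d)" using H by simp
  have Kh: "K_xi alpha \<in> hom C (PbO ?d) (PbO alpha)" using K_xi_prop(1)[OF alpha_Ar(1,2)] .
  have "Cmp C phi \<xi> = Cmp C (K_xi alpha) ?H"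
  proof (rule Uar_ext[OF Cmp_in_hom[OF descent_data_facts(3) phi_prop(1)] Cmp_in_hom[OF Hh Kh]])
    fix v assume v: "v \<in> Uob R"
    have xv: "Uar \<xi> v \<in> Uob X" using xi_elem_in[OF v] .
    note HE = fibmap_elem[OF delta_Ar(1,2) d(1,2) hf ef v]
    note K = K_xi_elem[OF alpha_Ar(1,2) HE(1)]
    note S = R_elem_square[OF v]
    have "Uar phi (Uar \<xi> v) = Uar (K_xi alpha) (Uar ?H v)"
      using base_change_elem_unique[OF alpha_Ar(1,2) phi_elem(1)[OF xv] K(1)] phi_elem[OF xv] K HE gamma_xi_elem[OF v] quot_elem[OF v]
        phi_elem[OF S(2)] by simp
    then show "Uar (Cmp C phi \<xi>) v = Uar (Cmp C (K_xi alpha) ?H) v"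
      using Uar_Cmp_hom[OF descent_data_facts(3) phi_prop(1) v] Uar_Cmp_hom[OF Hh Kh v] by simp
  qed
  then show ?thesis unfolding is_descent_morphism_def using phi_prop by simp
qed

lemma in_essential_image_of_K: "\<exists>a\<in>Ob (Slice C B). \<exists>\<theta>. \<theta> \<in> hom (Des C p) (fst (Kp C p) a) (X, \<gamma>, \<xi>) \<and> iso (Des C p) \<theta>"
proof -
  let ?a = "(Aq, alpha)"
  have aob: "?a \<in> Ob (Slice C B)" using alpha_prop(1) quot_parts by (simp add: Slice_simps)
  have Ka: "fst (Kp C p) ?a = (PbO alpha, Pb1 alpha, K_xi alpha)" by (simp add: Kp_def K_obj_eq)
  let ?Ka = "(PbO alpha, Pb1 alpha, K_xi alpha)" and ?D = "(X, \<gamma>, \<xi>)"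
  let ?th = "(?Ka, psi, ?D)" and ?g = "(?D, phi, ?Ka)"
  have kd: "is_descent_data C p ?Ka" using K_descent_data[OF alpha_Ar(1,2)] .
  have th: "?th \<in> hom (Des C p) ?Ka ?D" using kd descent_data psi_descent_morphism by (simp add: hom_def Des_simps)
  have g: "?g \<in> hom (Des C p) ?D ?Ka" using kd descent_data phi_descent_morphism by (simp add: hom_def Des_simps)
  have "iso (Des C p) ?th"
    unfolding iso_def using th g phi_psi psi_phi by (auto simp: hom_def Des_simps)
  then have "?th \<in> hom (Des C p) (fst (Kp C p) ?a) ?D \<and> iso (Des C p) ?th" using th Ka by simp
  then show ?thesis by (rule bexI[OF exI aob])
qed

end

context descent_class_member
begin

lemma K_essentially_surjective:
  assumes "D \<in> Ob (Des C p)"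
  shows "\<exists>a\<in>Ob (Slice C B). \<exists>\<theta>. \<theta> \<in> hom (Des C p) (fst (Kp C p) a) D \<and> iso (Des C p) \<theta>"
proof -
  obtain X \<gamma> \<xi> where D: "D = (X, \<gamma>, \<xi>)" by (cases D)
  have "is_descent_data C p (X, \<gamma>, \<xi>)" using assms D by (simp add: Des_simps)
  then interpret descent_datum_in_class C U P p X \<gamma> \<xi> by unfold_locales
  show ?thesis using in_essential_image_of_K D by simp
qed

lemma effective_descent: "effective_descent C p"
  using fully_faithful_essentially_surjective.K_is_equivalence[OF fully_faithful_essentially_surjective.intro,
      OF slice_is_category Des_is_category K_functor K_fully_faithful K_essentially_surjective]
  by (simp add: effective_descent_def)

end

theorem theorem6p1:
  fixes C :: "('o, 'm) category"
    and U :: "('o, 'm, 'u set, 'u set \<times> ('u \<Rightarrow> 'u) \<times> 'u set) ftor"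
    and P :: "'m set"
  assumes "is_category C"
    and "has_pullbacks C"
    and "has_coeq_of_equiv_rels C"
    and "is_functor C SetCat U"
    and "faithful C U"
    and "preserves_pullbacks C SetCat U"
    and "preserves_coeq_equiv_rels C SetCat U"
    and "P \<subseteq> Ar C"
    and "\<forall>h\<in>P. regular_epi C h"
    and "pullback_stable C P"
    and "\<forall>f g h. is_coequalizer C f g h \<and> exact_image C U f g h \<and> f \<in> P \<and> g \<in> P \<longrightarrow> h \<in> P"
  shows "\<forall>p\<in>P. effective_descent C p"
proof
  fix p assume "p \<in> P"
  moreover from this have "p \<in> Ar C" using assms(8) by blast
  ultimately interpret descent_class_member C U P p
    using assms by unfold_locales
  show "effective_descent C p" by (rule effective_descent)
qed

end
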